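(* Let $(M,g)$ be a space-time of dimension $n>3$ admitting a time-like unit vector field $u$ ($u_ku^k=-1$) with $\nabla_i u_j=\varphi\,(g_{ij}+u_iu_j)$ for some scalar field $\varphi$. Let $C_{iklm}$ be the Weyl tensor, $E_{kl}=u^ju^mC_{jklm}$ its electric part, and define $$\Gamma_{iklm} = C_{iklm} - \frac{n-2}{n-3}\big(u_iu_mE_{kl}-u_ku_mE_{il}-u_iu_lE_{km}+u_ku_lE_{im}\big) - \frac{1}{n-3}\big(g_{im}E_{kl}-g_{km}E_{il}-g_{il}E_{km}+g_{kl}E_{im}\big).$$ Then $\Gamma_{jklm}$ is a generalized curvature tensor, it is totally trace-less, and $$u^m\Gamma_{jklm}=0,\qquad u^p\nabla_p\Gamma_{jklm} = -2\varphi\,\Gamma_{jklm}.$$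
   Context: A generalized curvature tensor is a 4-tensor with the algebraic symmetries of the Riemann tensor: antisymmetry in the first pair and in the second pair of indices, symmetry under exchange of the two pairs, and the first Bianchi identity (cyclic sum over three indices vanishes). Totally trace-less means every contraction of two indices with $g$ vanishes. $\nabla$ is the Levi-Civita connection; indices are raised and lowered with $g$. *)

theory Defs
  imports "HOL-Analysis.Analysis"
begin

text \<open>Local coordinate formalization: a chart domain U (open subset of real^'n),
 metric components g x $ i $ j, vector field components u x $ k.\<close>

definition pder :: "'n::finite \<Rightarrow> (real^'n \<Rightarrow> real) \<Rightarrow> real^'n \<Rightarrow> real" where
  "pder i f x = deriv (\<lambda>t. f (x + t *\<^sub>R axis i 1)) 0"

fun pders :: "'n::finite list \<Rightarrow> (real^'n \<Rightarrow> real) \<Rightarrow> real^'n \<Rightarrow> real" where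
  "pders [] f = f"
| "pders (i # is) f = pder i (pders is f)"

definition smooth_fn :: "(real^'n::finite) set \<Rightarrow> (real^'n \<Rightarrow> real) \<Rightarrow> bool" where
  "smooth_fn U f \<longleftrightarrow> (\<forall>is. pders is f differentiable_on U)"

definition bform :: "real^'n::finite^'n \<Rightarrow> real^'n \<Rightarrow> real^'n \<Rightarrow> real" where
  "bform G v w = (\<Sum>i\<in>UNIV. \<Sum>j\<in>UNIV. G$i$j * v$i * w$j)"

text \<open>Lorentzian signature (-,+,...,+): symmetric, some timelike vector, and a
 positive definite subspace of dimension n-1.\<close>
definition lorentzian :: "real^'n::finite^'n \<Rightarrow> bool" where
  "lorentzian G \<longleftrightarrow> (\<forall>i j. G$i$j = G$j$i) \<and> (\<exists>v. bform G v v < 0) \<and>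
     (\<exists>W. subspace W \<and> dim W = CARD('n) - 1 \<and> (\<forall>w\<in>W. w \<noteq> 0 \<longrightarrow> bform G w w > 0))"

definition ginv :: "(real^'n::finite \<Rightarrow> real^'n^'n) \<Rightarrow> real^'n \<Rightarrow> 'n \<Rightarrow> 'n \<Rightarrow> real" where
  "ginv g x i j = matrix_inv (g x) $ i $ j"

definition christ :: "(real^'n::finite \<Rightarrow> real^'n^'n) \<Rightarrow> real^'n \<Rightarrow> 'n \<Rightarrow> 'n \<Rightarrow> 'n \<Rightarrow> real" where
  "christ g x k i j = (1/2) * (\<Sum>l\<in>UNIV. ginv g x k l *
     (pder i (\<lambda>y. g y $ j $ l) x + pder j (\<lambda>y. g y $ i $ l) x - pder l (\<lambda>y. g y $ i $ j) x))"

definition riem_up :: "(real^'n::finite \<Rightarrow> real^'n^'n) \<Rightarrow> real^'n \<Rightarrow> 'n \<Rightarrow> 'n \<Rightarrow> 'n \<Rightarrow> 'n \<Rightarrow> real" where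
  "riem_up g x a b c d = pder c (\<lambda>y. christ g y a d b) x - pder d (\<lambda>y. christ g y a c b) x
     + (\<Sum>e\<in>UNIV. christ g x a c e * christ g x e d b - christ g x a d e * christ g x e c b)"

definition riem :: "(real^'n::finite \<Rightarrow> real^'n^'n) \<Rightarrow> real^'n \<Rightarrow> 'n \<Rightarrow> 'n \<Rightarrow> 'n \<Rightarrow> 'n \<Rightarrow> real" where
  "riem g x a b c d = (\<Sum>e\<in>UNIV. g x $ a $ e * riem_up g x e b c d)"

definition ricci :: "(real^'n::finite \<Rightarrow> real^'n^'n) \<Rightarrow> real^'n \<Rightarrow> 'n \<Rightarrow> 'n \<Rightarrow> real" where
  "ricci g x b d = (\<Sum>a\<in>UNIV. riem_up g x a b a d)"

definition scal :: "(real^'n::finite \<Rightarrow> real^'n^'n) \<Rightarrow> real^'n \<Rightarrow> real" where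
  "scal g x = (\<Sum>b\<in>UNIV. \<Sum>d\<in>UNIV. ginv g x b d * ricci g x b d)"

definition weyl :: "(real^'n::finite \<Rightarrow> real^'n^'n) \<Rightarrow> real^'n \<Rightarrow> 'n \<Rightarrow> 'n \<Rightarrow> 'n \<Rightarrow> 'n \<Rightarrow> real" where
  "weyl g x a b c d =
     (let n = real CARD('n); G = g x in
      riem g x a b c d
      - 1 / (n - 2) * (G$a$c * ricci g x b d - G$a$d * ricci g x b c
                       - G$b$c * ricci g x a d + G$b$d * ricci g x a c)
      + scal g x / ((n - 1) * (n - 2)) * (G$a$c * G$b$d - G$a$d * G$b$c))"

definition lower :: "(real^'n::finite \<Rightarrow> real^'n^'n) \<Rightarrow> (real^'n \<Rightarrow> real^'n) \<Rightarrow> real^'n \<Rightarrow> 'n \<Rightarrow> real" where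
  "lower g u x j = (\<Sum>k\<in>UNIV. g x $ j $ k * u x $ k)"

definition cov_der1 :: "(real^'n::finite \<Rightarrow> real^'n^'n) \<Rightarrow> (real^'n \<Rightarrow> 'n \<Rightarrow> real) \<Rightarrow> real^'n \<Rightarrow> 'n \<Rightarrow> 'n \<Rightarrow> real" where
  "cov_der1 g w x i j = pder i (\<lambda>y. w y j) x - (\<Sum>k\<in>UNIV. christ g x k i j * w x k)"

definition cov_der4 :: "(real^'n::finite \<Rightarrow> real^'n^'n) \<Rightarrow> (real^'n \<Rightarrow> 'n \<Rightarrow> 'n \<Rightarrow> 'n \<Rightarrow> 'n \<Rightarrow> real)
     \<Rightarrow> real^'n \<Rightarrow> 'n \<Rightarrow> 'n \<Rightarrow> 'n \<Rightarrow> 'n \<Rightarrow> 'n \<Rightarrow> real" where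
  "cov_der4 g T x p j k l m = pder p (\<lambda>y. T y j k l m) x
     - (\<Sum>q\<in>UNIV. christ g x q p j * T x q k l m + christ g x q p k * T x j q l m
                 + christ g x q p l * T x j k q m + christ g x q p m * T x j k l q)"

definition electric :: "(real^'n::finite \<Rightarrow> real^'n^'n) \<Rightarrow> (real^'n \<Rightarrow> real^'n) \<Rightarrow> real^'n \<Rightarrow> 'n \<Rightarrow> 'n \<Rightarrow> real" where
  "electric g u x k l = (\<Sum>j\<in>UNIV. \<Sum>m\<in>UNIV. u x $ j * u x $ m * weyl g x j k l m)"

definition GammaT :: "(real^'n::finite \<Rightarrow> real^'n^'n) \<Rightarrow> (real^'n \<Rightarrow> real^'n) \<Rightarrow> real^'n \<Rightarrow> 'n \<Rightarrow> 'n \<Rightarrow> 'n \<Rightarrow> 'n \<Rightarrow> real" where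
  "GammaT g u x i k l m =
     (let n = real CARD('n); G = g x; E = electric g u x; v = lower g u x in
      weyl g x i k l m
      - (n - 2) / (n - 3) * (v i * v m * E k l - v k * v m * E i l - v i * v l * E k m + v k * v l * E i m)
      - 1 / (n - 3) * (G$i$m * E k l - G$k$m * E i l - G$i$l * E k m + G$k$l * E i m))"

definition gen_curv :: "('n \<Rightarrow> 'n \<Rightarrow> 'n \<Rightarrow> 'n \<Rightarrow> real) \<Rightarrow> bool" where
  "gen_curv T \<longleftrightarrow> (\<forall>i k l m.
      T i k l m = - T k i l m \<and> T i k l m = - T i k m l \<and> T i k l m = T l m i k
      \<and> T i k l m + T k l i m + T l i k m = 0)"

definition totally_traceless :: "real^'n::finite^'n \<Rightarrow> ('n \<Rightarrow> 'n \<Rightarrow> 'n \<Rightarrow> 'n \<Rightarrow> real) \<Rightarrow> bool" where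
  "totally_traceless G T \<longleftrightarrow> (let H = matrix_inv G in \<forall>p q.
      (\<Sum>a\<in>UNIV. \<Sum>b\<in>UNIV. H$a$b * T a b p q) = 0 \<and>
      (\<Sum>a\<in>UNIV. \<Sum>b\<in>UNIV. H$a$b * T a p b q) = 0 \<and>
      (\<Sum>a\<in>UNIV. \<Sum>b\<in>UNIV. H$a$b * T a p q b) = 0 \<and>
      (\<Sum>a\<in>UNIV. \<Sum>b\<in>UNIV. H$a$b * T p a b q) = 0 \<and>
      (\<Sum>a\<in>UNIV. \<Sum>b\<in>UNIV. H$a$b * T p a q b) = 0 \<and>
      (\<Sum>a\<in>UNIV. \<Sum>b\<in>UNIV. H$a$b * T p q a b) = 0)"

end

theory Submission
  imports Defs
begin

text \<open>Write \<open>v = g u\<close> and \<open>h = g + v \<otimes> v\<close> for the metric of the rest space of \<open>u\<close>. The Weyl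
  tensor \<open>C\<close> is a trace-free curvature tensor with \<open>u\<^sup>m C\<^sub>i\<^sub>k\<^sub>l\<^sub>m = v\<^sub>k E\<^sub>i\<^sub>l - v\<^sub>i E\<^sub>k\<^sub>l\<close>, so the two
  Kulkarni--Nomizu corrections \<open>(v \<otimes> v) \<owedge> E\<close> and \<open>g \<owedge> E\<close> in \<open>\<Gamma>\<close> keep the symmetries and
  trace-freeness while cancelling the contraction with \<open>u\<close>. For the derivative, concircularity
  means \<open>\<nabla>v = \<phi> h\<close>, and the Ricci identity gives \<open>u\<^sup>k R\<^sub>k\<^sub>c\<^sub>a\<^sub>b = h\<^sub>a\<^sub>c X\<^sub>b - h\<^sub>b\<^sub>c X\<^sub>a\<close> with
  \<open>X = d\<phi> - \<phi>\<^sup>2 v\<close>. With the second Bianchi identity this shows that \<open>T = u\<^sup>p \<nabla>\<^sub>p \<Gamma> + 2 \<phi> \<Gamma>\<close> is a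
  generalized curvature tensor, orthogonal to \<open>u\<close>, trace-free, and of the form \<open>g \<owedge> A\<close> up to terms
  with a factor \<open>v\<close>. Projecting to the rest space leaves \<open>h \<owedge> A\<close>, whose trace
  \<open>(n - 3) A + (tr A) h\<close> vanishes only for \<open>A = 0\<close> when \<open>n > 3\<close>; hence \<open>T = 0\<close>.\<close>

section \<open>Partial derivatives\<close>

lemma pders_snoc: "pders (is @ [i]) f = pders is (pder i f)"
  by (induction "is") auto

lemma has_real_derivative_along_axis:
  fixes F :: "real^'n::finite \<Rightarrow> real"
  assumes "(F has_derivative D) (at (z + s *\<^sub>R axis i 1))"
  shows "((\<lambda>t. F (z + t *\<^sub>R axis i 1)) has_real_derivative D (axis i 1)) (at s)"
proof -
  have 1: "((\<lambda>t. z + t *\<^sub>R axis i (1::real)) has_derivative (\<lambda>t. t *\<^sub>R axis i 1)) (at s)"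
    by (auto intro!: derivative_eq_intros)
  have "((\<lambda>t. F (z + t *\<^sub>R axis i 1)) has_derivative (\<lambda>t. D (t *\<^sub>R axis i 1))) (at s)"
    using has_derivative_compose[OF 1, of F D] assms by simp
  moreover have "linear D" using assms has_derivative_linear by blast
  ultimately have "((\<lambda>t. F (z + t *\<^sub>R axis i 1)) has_derivative (\<lambda>t. t * D (axis i 1))) (at s)"
    by (simp add: linear_scale)
  moreover have "(\<lambda>t. t * D (axis i 1)) = (*) (D (axis i 1))" by (rule ext) simp
  ultimately show ?thesis
    unfolding has_field_derivative_def by simp
qed

lemma pder_eq_derivative:
  fixes F :: "real^'n::finite \<Rightarrow> real"
  assumes "(F has_derivative D) (at y)"
  shows "pder i F y = D (axis i 1)"
proof -
  have "((\<lambda>t. F (y + t *\<^sub>R axis i 1)) has_real_derivative D (axis i 1)) (at 0)"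
    using has_real_derivative_along_axis[of F D y 0 i] assms by simp
  then show ?thesis unfolding pder_def by (rule DERIV_imp_deriv)
qed

lemma pder_has_real_derivative:
  fixes F :: "real^'n::finite \<Rightarrow> real"
  assumes "F differentiable (at (z + s *\<^sub>R axis i 1))"
  shows "((\<lambda>t. F (z + t *\<^sub>R axis i 1)) has_real_derivative pder i F (z + s *\<^sub>R axis i 1)) (at s)"
proof -
  obtain D where D: "(F has_derivative D) (at (z + s *\<^sub>R axis i 1))"
    using assms unfolding differentiable_def by blast
  show ?thesis using has_real_derivative_along_axis[OF D] pder_eq_derivative[OF D] by simp
qed

lemma pder_has_real_derivative_0:
  fixes F :: "real^'n::finite \<Rightarrow> real"
  assumes "F differentiable (at y)"
  shows "((\<lambda>t. F (y + t *\<^sub>R axis i 1)) has_real_derivative pder i F y) (at 0)"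
  using pder_has_real_derivative[of F y 0 i] assms by simp

lemma pder_add:
  fixes f h :: "real^'n::finite \<Rightarrow> real"
  assumes "f differentiable (at y)" "h differentiable (at y)"
  shows "pder i (\<lambda>z. f z + h z) y = pder i f y + pder i h y"
  unfolding pder_def[of i "\<lambda>z. f z + h z"]
  by (rule DERIV_imp_deriv) (intro DERIV_add pder_has_real_derivative_0 assms)

lemma pder_diff:
  fixes f h :: "real^'n::finite \<Rightarrow> real"
  assumes "f differentiable (at y)" "h differentiable (at y)"
  shows "pder i (\<lambda>z. f z - h z) y = pder i f y - pder i h y"
  unfolding pder_def[of i "\<lambda>z. f z - h z"]
  by (rule DERIV_imp_deriv) (intro DERIV_diff pder_has_real_derivative_0 assms)

lemma pder_mult:
  fixes f h :: "real^'n::finite \<Rightarrow> real"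
  assumes "f differentiable (at y)" "h differentiable (at y)"
  shows "pder i (\<lambda>z. f z * h z) y = pder i f y * h y + f y * pder i h y"
proof -
  have "((\<lambda>t. f (y + t *\<^sub>R axis i 1) * h (y + t *\<^sub>R axis i 1)) has_real_derivative
     pder i f y * h (y + 0 *\<^sub>R axis i 1) + pder i h y * f (y + 0 *\<^sub>R axis i 1)) (at 0)"
    by (intro DERIV_mult pder_has_real_derivative_0 assms)
  then show ?thesis unfolding pder_def[of i "\<lambda>z. f z * h z"]
    by (auto dest!: DERIV_imp_deriv simp: mult.commute)
qed

lemma pder_const: "pder i (\<lambda>z. c) y = 0"
  unfolding pder_def by simp

lemma pder_cmult:
  fixes f :: "real^'n::finite \<Rightarrow> real"
  assumes "f differentiable (at y)"
  shows "pder i (\<lambda>z. c * f z) y = c * pder i f y"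
  using pder_mult[of "\<lambda>z. c" y f i] assms by (simp add: pder_const)

lemma pder_minus:
  fixes f :: "real^'n::finite \<Rightarrow> real"
  assumes "f differentiable (at y)"
  shows "pder i (\<lambda>z. - f z) y = - pder i f y"
  using pder_diff[of "\<lambda>z. 0" y f i] assms by (simp add: pder_const)

lemma pder_sum:
  fixes F :: "real^'n::finite \<Rightarrow> 'a \<Rightarrow> real"
  assumes "finite A" "\<And>a. a \<in> A \<Longrightarrow> (\<lambda>z. F z a) differentiable (at y)"
  shows "pder i (\<lambda>z. \<Sum>a\<in>A. F z a) y = (\<Sum>a\<in>A. pder i (\<lambda>z. F z a) y)"
  using assms
proof (induction A rule: finite_induct)
  case empty then show ?case by (simp add: pder_const)
next
  case (insert a A)
  have "(\<lambda>z. \<Sum>a\<in>A. F z a) differentiable (at y)"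
    using insert by (intro differentiable_sum) auto
  then show ?case using insert
    by (simp add: pder_add)
qed

lemma pder_mult_const:
  fixes f :: "real^'n::finite \<Rightarrow> real"
  assumes "f differentiable (at y)"
  shows "pder i (\<lambda>z. f z * c) y = pder i f y * c"
  using pder_cmult[OF assms, of i c] by (simp add: mult.commute)

lemma pder_divide_const:
  fixes f :: "real^'n::finite \<Rightarrow> real"
  assumes "f differentiable (at y)"
  shows "pder i (\<lambda>z. f z / c) y = pder i f y / c"
  using pder_cmult[OF assms, of i "1/c"] by simp

lemma pder_inverse:
  fixes f :: "real^'n::finite \<Rightarrow> real"
  assumes "f differentiable (at y)" "f y \<noteq> 0"
  shows "pder i (\<lambda>z. inverse (f z)) y = - pder i f y * (inverse (f y) * inverse (f y))"
proof -
  have "((\<lambda>t. inverse (f (y + t *\<^sub>R axis i 1))) has_real_derivative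
      - (inverse (f (y + 0 *\<^sub>R axis i 1)) * pder i f y * inverse (f (y + 0 *\<^sub>R axis i 1)))) (at 0)"
    by (rule DERIV_inverse') (use assms pder_has_real_derivative_0 in auto)
  then show ?thesis unfolding pder_def[of i "\<lambda>z. inverse (f z)"]
    by (auto dest!: DERIV_imp_deriv simp: ac_simps)
qed

lemma pder_cong_open:
  fixes f h :: "real^'n::finite \<Rightarrow> real"
  assumes "open U" "y \<in> U" "\<And>z. z \<in> U \<Longrightarrow> f z = h z"
  shows "pder i f y = pder i h y"
proof -
  obtain e where e: "e > 0" "ball y e \<subseteq> U" using assms(1,2) openE by blast
  have "eventually (\<lambda>t. f (y + t *\<^sub>R axis i 1) = h (y + t *\<^sub>R axis i 1)) (nhds 0)"
    unfolding eventually_nhds_metric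
  proof (intro exI[of _ e] conjI allI impI)
    fix t :: real assume "dist t 0 < e"
    then have "y + t *\<^sub>R axis i 1 \<in> ball y e" by (simp add: dist_norm)
    then show "f (y + t *\<^sub>R axis i 1) = h (y + t *\<^sub>R axis i 1)" using e assms(3) by blast
  qed (use e in auto)
  then show ?thesis unfolding pder_def by (rule deriv_cong_ev) simp
qed

lemma pders_cong_open:
  fixes f h :: "real^'n::finite \<Rightarrow> real"
  assumes "open U" "\<And>z. z \<in> U \<Longrightarrow> f z = h z" "y \<in> U"
  shows "pders is f y = pders is h y"
  using assms(3)
proof (induction "is" arbitrary: y)
  case Nil then show ?case using assms by simp
next
  case (Cons i "is")
  have "pder i (pders is f) y = pder i (pders is h) y"
    by (rule pder_cong_open[OF assms(1) Cons.prems]) (use Cons.IH in blast)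
  then show ?case by simp
qed

lemma differentiable_cong_open:
  fixes f h :: "real^'n::finite \<Rightarrow> real"
  assumes "open U" "\<And>z. z \<in> U \<Longrightarrow> f z = h z" "y \<in> U" "f differentiable (at y)"
  shows "h differentiable (at y)"
proof -
  obtain e where e: "e > 0" "ball y e \<subseteq> U" using assms(1,3) openE by blast
  have "\<And>x'. dist x' y < e \<Longrightarrow> f x' = h x'"
    using e assms(2) by (metis mem_ball dist_commute subsetD)
  then show ?thesis
    using differentiable_transform_within[of f y UNIV e h] assms(4) e(1) by auto
qed

section \<open>Smooth functions on open sets\<close>

definition smooth_upto :: "(real^'n::finite) set \<Rightarrow> nat \<Rightarrow> (real^'n \<Rightarrow> real) \<Rightarrow> bool" where
  "smooth_upto U n f \<longleftrightarrow> (\<forall>is. length is \<le> n \<longrightarrow> (\<forall>y\<in>U. pders is f differentiable (at y)))"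

lemma smooth_upto_0: "smooth_upto U 0 f \<longleftrightarrow> (\<forall>y\<in>U. f differentiable (at y))"
  unfolding smooth_upto_def by auto

lemma smooth_upto_Suc: "smooth_upto U (Suc n) f \<longleftrightarrow> (\<forall>y\<in>U. f differentiable (at y)) \<and> (\<forall>i. smooth_upto U n (pder i f))"
proof
  assume a: "smooth_upto U (Suc n) f"
  show "(\<forall>y\<in>U. f differentiable (at y)) \<and> (\<forall>i. smooth_upto U n (pder i f))"
  proof (intro conjI allI)
    show "\<forall>y\<in>U. f differentiable (at y)" using a[unfolded smooth_upto_def, rule_format, of "[]"] by simp
    fix i show "smooth_upto U n (pder i f)" unfolding smooth_upto_def
    proof (intro allI impI)
      fix "is" :: "'a list" assume "length is \<le> n"
      then have "length (is @ [i]) \<le> Suc n" by simp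
      then have "\<forall>y\<in>U. pders (is @ [i]) f differentiable (at y)"
        using a[unfolded smooth_upto_def] by blast
      then show "\<forall>y\<in>U. pders is (pder i f) differentiable (at y)" by (simp add: pders_snoc)
    qed
  qed
next
  assume a: "(\<forall>y\<in>U. f differentiable (at y)) \<and> (\<forall>i. smooth_upto U n (pder i f))"
  show "smooth_upto U (Suc n) f" unfolding smooth_upto_def
  proof (intro allI impI)
    fix "is" :: "'a list" assume l: "length is \<le> Suc n"
    show "\<forall>y\<in>U. pders is f differentiable (at y)"
    proof (cases "is" rule: rev_exhaust)
      case Nil then show ?thesis using a by simp
    next
      case (snoc js i)
      then have "length js \<le> n" using l by simp
      then show ?thesis using a snoc unfolding smooth_upto_def by (simp add: pders_snoc)
    qed
  qed
qed

lemma smooth_upto_Suc_D: "smooth_upto U (Suc n) f \<Longrightarrow> smooth_upto U n f"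
  unfolding smooth_upto_def by auto

lemma smooth_upto_cong:
  assumes "open U" "\<And>z. z \<in> U \<Longrightarrow> f z = h z" "smooth_upto U n f"
  shows "smooth_upto U n h"
  unfolding smooth_upto_def
proof (intro allI impI ballI)
  fix "is" :: "'a list" and y assume l: "length is \<le> n" and y: "y \<in> U"
  have "\<And>z. z \<in> U \<Longrightarrow> pders is f z = pders is h z" using pders_cong_open[of U f h _ "is"] assms(1,2) by blast
  moreover have "pders is f differentiable (at y)" using assms(3) l y unfolding smooth_upto_def by blast
  ultimately show "pders is h differentiable (at y)"
    using differentiable_cong_open[OF assms(1), of "pders is f" "pders is h" y] y by blast
qed

lemma smooth_upto_const: "smooth_upto U n (\<lambda>z. c)"
proof (induction n arbitrary: c)
  case 0 then show ?case by (simp add: smooth_upto_0)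
next
  case (Suc n)
  have "pder i (\<lambda>z::real^'a. c) = (\<lambda>z. 0)" for i :: 'a by (rule ext) (simp add: pder_const)
  then show ?case using Suc smooth_upto_0[of U "\<lambda>z. 0"] by (simp add: smooth_upto_Suc)
qed

lemma smooth_upto_add:
  assumes "open U"
  shows "smooth_upto U n f \<Longrightarrow> smooth_upto U n h \<Longrightarrow> smooth_upto U n (\<lambda>z. f z + h z)"
proof (induction n arbitrary: f h)
  case 0 then show ?case by (auto simp: smooth_upto_0)
next
  case (Suc n)
  show ?case unfolding smooth_upto_Suc
  proof (intro conjI allI)
    show "\<forall>y\<in>U. (\<lambda>z. f z + h z) differentiable (at y)" using Suc.prems by (auto simp: smooth_upto_Suc)
    fix i
    have "smooth_upto U n (\<lambda>z. pder i f z + pder i h z)" using Suc by (auto simp: smooth_upto_Suc)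
    then show "smooth_upto U n (pder i (\<lambda>z. f z + h z))"
      by (rule smooth_upto_cong[OF assms, rotated]) (use Suc.prems in \<open>auto simp: smooth_upto_Suc pder_add\<close>)
  qed
qed

lemma smooth_upto_mult:
  assumes "open U"
  shows "smooth_upto U n f \<Longrightarrow> smooth_upto U n h \<Longrightarrow> smooth_upto U n (\<lambda>z. f z * h z)"
proof (induction n arbitrary: f h)
  case 0 then show ?case by (auto simp: smooth_upto_0)
next
  case (Suc n)
  show ?case unfolding smooth_upto_Suc
  proof (intro conjI allI)
    show "\<forall>y\<in>U. (\<lambda>z. f z * h z) differentiable (at y)" using Suc.prems by (auto simp: smooth_upto_Suc)
    fix i
    have f: "smooth_upto U n f" "smooth_upto U n (pder i f)" using Suc.prems(1) smooth_upto_Suc_D smooth_upto_Suc by blast+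
    have h: "smooth_upto U n h" "smooth_upto U n (pder i h)" using Suc.prems(2) smooth_upto_Suc_D smooth_upto_Suc by blast+
    have "smooth_upto U n (\<lambda>z. pder i f z * h z + f z * pder i h z)"
      by (intro smooth_upto_add[OF assms] Suc.IH f h)
    then show "smooth_upto U n (pder i (\<lambda>z. f z * h z))"
      by (rule smooth_upto_cong[OF assms, rotated]) (use Suc.prems in \<open>auto simp: smooth_upto_Suc pder_mult\<close>)
  qed
qed

lemma smooth_upto_inverse:
  assumes "open U"
  shows "smooth_upto U n f \<Longrightarrow> (\<forall>z\<in>U. f z \<noteq> 0) \<Longrightarrow> smooth_upto U n (\<lambda>z. inverse (f z))"
proof (induction n arbitrary: f)
  case 0 then show ?case by (auto simp: smooth_upto_0 intro: differentiable_inverse)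
next
  case (Suc n)
  show ?case unfolding smooth_upto_Suc
  proof (intro conjI allI)
    show "\<forall>y\<in>U. (\<lambda>z. inverse (f z)) differentiable (at y)" using Suc.prems
      by (auto simp: smooth_upto_Suc intro: differentiable_inverse)
    fix i
    have iv: "smooth_upto U n (\<lambda>z. inverse (f z))" using Suc smooth_upto_Suc_D by blast
    have "smooth_upto U n (\<lambda>z. - pder i f z * (inverse (f z) * inverse (f z)))"
    proof -
      have "smooth_upto U n (\<lambda>z. (-1) * pder i f z)"
        using Suc.prems smooth_upto_const by (intro smooth_upto_mult[OF assms]) (auto simp: smooth_upto_Suc)
      moreover have "smooth_upto U n (\<lambda>z. inverse (f z) * inverse (f z))" by (rule smooth_upto_mult[OF assms iv iv])
      ultimately have "smooth_upto U n (\<lambda>z. (-1) * pder i f z * (inverse (f z) * inverse (f z)))"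
        by (rule smooth_upto_mult[OF assms])
      then show ?thesis by simp
    qed
    then show "smooth_upto U n (pder i (\<lambda>z. inverse (f z)))"
      by (rule smooth_upto_cong[OF assms, rotated]) (use Suc.prems in \<open>auto simp: smooth_upto_Suc pder_inverse\<close>)
  qed
qed

lemma smooth_fn_iff_smooth_upto:
  "open U \<Longrightarrow> smooth_fn U f \<longleftrightarrow> (\<forall>n. smooth_upto U n f)"
  unfolding smooth_fn_def smooth_upto_def
  by (auto simp: differentiable_on_eq_differentiable_at)

lemma smooth_fn_differentiable: "open U \<Longrightarrow> smooth_fn U f \<Longrightarrow> y \<in> U \<Longrightarrow> f differentiable (at y)"
  by (metis smooth_fn_iff_smooth_upto smooth_upto_0)

lemma smooth_fn_pder: "open U \<Longrightarrow> smooth_fn U f \<Longrightarrow> smooth_fn U (pder i f)"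
  by (metis smooth_fn_iff_smooth_upto smooth_upto_Suc)

lemma smooth_fn_cong:
  "open U \<Longrightarrow> smooth_fn U f \<Longrightarrow> (\<And>z. z \<in> U \<Longrightarrow> f z = h z) \<Longrightarrow> smooth_fn U h"
  by (simp add: smooth_fn_iff_smooth_upto) (metis smooth_upto_cong)

lemma smooth_fn_const: "open U \<Longrightarrow> smooth_fn U (\<lambda>z. c)"
  by (simp add: smooth_fn_iff_smooth_upto smooth_upto_const)

lemma smooth_fn_add: "open U \<Longrightarrow> smooth_fn U f \<Longrightarrow> smooth_fn U h \<Longrightarrow> smooth_fn U (\<lambda>z. f z + h z)"
  by (simp add: smooth_fn_iff_smooth_upto smooth_upto_add)

lemma smooth_fn_mult: "open U \<Longrightarrow> smooth_fn U f \<Longrightarrow> smooth_fn U h \<Longrightarrow> smooth_fn U (\<lambda>z. f z * h z)"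
  by (simp add: smooth_fn_iff_smooth_upto smooth_upto_mult)

lemma smooth_fn_inverse:
  "open U \<Longrightarrow> smooth_fn U f \<Longrightarrow> (\<forall>z\<in>U. f z \<noteq> 0) \<Longrightarrow> smooth_fn U (\<lambda>z. inverse (f z))"
  by (simp add: smooth_fn_iff_smooth_upto smooth_upto_inverse)

lemma smooth_fn_minus: "open U \<Longrightarrow> smooth_fn U f \<Longrightarrow> smooth_fn U (\<lambda>z. - f z)"
  using smooth_fn_mult[of U "\<lambda>z. -1" f] smooth_fn_const[of U "-1"] by simp

lemma smooth_fn_diff: "open U \<Longrightarrow> smooth_fn U f \<Longrightarrow> smooth_fn U h \<Longrightarrow> smooth_fn U (\<lambda>z. f z - h z)"
  using smooth_fn_add[of U f "\<lambda>z. - h z"] smooth_fn_minus[of U h] by simp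

lemma smooth_fn_divide:
  "open U \<Longrightarrow> smooth_fn U f \<Longrightarrow> smooth_fn U h \<Longrightarrow> (\<forall>z\<in>U. h z \<noteq> 0) \<Longrightarrow> smooth_fn U (\<lambda>z. f z / h z)"
  using smooth_fn_mult[of U f "\<lambda>z. inverse (h z)"] smooth_fn_inverse[of U h]
  by (simp add: divide_inverse)

lemma smooth_fn_divide_const: "open U \<Longrightarrow> smooth_fn U f \<Longrightarrow> smooth_fn U (\<lambda>z. f z / c)"
  using smooth_fn_mult[of U f "\<lambda>z. 1 / c"] smooth_fn_const[of U "1 / c"] by simp

lemma smooth_fn_sum:
  assumes "open U" "finite A" "\<And>a. a \<in> A \<Longrightarrow> smooth_fn U (\<lambda>z. F z a)"
  shows "smooth_fn U (\<lambda>z. \<Sum>a\<in>A. F z a)"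
  using assms(2,3)
proof (induction A rule: finite_induct)
  case (insert a A)
  then show ?case using smooth_fn_add[OF assms(1), of "\<lambda>z. F z a"] by simp
qed (simp add: smooth_fn_const assms(1))

lemma smooth_fn_prod:
  assumes "open U" "finite A" "\<And>a. a \<in> A \<Longrightarrow> smooth_fn U (\<lambda>z. F z a)"
  shows "smooth_fn U (\<lambda>z. \<Prod>a\<in>A. F z a)"
  using assms(2,3)
proof (induction A rule: finite_induct)
  case (insert a A)
  then show ?case using smooth_fn_mult[OF assms(1), of "\<lambda>z. F z a"] by simp
qed (simp add: smooth_fn_const assms(1))

lemma smooth_fn_det:
  fixes M :: "real^'n::finite \<Rightarrow> real^'m::finite^'m"
  assumes "open U" "\<And>i j. smooth_fn U (\<lambda>z. M z $ i $ j)"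
  shows "smooth_fn U (\<lambda>z. det (M z))"
  unfolding det_def
  by (intro smooth_fn_sum smooth_fn_mult smooth_fn_prod smooth_fn_const assms) auto

text \<open>Schwarz's theorem: both mixed partials are limits of the same second difference quotient.\<close>

lemma second_difference_mvt:
  fixes f :: "real^'n::finite \<Rightarrow> real" and i j :: 'n
  defines "ei \<equiv> axis i 1 :: real^'n" and "ej \<equiv> axis j 1 :: real^'n"
  assumes h: "h > 0"
    and f: "\<And>a s. 0 \<le> a \<Longrightarrow> a \<le> h \<Longrightarrow> 0 \<le> s \<Longrightarrow> s \<le> h \<Longrightarrow> f differentiable (at (y + a *\<^sub>R ej + s *\<^sub>R ei))"
  shows "\<exists>\<xi>. 0 < \<xi> \<and> \<xi> < h \<and>
    f (y + h *\<^sub>R ei + h *\<^sub>R ej) - f (y + h *\<^sub>R ei) - f (y + h *\<^sub>R ej) + f y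
      = h * (pder i f (y + h *\<^sub>R ej + \<xi> *\<^sub>R ei) - pder i f (y + \<xi> *\<^sub>R ei))"
proof -
  define \<Phi> where "\<Phi> s = f (y + h *\<^sub>R ej + s *\<^sub>R ei) - f (y + s *\<^sub>R ei)" for s
  have "DERIV \<Phi> s :> pder i f (y + h *\<^sub>R ej + s *\<^sub>R ei) - pder i f (y + s *\<^sub>R ei)"
    if "0 \<le> s" "s \<le> h" for s
    unfolding \<Phi>_def ei_def
    using f[of h s] f[of 0 s] that h
    by (intro DERIV_diff pder_has_real_derivative) (simp_all add: ei_def ej_def)
  then obtain \<xi> where "0 < \<xi>" "\<xi> < h"
    "\<Phi> h - \<Phi> 0 = (h - 0) * (pder i f (y + h *\<^sub>R ej + \<xi> *\<^sub>R ei) - pder i f (y + \<xi> *\<^sub>R ei))"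
    using MVT2[of 0 h \<Phi> "\<lambda>s. pder i f (y + h *\<^sub>R ej + s *\<^sub>R ei) - pder i f (y + s *\<^sub>R ei)"] h
    by auto
  moreover have "\<Phi> h - \<Phi> 0 = f (y + h *\<^sub>R ei + h *\<^sub>R ej) - f (y + h *\<^sub>R ei) - f (y + h *\<^sub>R ej) + f y"
    unfolding \<Phi>_def by (simp add: add_ac)
  ultimately show ?thesis by auto
qed

lemma has_derivative_increment_bound:
  fixes p :: "'a::real_normed_vector \<Rightarrow> real"
  assumes D: "(p has_derivative D) (at y)" and e: "e > 0"
  obtains d where "d > 0" and "\<And>z z'. norm (z - y) < d \<Longrightarrow> norm (z' - y) < d \<Longrightarrow>
    \<bar>p z - p z' - D (z - z')\<bar> \<le> e * (norm (z - y) + norm (z' - y))"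
proof -
  have "\<exists>d>0. \<forall>z. norm (z - y) < d \<longrightarrow> norm (p z - p y - D (z - y)) \<le> e * norm (z - y)"
    using D e unfolding has_derivative_at_alt by blast
  then obtain d where d: "d > 0" "\<And>z. norm (z - y) < d \<Longrightarrow> \<bar>p z - p y - D (z - y)\<bar> \<le> e * norm (z - y)"
    by auto
  have tri: "\<bar>p z - p z' - D (z - z')\<bar> \<le> \<bar>p z - p y - D (z - y)\<bar> + \<bar>p z' - p y - D (z' - y)\<bar>" for z z'
  proof -
    have "D (z - z') = D (z - y) - D (z' - y)"
      using linear_diff[OF has_derivative_linear[OF D], of "z - y" "z' - y"] by simp
    then show ?thesis by (simp add: abs_triangle_ineq4)
  qed
  show ?thesis
  proof (rule that[OF d(1)])
    fix z z' assume "norm (z - y) < d" "norm (z' - y) < d"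
    then show "\<bar>p z - p z' - D (z - z')\<bar> \<le> e * (norm (z - y) + norm (z' - y))"
      using d(2)[of z] d(2)[of z'] tri[of z z']
      unfolding distrib_left by linarith
  qed
qed

lemma second_difference_approx:
  fixes f :: "real^'n::finite \<Rightarrow> real" and i j :: 'n
  defines "ei \<equiv> axis i 1 :: real^'n" and "ej \<equiv> axis j 1 :: real^'n"
  assumes U: "open U" and f: "smooth_fn U f" and y: "y \<in> U" and e: "e > 0"
  shows "\<exists>\<delta>>0. \<forall>h. 0 < h \<and> h < \<delta> \<longrightarrow>
     \<bar>f (y + h *\<^sub>R ei + h *\<^sub>R ej) - f (y + h *\<^sub>R ei) - f (y + h *\<^sub>R ej) + f y
        - h\<^sup>2 * pder j (pder i f) y\<bar> \<le> e * h\<^sup>2"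
proof -
  let ?p = "pder i f"
  obtain D where D: "(?p has_derivative D) (at y)"
    using smooth_fn_differentiable[OF U smooth_fn_pder[OF U f] y] unfolding differentiable_def by blast
  obtain d where d: "d > 0" and incr: "\<And>z z'. norm (z - y) < d \<Longrightarrow> norm (z' - y) < d \<Longrightarrow>
      \<bar>?p z - ?p z' - D (z - z')\<bar> \<le> e / 3 * (norm (z - y) + norm (z' - y))"
    using has_derivative_increment_bound[OF D, of "e / 3"] e by auto
  obtain r where r: "r > 0" "ball y r \<subseteq> U" using U y openE by blast
  define \<delta> where "\<delta> = min d r / 2"
  show ?thesis
  proof (intro exI[of _ \<delta>] conjI allI impI)
    show "\<delta> > 0" using d r by (simp add: \<delta>_def)
    fix h :: real assume h: "0 < h \<and> h < \<delta>"
    have near: "norm (a *\<^sub>R ej + s *\<^sub>R ei) \<le> a + s" and inU: "y + a *\<^sub>R ej + s *\<^sub>R ei \<in> U"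
      and nd: "norm (a *\<^sub>R ej + s *\<^sub>R ei) < d"
      if "0 \<le> a" "a \<le> h" "0 \<le> s" "s \<le> h" for a s
    proof -
      show "norm (a *\<^sub>R ej + s *\<^sub>R ei) \<le> a + s"
        using norm_triangle_ineq[of "a *\<^sub>R ej" "s *\<^sub>R ei"] that by (simp add: ei_def ej_def)
      also have "\<dots> < min d r" using that h \<delta>_def by simp
      finally have *: "norm (a *\<^sub>R ej + s *\<^sub>R ei) < min d r" .
      moreover have "dist y (y + v) = norm v" for v :: "real^'n"
        by (metis add_diff_cancel_left' dist_commute dist_norm)
      ultimately have "y + a *\<^sub>R ej + s *\<^sub>R ei \<in> ball y r" by (simp add: add.assoc)
      then show "y + a *\<^sub>R ej + s *\<^sub>R ei \<in> U" using r by blast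
      show "norm (a *\<^sub>R ej + s *\<^sub>R ei) < d" using * by simp
    qed
    obtain \<xi> where \<xi>: "0 < \<xi>" "\<xi> < h"
      and mvt: "f (y + h *\<^sub>R ei + h *\<^sub>R ej) - f (y + h *\<^sub>R ei) - f (y + h *\<^sub>R ej) + f y
        = h * (?p (y + h *\<^sub>R ej + \<xi> *\<^sub>R ei) - ?p (y + \<xi> *\<^sub>R ei))"
      using second_difference_mvt[of h f y j i] smooth_fn_differentiable[OF U f inU] h
      unfolding ei_def ej_def by blast
    have "D (h *\<^sub>R ej) = h * pder j ?p y"
      using has_derivative_linear[OF D] pder_eq_derivative[OF D, of j] by (simp add: linear_scale ej_def)
    then have "f (y + h *\<^sub>R ei + h *\<^sub>R ej) - f (y + h *\<^sub>R ei) - f (y + h *\<^sub>R ej) + f y - h\<^sup>2 * pder j ?p y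
        = h * (?p (y + h *\<^sub>R ej + \<xi> *\<^sub>R ei) - ?p (y + \<xi> *\<^sub>R ei)
          - D ((y + h *\<^sub>R ej + \<xi> *\<^sub>R ei) - (y + \<xi> *\<^sub>R ei)))"
      unfolding mvt by (simp add: algebra_simps power2_eq_square)
    also have "\<bar>\<dots>\<bar> \<le> h * (e / 3 * (norm (h *\<^sub>R ej + \<xi> *\<^sub>R ei) + norm (0 *\<^sub>R ej + \<xi> *\<^sub>R ei)))"
      using incr[of "y + h *\<^sub>R ej + \<xi> *\<^sub>R ei" "y + 0 *\<^sub>R ej + \<xi> *\<^sub>R ei"] nd[of h \<xi>] nd[of 0 \<xi>] h \<xi>
      by (simp add: abs_mult add.assoc)
    also have "\<dots> \<le> h * (e / 3 * (3 * h))"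
    proof -
      have "norm (h *\<^sub>R ej + \<xi> *\<^sub>R ei) + norm (0 *\<^sub>R ej + \<xi> *\<^sub>R ei) \<le> 3 * h"
        using near[of h \<xi>] h \<xi> by (simp add: ei_def)
      then show ?thesis using h e by (simp add: mult_left_mono)
    qed
    also have "\<dots> = e * h\<^sup>2" by (simp add: power2_eq_square)
    finally show "\<bar>f (y + h *\<^sub>R ei + h *\<^sub>R ej) - f (y + h *\<^sub>R ei) - f (y + h *\<^sub>R ej) + f y
        - h\<^sup>2 * pder j ?p y\<bar> \<le> e * h\<^sup>2" .
  qed
qed

lemma pder_commute:
  fixes f :: "real^'n::finite \<Rightarrow> real"
  assumes U: "open U" and f: "smooth_fn U f" and y: "y \<in> U"
  shows "pder i (pder j f) y = pder j (pder i f) y"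
proof (rule ccontr)
  let ?a = "pder j (pder i f) y" and ?b = "pder i (pder j f) y"
  assume ne: "?b \<noteq> ?a"
  define e where "e = \<bar>?a - ?b\<bar> / 4"
  have e: "e > 0" using ne by (simp add: e_def)
  obtain d1 where d1: "d1 > 0" "\<And>h. 0 < h \<Longrightarrow> h < d1 \<Longrightarrow>
     \<bar>f (y + h *\<^sub>R axis i 1 + h *\<^sub>R axis j 1) - f (y + h *\<^sub>R axis i 1) - f (y + h *\<^sub>R axis j 1) + f y
        - h\<^sup>2 * ?a\<bar> \<le> e * h\<^sup>2"
    using second_difference_approx[OF U f y e, of i j] by blast
  obtain d2 where d2: "d2 > 0" "\<And>h. 0 < h \<Longrightarrow> h < d2 \<Longrightarrow>
     \<bar>f (y + h *\<^sub>R axis j 1 + h *\<^sub>R axis i 1) - f (y + h *\<^sub>R axis j 1) - f (y + h *\<^sub>R axis i 1) + f y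
        - h\<^sup>2 * ?b\<bar> \<le> e * h\<^sup>2"
    using second_difference_approx[OF U f y e, of j i] by blast
  define h where "h = min d1 d2 / 2"
  have h: "0 < h" "h < d1" "h < d2" using d1 d2 by (auto simp: h_def)
  have sw: "y + h *\<^sub>R axis j 1 + h *\<^sub>R axis i 1 = y + h *\<^sub>R axis i 1 + h *\<^sub>R axis j (1::real)"
    by (simp add: add_ac)
  have "\<bar>h\<^sup>2 * ?a - h\<^sup>2 * ?b\<bar> \<le> 2 * e * h\<^sup>2"
    using d1(2)[OF h(1,2)] d2(2)[OF h(1,3)] unfolding sw by linarith
  moreover have "\<bar>h\<^sup>2 * ?a - h\<^sup>2 * ?b\<bar> = h\<^sup>2 * \<bar>?a - ?b\<bar>"
    by (simp only: right_diff_distrib[symmetric] abs_mult) simp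
  moreover have "2 * e * h\<^sup>2 = h\<^sup>2 * (2 * e)" by (simp add: mult.commute)
  ultimately have "h\<^sup>2 * \<bar>?a - ?b\<bar> \<le> h\<^sup>2 * (2 * e)" by linarith
  then have "\<bar>?a - ?b\<bar> \<le> 2 * e" using h(1) by (simp add: mult_le_cancel_left)
  moreover have "4 * e = \<bar>?a - ?b\<bar>" using e_def by simp
  ultimately show False using e by linarith
qed

section \<open>Lorentzian forms are nondegenerate\<close>

lemma bform_eq_mult_vec: "bform G v w = (\<Sum>i\<in>UNIV. v$i * (G *v w)$i)"
  unfolding bform_def matrix_vector_mult_def
  by (simp add: sum_distrib_left mult_ac)

lemma bform_kernel:
  assumes sym: "\<And>i j. G$i$j = G$j$i" and z: "G *v z = 0"
  shows "bform G a z = 0" and "bform G z a = 0"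
proof -
  show "bform G a z = 0" using z by (simp add: bform_eq_mult_vec)
  moreover have "bform G z a = bform G a z" unfolding bform_def
    by (subst sum.swap) (simp add: sym mult_ac)
  ultimately show "bform G z a = 0" by simp
qed

lemma bform_add_kernel:
  assumes "\<And>i j. G$i$j = G$j$i" and "G *v z = 0"
  shows "bform G (w + k *\<^sub>R z) (w + k *\<^sub>R z) = bform G w w"
proof -
  have "bform G (w + k *\<^sub>R z) (w + k *\<^sub>R z)
      = bform G w w + k * bform G w z + k * bform G z w + k * k * bform G z z"
    unfolding bform_def by (simp add: algebra_simps sum.distrib sum_distrib_left)
  then show ?thesis using bform_kernel[OF assms] by simp
qed

text \<open>A null vector of a Lorentzian form together with its positive definite hyperplane would
  span everything, making the form positive semidefinite; but the form has a timelike vector.\<close>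

lemma lorentzian_kernel_trivial:
  fixes G :: "real^'n::finite^'n"
  assumes L: "lorentzian G" and z: "G *v z = 0"
  shows "z = 0"
proof (rule ccontr)
  assume "z \<noteq> 0"
  have sym: "\<And>i j. G$i$j = G$j$i" using L unfolding lorentzian_def by blast
  obtain v where v: "bform G v v < 0" using L unfolding lorentzian_def by blast
  obtain W where W: "subspace W" "dim W = CARD('n) - 1" "\<And>w. w \<in> W \<Longrightarrow> w \<noteq> 0 \<Longrightarrow> bform G w w > 0"
    using L unfolding lorentzian_def by blast
  have span_W: "span W = W" using W(1) span_eq_iff by blast
  have "z \<notin> W" using W(3)[of z] \<open>z \<noteq> 0\<close> bform_kernel(1)[OF sym z, of z] by auto
  then have "dim (insert z W) = dim W + 1"
    using dim_insert[of z W] span_W by simp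
  then have "span (insert z W) = UNIV"
    using W(2) dim_eq_full[of "insert z W"] by simp
  then obtain k where k: "v - k *\<^sub>R z \<in> W"
    unfolding span_insert using W(1) span_eq_iff by blast
  have "bform G v v = bform G (v - k *\<^sub>R z) (v - k *\<^sub>R z)"
    using bform_add_kernel[OF sym z, of "v - k *\<^sub>R z" k] by simp
  also have "\<dots> \<ge> 0"
    using W(3)[OF k] by (cases "v - k *\<^sub>R z = 0") (auto simp: bform_def)
  finally show False using v by simp
qed

lemma lorentzian_det_nonzero:
  fixes G :: "real^'n::finite^'n"
  assumes "lorentzian G"
  shows "det G \<noteq> 0"
proof -
  have lin: "linear ((*v) G)" by simp
  have "inj ((*v) G)"
    using lorentzian_kernel_trivial[OF assms] linear_injective_0[OF lin] by auto
  then show ?thesis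
    using det_nz_iff_inj[OF lin] by (simp add: matrix_of_matrix_vector_mul)
qed

lemma if_delta_mult_left: "(if i = k then 1 else 0) * (x::real) = (if i = k then x else 0)"
  by simp

lemma if_delta_mult_right: "(x::real) * (if i = k then 1 else 0) = (if i = k then x else 0)"
  by simp

lemma sum_delta_l [simp]: "(\<Sum>k\<in>(UNIV::'a::finite set). (if i = k then 1 else 0) * (F k::real)) = F i"
  by (simp add: if_delta_mult_left sum.delta)
lemma sum_delta_r [simp]: "(\<Sum>k\<in>(UNIV::'a::finite set). (F k::real) * (if k = j then 1 else 0)) = F j"
  by (simp add: if_delta_mult_right sum.delta')
lemma sum_delta_l' [simp]: "(\<Sum>k\<in>(UNIV::'a::finite set). (if k = i then 1 else 0) * (F k::real)) = F i"
  by (simp add: if_delta_mult_left sum.delta')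
lemma sum_delta_r' [simp]: "(\<Sum>k\<in>(UNIV::'a::finite set). (F k::real) * (if j = k then 1 else 0)) = F j"
  by (simp add: if_delta_mult_right sum.delta)

lemma sum_swap_cong: "(\<And>a b. a \<in> A \<Longrightarrow> b \<in> B \<Longrightarrow> F a b = G b a) \<Longrightarrow>
   (\<Sum>a\<in>A. \<Sum>b\<in>B. F a b) = (\<Sum>b\<in>B. \<Sum>a\<in>A. (G b a::real))"
  by (subst sum.swap) (rule sum.cong, rule refl, rule sum.cong, auto)

lemma sum_rotate3: "(\<Sum>m\<in>A. \<Sum>a\<in>B. \<Sum>c\<in>C. F m a c) = (\<Sum>a\<in>B. \<Sum>c\<in>C. \<Sum>m\<in>A. (F m a c::real))"
  by (subst sum.swap, rule sum.cong, rule refl, rule sum.swap)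

lemma sum_reverse3: "(\<Sum>x\<in>A. \<Sum>y\<in>B. \<Sum>z\<in>C. F x y z) = (\<Sum>z\<in>C. \<Sum>y\<in>B. \<Sum>x\<in>A. (F x y z::real))"
proof -
  have "(\<Sum>x\<in>A. \<Sum>y\<in>B. \<Sum>z\<in>C. F x y z) = (\<Sum>y\<in>B. \<Sum>z\<in>C. \<Sum>x\<in>A. F x y z)" by (rule sum_rotate3)
  also have "\<dots> = (\<Sum>z\<in>C. \<Sum>y\<in>B. \<Sum>x\<in>A. F x y z)" by (rule sum.swap)
  finally show ?thesis .
qed

lemma sum_swap23: "(\<Sum>x\<in>A. \<Sum>y\<in>B. \<Sum>z\<in>C. F x y z) = (\<Sum>x\<in>A. \<Sum>z\<in>C. \<Sum>y\<in>B. (F x y z::real))"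
  by (rule sum.cong[OF refl]) (rule sum.swap)

lemma sum_pull_inner: "(\<Sum>a\<in>A. \<Sum>c\<in>C. H a c * (\<Sum>q\<in>Q. G q * T a q c)) = (\<Sum>q\<in>Q. G q * (\<Sum>a\<in>A. \<Sum>c\<in>C. H a c * (T a q c::real)))"
proof -
  have "(\<Sum>q\<in>Q. G q * (\<Sum>a\<in>A. \<Sum>c\<in>C. H a c * T a q c)) = (\<Sum>q\<in>Q. \<Sum>a\<in>A. \<Sum>c\<in>C. G q * (H a c * T a q c))"
    by (simp add: sum_distrib_left)
  also have "\<dots> = (\<Sum>a\<in>A. \<Sum>c\<in>C. H a c * (\<Sum>q\<in>Q. G q * T a q c))"
    by (subst sum_rotate3) (simp add: sum_distrib_left mult_ac)
  finally show ?thesis by simp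
qed

lemma sum_mult_pull: "(\<Sum>m\<in>A. w m * (c * f m)) = c * (\<Sum>m\<in>A. w m * (f m::real))"
  by (simp add: sum_distrib_left mult_ac)

lemma sum_mult_pull_right: "(\<Sum>x\<in>A. p x * (f x * c)) = (\<Sum>x\<in>A. p x * f x) * (c::real)"
  by (simp add: sum_distrib_left sum_distrib_right mult_ac)

lemma sum_lincomb3: "(\<Sum>m\<in>UNIV. w m * (A m + a * B m + b * C m)) =
    (\<Sum>m\<in>UNIV. w m * A m) + a * (\<Sum>m\<in>UNIV. w m * B m) + b * (\<Sum>m\<in>UNIV. w m * (C m::real))"
  by (simp add: sum.distrib sum_distrib_left algebra_simps)

lemma sum2_lincomb3: "(\<Sum>i\<in>UNIV. \<Sum>l\<in>UNIV. H i l * (A i l + a * B i l + b * C i l)) =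
    (\<Sum>i\<in>UNIV. \<Sum>l\<in>UNIV. H i l * A i l) + a * (\<Sum>i\<in>UNIV. \<Sum>l\<in>UNIV. H i l * B i l)
  + b * (\<Sum>i\<in>UNIV. \<Sum>l\<in>UNIV. H i l * (C i l::real))"
  by (simp add: sum.distrib sum_distrib_left algebra_simps)

lemma sum_affine: "(\<Sum>i\<in>UNIV. w i * (A * X i + v i * B)) = A * (\<Sum>i\<in>UNIV. w i * X i) + (\<Sum>i\<in>UNIV. w i * v i) * (B::real)"
  by (simp add: distrib_left sum.distrib sum_distrib_left sum_distrib_right mult_ac)

lemma sum2_affine: "(\<Sum>k\<in>UNIV. \<Sum>m\<in>UNIV. H k m * (c * A k m + B k m * t)) =
   c * (\<Sum>k\<in>UNIV. \<Sum>m\<in>UNIV. H k m * A k m) + (\<Sum>k\<in>UNIV. \<Sum>m\<in>UNIV. H k m * B k m) * (t::real)"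
  by (simp add: ring_distribs sum.distrib sum_distrib_left sum_distrib_right mult_ac)

lemma sum2_sym_antisym:
  assumes "\<And>a b. H a b = H b a" and "\<And>a b. X a b = - X b a"
  shows "(\<Sum>a\<in>A. \<Sum>b\<in>A. H a b * X a b) = (0::real)"
proof -
  have "H a b * X a b = - (H b a * X b a)" for a b
    using assms(1)[of a b] assms(2)[of a b] by simp
  then have "(\<Sum>a\<in>A. \<Sum>b\<in>A. H a b * X a b) = (\<Sum>b\<in>A. \<Sum>a\<in>A. - (H b a * X b a))"
    by (intro sum_swap_cong)
  then show ?thesis by (simp add: sum_negf)
qed

section \<open>Algebraic curvature tensors\<close>

lemma gen_curvI:
  assumes anti12: "\<And>i k l m. T i k l m = - T k i l m" and anti34: "\<And>i k l m. T i k l m = - T i k m l"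
    and bianchi: "\<And>i k l m. T i k l m + T k l i m + T l i k m = 0"
  shows "gen_curv T"
proof -
  have "T i k l m = T l m i k" for i k l m
    using bianchi[of i k l m] bianchi[of i k m l] bianchi[of i l m k] bianchi[of k l m i]
      anti12[of k l i m] anti12[of l i k m] anti34[of i k m l] anti12[of k m i l] anti34[of k m i l]
      anti12[of m i k l] anti34[of m i k l] anti34[of i l m k] anti12[of i l m k] anti12[of m i l k]
      anti34[of m i l k] anti12[of l m k i] anti34[of l m k i] anti12[of m k l i] anti34[of m k l i]
      anti34[of k l m i] anti12[of k l m i]
    by linarith
  then show ?thesis unfolding gen_curv_def using assms by blast
qed

lemma gen_curvD:
  assumes "gen_curv T"
  shows "T i k l m = - T k i l m" "T i k l m = - T i k m l" "T i k l m = T l m i k"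
    "T i k l m + T k l i m + T l i k m = 0"
  using assms unfolding gen_curv_def by blast+

lemma gen_curv_add:
  assumes "gen_curv A" "gen_curv B"
  shows "gen_curv (\<lambda>i k l m. A i k l m + B i k l m)"
proof (rule gen_curvI)
  fix i k l m
  note A = gen_curvD[OF assms(1)] and B = gen_curvD[OF assms(2)]
  show "A i k l m + B i k l m = - (A k i l m + B k i l m)"
    using A(1)[of i k l m] B(1)[of i k l m] by simp
  show "A i k l m + B i k l m = - (A i k m l + B i k m l)"
    using A(2)[of i k l m] B(2)[of i k l m] by simp
  show "A i k l m + B i k l m + (A k l i m + B k l i m) + (A l i k m + B l i k m) = 0"
    using A(4)[of i k l m] B(4)[of i k l m] by simp
qed

lemma gen_curv_scale:
  assumes "gen_curv A"
  shows "gen_curv (\<lambda>i k l m. c * A i k l m)"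
proof (rule gen_curvI)
  fix i k l m
  note A = gen_curvD[OF assms]
  show "c * A i k l m = - (c * A k i l m)" using A(1)[of i k l m] by simp
  show "c * A i k l m = - (c * A i k m l)" using A(2)[of i k l m] by simp
  show "c * A i k l m + c * A k l i m + c * A l i k m = 0"
    using A(4)[of i k l m] by (simp flip: distrib_left)
qed

lemma gen_curv_orthogonal:
  assumes T: "gen_curv T" and w4: "\<And>a b c. (\<Sum>d\<in>UNIV. w d * T a b c d) = 0"
  shows "(\<Sum>a\<in>UNIV. w a * T a b c d) = 0" "(\<Sum>b\<in>UNIV. w b * T a b c d) = 0"
    "(\<Sum>c\<in>UNIV. w c * T a b c d) = 0"
proof -
  note D = gen_curvD[OF T]
  show w3: "(\<Sum>c\<in>UNIV. w c * T a b c d) = 0" for a b d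
    using w4[of a b d] by (simp add: D(2)[of a b _ d] sum_negf)
  show w1: "(\<Sum>a\<in>UNIV. w a * T a b c d) = 0" for b c d
    using w3[of c d b] by (simp add: D(3)[of _ b c d])
  show "(\<Sum>b\<in>UNIV. w b * T a b c d) = 0"
    using w1[of a c d] by (simp add: D(1)[of a _ c d] sum_negf)
qed

lemma totally_tracelessI:
  fixes G :: "real^'n::finite^'n"
  assumes T: "gen_curv T" and H: "\<And>a b. matrix_inv G $ a $ b = matrix_inv G $ b $ a"
    and c13: "\<And>p q. (\<Sum>a\<in>UNIV. \<Sum>b\<in>UNIV. matrix_inv G $ a $ b * T a p b q) = 0"
  shows "totally_traceless G T"
proof -
  let ?H = "matrix_inv G"
  note D = gen_curvD[OF T]
  have c12: "(\<Sum>a\<in>UNIV. \<Sum>b\<in>UNIV. ?H $ a $ b * T a b p q) = 0" for p q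
    by (rule sum2_sym_antisym) (rule H, rule D(1))
  moreover have c34: "(\<Sum>a\<in>UNIV. \<Sum>b\<in>UNIV. ?H $ a $ b * T p q a b) = 0" for p q
    by (rule sum2_sym_antisym) (rule H, rule D(2))
  moreover have "(\<Sum>a\<in>UNIV. \<Sum>b\<in>UNIV. ?H $ a $ b * T a p q b) = 0" for p q
    using c13[of p q] by (simp add: D(2)[of _ p q] sum_negf)
  moreover have "(\<Sum>a\<in>UNIV. \<Sum>b\<in>UNIV. ?H $ a $ b * T p a b q) = 0" for p q
    using c13[of p q] by (simp add: D(1)[of p] sum_negf)
  moreover have "(\<Sum>a\<in>UNIV. \<Sum>b\<in>UNIV. ?H $ a $ b * T p a q b) = 0" for p q
    using c13[of p q] D(1)[of p _ q] D(2)[of _ p q] by simp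
  ultimately show ?thesis unfolding totally_traceless_def Let_def using c13 by blast
qed

definition kulkarni_nomizu :: "('n \<Rightarrow> 'n \<Rightarrow> real) \<Rightarrow> ('n \<Rightarrow> 'n \<Rightarrow> real) \<Rightarrow> 'n \<Rightarrow> 'n \<Rightarrow> 'n \<Rightarrow> 'n \<Rightarrow> real" where
  "kulkarni_nomizu P Q i k l m = P i m * Q k l - P k m * Q i l - P i l * Q k m + P k l * Q i m"

lemma gen_curv_kulkarni_nomizu:
  assumes "\<And>a b. P a b = P b a" "\<And>a b. Q a b = Q b a"
  shows "gen_curv (kulkarni_nomizu P Q)"
  by (rule gen_curvI) (auto simp: kulkarni_nomizu_def assms algebra_simps)

lemma kulkarni_nomizu_add_right:
  "kulkarni_nomizu P (\<lambda>a b. Q1 a b + c * Q2 a b) i k l m = kulkarni_nomizu P Q1 i k l m + c * kulkarni_nomizu P Q2 i k l m"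
  unfolding kulkarni_nomizu_def by (simp add: algebra_simps)

lemma kulkarni_nomizu_zero_left: "kulkarni_nomizu (\<lambda>a b. 0) Q = (\<lambda>i k l m. 0)"
  unfolding kulkarni_nomizu_def by (intro ext) simp

lemma kulkarni_nomizu_contract4: "(\<Sum>m\<in>UNIV. w m * kulkarni_nomizu P Q i k l m) = (\<Sum>m\<in>UNIV. w m * P i m) * Q k l
   - (\<Sum>m\<in>UNIV. w m * P k m) * Q i l - P i l * (\<Sum>m\<in>UNIV. w m * Q k m) + P k l * (\<Sum>m\<in>UNIV. w m * Q i m)"
  unfolding kulkarni_nomizu_def by (simp add: sum.distrib sum_subtractf sum_distrib_left sum_distrib_right algebra_simps)

lemma kulkarni_nomizu_trace13: "(\<Sum>i\<in>UNIV. \<Sum>l\<in>UNIV. H i l * kulkarni_nomizu P Q i k l m) =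
    (\<Sum>i\<in>UNIV. \<Sum>l\<in>UNIV. H i l * (P i m * Q k l)) - P k m * (\<Sum>i\<in>UNIV. \<Sum>l\<in>UNIV. H i l * Q i l)
  - (\<Sum>i\<in>UNIV. \<Sum>l\<in>UNIV. H i l * P i l) * Q k m + (\<Sum>i\<in>UNIV. \<Sum>l\<in>UNIV. H i l * (P k l * Q i m))"
  unfolding kulkarni_nomizu_def by (simp add: sum.distrib sum_subtractf sum_distrib_left sum_distrib_right algebra_simps)

lemma kulkarni_nomizu_orthogonal:
  fixes P Q :: "'n::finite \<Rightarrow> 'n \<Rightarrow> real"
  assumes "\<And>a. (\<Sum>b\<in>UNIV. w b * P a b) = 0" "\<And>a. (\<Sum>b\<in>UNIV. w b * P b a) = 0"
    and "\<And>a. (\<Sum>b\<in>UNIV. w b * Q a b) = 0" "\<And>a. (\<Sum>b\<in>UNIV. w b * Q b a) = 0"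
  shows "(\<Sum>x\<in>UNIV. w x * kulkarni_nomizu P Q x k l m) = 0"
    and "(\<Sum>x\<in>UNIV. w x * kulkarni_nomizu P Q i x l m) = 0"
    and "(\<Sum>x\<in>UNIV. w x * kulkarni_nomizu P Q i k x m) = 0"
    and "(\<Sum>x\<in>UNIV. w x * kulkarni_nomizu P Q i k l x) = 0"
  unfolding kulkarni_nomizu_def
  by (simp_all only: right_diff_distrib distrib_left sum.distrib sum_subtractf
      sum_mult_pull sum_mult_pull_right assms)

definition kn_modulo :: "('n \<Rightarrow> real) \<Rightarrow> ('n \<Rightarrow> 'n \<Rightarrow> real) \<Rightarrow> ('n \<Rightarrow> 'n \<Rightarrow> 'n \<Rightarrow> 'n \<Rightarrow> real) \<Rightarrow> bool" where
  "kn_modulo v G T \<longleftrightarrow> (\<exists>A S1 S2 S3 S4. \<forall>j k l m. T j k l m = kulkarni_nomizu G A j k l m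
      + v j * S1 k l m + v k * S2 j l m + v l * S3 j k m + v m * S4 j k l)"

lemma kn_moduloI:
  "(\<And>j k l m. T j k l m = kulkarni_nomizu G A j k l m + v j * Sa k l m + v k * Sb j l m + v l * Sc j k m + v m * Sd j k l)
   \<Longrightarrow> kn_modulo v G T"
  unfolding kn_modulo_def by blast

lemma kn_modulo_cong: "kn_modulo v G T \<Longrightarrow> (\<And>j k l m. T' j k l m = T j k l m) \<Longrightarrow> kn_modulo v G T'"
  unfolding kn_modulo_def by simp

lemma kn_modulo_add:
  assumes "kn_modulo v G T1" "kn_modulo v G T2"
  shows "kn_modulo v G (\<lambda>j k l m. T1 j k l m + c * T2 j k l m)"
proof -
  obtain A S1 S2 S3 S4 B R1 R2 R3 R4 where
    a: "\<And>j k l m. T1 j k l m = kulkarni_nomizu G A j k l m + v j * S1 k l m + v k * S2 j l m + v l * S3 j k m + v m * S4 j k l" and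
    b: "\<And>j k l m. T2 j k l m = kulkarni_nomizu G B j k l m + v j * R1 k l m + v k * R2 j l m + v l * R3 j k m + v m * R4 j k l"
    using assms unfolding kn_modulo_def by blast
  show ?thesis
    by (rule kn_moduloI[where A="\<lambda>a b. A a b + c * B a b" and Sa="\<lambda>a b d. S1 a b d + c * R1 a b d"
          and Sb="\<lambda>a b d. S2 a b d + c * R2 a b d" and Sc="\<lambda>a b d. S3 a b d + c * R3 a b d"
          and Sd="\<lambda>a b d. S4 a b d + c * R4 a b d"])
       (simp add: a b kulkarni_nomizu_def algebra_simps)
qed

lemma kn_modulo_kulkarni_nomizu: "kn_modulo v G (kulkarni_nomizu G Q)"
  by (rule kn_moduloI[where A=Q and Sa="\<lambda>a b d. 0" and Sb="\<lambda>a b d. 0" and Sc="\<lambda>a b d. 0" and Sd="\<lambda>a b d. 0"])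
     simp

lemma kn_modulo_kulkarni_nomizu_square: "kn_modulo v G (kulkarni_nomizu (\<lambda>a b. v a * v b) Q)"
  by (rule kn_moduloI[where A="\<lambda>a b. 0" and Sa="\<lambda>k l m. v m * Q k l - v l * Q k m"
        and Sb="\<lambda>i l m. v l * Q i m - v m * Q i l" and Sc="\<lambda>a b d. 0" and Sd="\<lambda>a b d. 0"])
     (simp add: kulkarni_nomizu_def algebra_simps)

text \<open>Changing \<open>G\<close> to \<open>h = G + v \<otimes> v\<close> only adds terms with a factor \<open>v\<close>; the freedom in \<open>A\<close>
  can then be used to make \<open>A\<close> orthogonal to \<open>u\<close> in both slots.\<close>

lemma kn_modulo_change_metric:
  assumes h: "\<And>a b. h a b = G a b + v a * v b" and uv: "(\<Sum>k\<in>UNIV. u k * v k) = -1"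
    and T: "kn_modulo v G T"
  obtains A S1 S2 S3 S4 where "\<And>m. (\<Sum>k\<in>UNIV. u k * A k m) = 0" "\<And>k. (\<Sum>m\<in>UNIV. u m * A k m) = 0"
    "\<And>j k l m. T j k l m = kulkarni_nomizu h A j k l m
      + v j * S1 k l m + v k * S2 j l m + v l * S3 j k m + v m * S4 j k l"
proof -
  obtain B S1 S2 S3 S4 where TB: "\<And>j k l m. T j k l m = kulkarni_nomizu G B j k l m
      + v j * S1 k l m + v k * S2 j l m + v l * S3 j k m + v m * S4 j k l"
    using T unfolding kn_modulo_def by blast
  define \<alpha> where "\<alpha> k = (\<Sum>d\<in>UNIV. u d * B k d)" for k
  define \<gamma> where "\<gamma> = (\<Sum>b\<in>UNIV. \<Sum>d\<in>UNIV. u b * u d * B b d)"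
  define \<beta> where "\<beta> m = (\<Sum>b\<in>UNIV. u b * B b m) + v m * \<gamma>" for m
  define A where "A k m = B k m + v m * \<alpha> k + v k * \<beta> m" for k m
  have u\<alpha>: "(\<Sum>k\<in>UNIV. u k * \<alpha> k) = \<gamma>"
    unfolding \<alpha>_def \<gamma>_def by (simp add: sum_distrib_left mult_ac)
  have u\<beta>: "(\<Sum>m\<in>UNIV. u m * \<beta> m) = 0"
  proof -
    have "(\<Sum>m\<in>UNIV. u m * (\<Sum>b\<in>UNIV. u b * B b m)) = \<gamma>"
      unfolding \<gamma>_def by (simp only: sum_distrib_left, rule sum_swap_cong, simp add: mult_ac)
    then show ?thesis
      unfolding \<beta>_def by (simp only: distrib_left sum.distrib sum_mult_pull_right uv)
  qed
  show ?thesis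
  proof
    fix m
    have "(\<Sum>k\<in>UNIV. u k * A k m) = (\<Sum>k\<in>UNIV. u k * B k m) + v m * (\<Sum>k\<in>UNIV. u k * \<alpha> k)
        + (\<Sum>k\<in>UNIV. u k * v k) * \<beta> m"
      unfolding A_def by (simp only: distrib_left sum.distrib sum_mult_pull sum_mult_pull_right)
    then show "(\<Sum>k\<in>UNIV. u k * A k m) = 0" unfolding u\<alpha> uv \<beta>_def by simp
  next
    fix k
    have "(\<Sum>m\<in>UNIV. u m * A k m) = \<alpha> k + (\<Sum>m\<in>UNIV. u m * v m) * \<alpha> k + v k * (\<Sum>m\<in>UNIV. u m * \<beta> m)"
      unfolding A_def \<alpha>_def by (simp only: distrib_left sum.distrib sum_mult_pull sum_mult_pull_right)
    then show "(\<Sum>m\<in>UNIV. u m * A k m) = 0" unfolding u\<beta> uv by simp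
  next
    fix j k l m
    show "T j k l m = kulkarni_nomizu h A j k l m
      + v j * (S1 k l m - (h k l * \<beta> m - h k m * \<beta> l) - (- v l * B k m + v m * B k l))
      + v k * (S2 j l m - (- h j l * \<beta> m + h j m * \<beta> l) - (v l * B j m - v m * B j l))
      + v l * (S3 j k m - (h j m * \<alpha> k - h k m * \<alpha> j))
      + v m * (S4 j k l - (- h j l * \<alpha> k + h k l * \<alpha> j))"
      unfolding TB A_def kulkarni_nomizu_def h by (simp add: algebra_simps)
  qed
qed

text \<open>When \<open>w \<cdot> v = -1\<close>, \<open>projector v w\<close> fixes \<open>w\<close>-orthogonal tensors and annihilates \<open>v\<close>.\<close>

definition projector :: "('n::finite \<Rightarrow> real) \<Rightarrow> ('n \<Rightarrow> real) \<Rightarrow> 'n \<Rightarrow> 'n \<Rightarrow> real" where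
  "projector v w a b = (if a = b then 1 else 0) + v a * w b"

definition project4 :: "('n::finite \<Rightarrow> real) \<Rightarrow> ('n \<Rightarrow> real) \<Rightarrow> ('n \<Rightarrow> 'n \<Rightarrow> 'n \<Rightarrow> 'n \<Rightarrow> real) \<Rightarrow> 'n \<Rightarrow> 'n \<Rightarrow> 'n \<Rightarrow> 'n \<Rightarrow> real" where
  "project4 v w F j k l m = (\<Sum>a\<in>UNIV. projector v w j a * (\<Sum>b\<in>UNIV. projector v w k b *
     (\<Sum>c\<in>UNIV. projector v w l c * (\<Sum>d\<in>UNIV. projector v w m d * F a b c d))))"

lemma sum_projector: "(\<Sum>x\<in>UNIV. projector v w i x * F x) = F i + v i * (\<Sum>x\<in>UNIV. w x * F x)"
  unfolding projector_def by (simp add: ring_distribs sum.distrib sum_distrib_left mult_ac)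

lemma projector_annihilates: "(\<Sum>x\<in>UNIV. w x * v x) = -1 \<Longrightarrow> (\<Sum>x\<in>UNIV. projector v w i x * v x) = 0"
  unfolding sum_projector by simp

lemma project4_orthogonal:
  assumes "\<And>a b c. (\<Sum>d\<in>UNIV. w d * F a b c d) = 0" "\<And>a b d. (\<Sum>c\<in>UNIV. w c * F a b c d) = 0"
    "\<And>a c d. (\<Sum>b\<in>UNIV. w b * F a b c d) = 0" "\<And>b c d. (\<Sum>a\<in>UNIV. w a * F a b c d) = 0"
  shows "project4 v w F j k l m = F j k l m"
  unfolding project4_def sum_projector using assms by simp

lemma project4_kn_modulo_terms:
  assumes vw: "(\<Sum>x\<in>UNIV. w x * v x) = -1"
    and T: "\<And>j k l m. T j k l m = K j k l m + v j * S1 k l m + v k * S2 j l m + v l * S3 j k m + v m * S4 j k l"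
  shows "project4 v w T j k l m = project4 v w K j k l m"
proof -
  have "project4 v w (\<lambda>a b c d. v a * S1 b c d) j k l m = 0" "project4 v w (\<lambda>a b c d. v b * S2 a c d) j k l m = 0"
    "project4 v w (\<lambda>a b c d. v c * S3 a b d) j k l m = 0" "project4 v w (\<lambda>a b c d. v d * S4 a b c) j k l m = 0"
    unfolding project4_def by (simp_all only: sum_mult_pull sum_mult_pull_right projector_annihilates[OF vw])
  then show ?thesis
    unfolding T project4_def by (simp add: ring_distribs sum.distrib)
qed

lemma kn_modulo_orthogonal:
  fixes u v :: "'n::finite \<Rightarrow> real"
  assumes h: "\<And>a b. h a b = G a b + v a * v b" and h_sym: "\<And>a b. h a b = h b a"
    and uv: "(\<Sum>x\<in>UNIV. u x * v x) = -1" and u_h: "\<And>b. (\<Sum>a\<in>UNIV. u a * h a b) = 0"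
    and T: "gen_curv T" and T_u: "\<And>j k l. (\<Sum>m\<in>UNIV. u m * T j k l m) = 0"
    and T_kn: "kn_modulo v G T"
  obtains A where "\<And>m. (\<Sum>k\<in>UNIV. u k * A k m) = 0" "\<And>k. (\<Sum>m\<in>UNIV. u m * A k m) = 0"
    "\<And>j k l m. T j k l m = kulkarni_nomizu h A j k l m"
proof -
  obtain A S1 S2 S3 S4 where A1: "\<And>m. (\<Sum>k\<in>UNIV. u k * A k m) = 0" and A2: "\<And>k. (\<Sum>m\<in>UNIV. u m * A k m) = 0"
    and TA: "\<And>j k l m. T j k l m = kulkarni_nomizu h A j k l m + v j * S1 k l m + v k * S2 j l m + v l * S3 j k m + v m * S4 j k l"
    using kn_modulo_change_metric[OF h uv T_kn] by blast
  have u_h2: "(\<Sum>b\<in>UNIV. u b * h a b) = 0" for a using u_h[of a] by (simp add: h_sym)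
  have "T j k l m = kulkarni_nomizu h A j k l m" for j k l m
  proof -
    note T_orth = gen_curv_orthogonal[OF T T_u]
    note K_orth = kulkarni_nomizu_orthogonal[of u h A, OF u_h2 u_h A2 A1]
    have "T j k l m = project4 v u T j k l m"
      by (rule project4_orthogonal[symmetric]) (use T_u T_orth in auto)
    also have "\<dots> = project4 v u (kulkarni_nomizu h A) j k l m"
      by (rule project4_kn_modulo_terms) (use uv TA in \<open>simp_all add: mult.commute\<close>)
    also have "\<dots> = kulkarni_nomizu h A j k l m"
      by (rule project4_orthogonal) (use K_orth in auto)
    finally show ?thesis .
  qed
  then show ?thesis using that A1 A2 by blast
qed

lemma trace13_kulkarni_nomizu_rest:
  fixes u v :: "'n::finite \<Rightarrow> real" and H h A
  assumes h_sym: "\<And>a b. h a b = h b a" and H_sym: "\<And>a b. H a b = H b a"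
    and H_h: "\<And>a b. (\<Sum>c\<in>UNIV. H a c * h b c) = (if a = b then 1 else 0) + v b * u a"
    and uv: "(\<Sum>x\<in>UNIV. u x * v x) = -1"
    and A1: "\<And>m. (\<Sum>k\<in>UNIV. u k * A k m) = 0" and A2: "\<And>k. (\<Sum>m\<in>UNIV. u m * A k m) = 0"
  shows "(\<Sum>a\<in>UNIV. \<Sum>c\<in>UNIV. H a c * kulkarni_nomizu h A a k c m)
    = - ((real CARD('n) - 3) * A k m + h k m * (\<Sum>j\<in>UNIV. \<Sum>l\<in>UNIV. H j l * A j l))"
proof -
  have "(\<Sum>j\<in>UNIV. \<Sum>l\<in>UNIV. H j l * (h j m * A k l)) = (\<Sum>l\<in>UNIV. (\<Sum>j\<in>UNIV. H l j * h m j) * A k l)"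
    by (simp only: sum_distrib_left sum_distrib_right, rule sum_swap_cong, simp add: mult_ac H_sym h_sym)
  also have "\<dots> = A k m + v m * (\<Sum>l\<in>UNIV. u l * A k l)"
    by (simp add: H_h ring_distribs sum.distrib sum_distrib_left mult_ac)
  finally have HhA: "(\<Sum>j\<in>UNIV. \<Sum>l\<in>UNIV. H j l * (h j m * A k l)) = A k m" using A2 by simp
  have "(\<Sum>j\<in>UNIV. \<Sum>l\<in>UNIV. H j l * (h k l * A j m)) = (\<Sum>j\<in>UNIV. (\<Sum>l\<in>UNIV. H j l * h k l) * A j m)"
    by (simp add: sum_distrib_left sum_distrib_right mult_ac)
  also have "\<dots> = A k m + v k * (\<Sum>j\<in>UNIV. u j * A j m)"
    by (simp add: H_h ring_distribs sum.distrib sum_distrib_left mult_ac)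
  finally have HAh: "(\<Sum>j\<in>UNIV. \<Sum>l\<in>UNIV. H j l * (h k l * A j m)) = A k m" using A1 by simp
  have tr_h: "(\<Sum>a\<in>UNIV. \<Sum>c\<in>UNIV. H a c * h a c) = real CARD('n) - 1"
    using uv by (simp add: H_h sum.distrib mult.commute)
  show ?thesis unfolding kulkarni_nomizu_trace13 HhA HAh tr_h by (simp add: algebra_simps)
qed

lemma kn_modulo_vanishes:
  fixes u v :: "'n::finite \<Rightarrow> real" and G H h T
  assumes n: "CARD('n) > 3"
    and h: "\<And>a b. h a b = G a b + v a * v b" and h_sym: "\<And>a b. h a b = h b a"
    and H_sym: "\<And>a b. H a b = H b a" and H_h: "\<And>a b. (\<Sum>c\<in>UNIV. H a c * h b c) = (if a = b then 1 else 0) + v b * u a"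
    and uv: "(\<Sum>x\<in>UNIV. u x * v x) = -1" and u_h: "\<And>b. (\<Sum>a\<in>UNIV. u a * h a b) = 0"
    and T: "gen_curv T" and T_u: "\<And>j k l. (\<Sum>m\<in>UNIV. u m * T j k l m) = 0"
    and T_trace: "\<And>k m. (\<Sum>a\<in>UNIV. \<Sum>c\<in>UNIV. H a c * T a k c m) = 0"
    and T_kn: "kn_modulo v G T"
  shows "T j k l m = 0"
proof -
  obtain A where A1: "\<And>m. (\<Sum>k\<in>UNIV. u k * A k m) = 0" and A2: "\<And>k. (\<Sum>m\<in>UNIV. u m * A k m) = 0"
    and KA: "\<And>j k l m. T j k l m = kulkarni_nomizu h A j k l m"
    using kn_modulo_orthogonal[OF h h_sym uv u_h T T_u T_kn] by blast
  define t where "t = (\<Sum>j\<in>UNIV. \<Sum>l\<in>UNIV. H j l * A j l)"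
  have trace: "(real CARD('n) - 3) * A k m + h k m * t = 0" for k m
    using T_trace[of k m] trace13_kulkarni_nomizu_rest[OF h_sym H_sym H_h uv A1 A2, of k m]
    unfolding KA t_def by simp
  have "(\<Sum>k\<in>UNIV. \<Sum>m\<in>UNIV. H k m * ((real CARD('n) - 3) * A k m + h k m * t)) = 0"
    by (simp add: trace)
  moreover have "(\<Sum>a\<in>UNIV. \<Sum>c\<in>UNIV. H a c * h a c) = real CARD('n) - 1"
    using uv by (simp add: H_h sum.distrib mult.commute)
  then have "(\<Sum>k\<in>UNIV. \<Sum>m\<in>UNIV. H k m * ((real CARD('n) - 3) * A k m + h k m * t))
     = (real CARD('n) - 3) * t + (real CARD('n) - 1) * t"
    unfolding sum2_affine t_def by simp
  ultimately have "(2 * real CARD('n) - 4) * t = 0" by (simp add: algebra_simps)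
  then have "t = 0" using n by simp
  then have "A k l = 0" for k l using trace[of k l] n by simp
  then show ?thesis unfolding KA kulkarni_nomizu_def by simp
qed

section \<open>Tensor calculus in a chart\<close>

type_synonym 'n metric_field = "real^'n \<Rightarrow> real^'n^'n"
type_synonym 'n vector_field = "real^'n \<Rightarrow> real^'n"
type_synonym 'n tensor2_field = "real^'n \<Rightarrow> 'n \<Rightarrow> 'n \<Rightarrow> real"
type_synonym 'n tensor3_field = "real^'n \<Rightarrow> 'n \<Rightarrow> 'n \<Rightarrow> 'n \<Rightarrow> real"
type_synonym 'n tensor4_field = "real^'n \<Rightarrow> 'n \<Rightarrow> 'n \<Rightarrow> 'n \<Rightarrow> 'n \<Rightarrow> real"

definition cov_der2 :: "('n::finite) metric_field \<Rightarrow> 'n tensor2_field \<Rightarrow> real^'n \<Rightarrow> 'n \<Rightarrow> 'n \<Rightarrow> 'n \<Rightarrow> real" where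
  "cov_der2 g T y a b c = pder a (\<lambda>z. T z b c) y - (\<Sum>k\<in>UNIV. christ g y k a b * T y k c)
      - (\<Sum>k\<in>UNIV. christ g y k a c * T y b k)"

definition rest_metric :: "('n::finite) metric_field \<Rightarrow> 'n vector_field \<Rightarrow> 'n tensor2_field" where
  "rest_metric g u y i j = g y $ i $ j + lower g u y i * lower g u y j"

text \<open>\<open>X\<^sub>b = \<partial>\<^sub>b \<phi> - \<phi>\<^sup>2 u\<^sub>b\<close>; for a concircular \<open>u\<close> the Ricci identity gives
  \<open>u\<^sup>k R\<^sub>k\<^sub>c\<^sub>a\<^sub>b = h\<^sub>a\<^sub>c X\<^sub>b - h\<^sub>b\<^sub>c X\<^sub>a\<close>.\<close>

definition xi_form :: "(real^'n::finite \<Rightarrow> real) \<Rightarrow> 'n metric_field \<Rightarrow> 'n vector_field \<Rightarrow> real^'n \<Rightarrow> 'n \<Rightarrow> real" where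
  "xi_form \<phi> g u y b = pder b \<phi> y - (\<phi> y)^2 * lower g u y b"

definition cov_der_riem_up :: "('n::finite) metric_field \<Rightarrow> real^'n \<Rightarrow> 'n \<Rightarrow> 'n \<Rightarrow> 'n \<Rightarrow> 'n \<Rightarrow> 'n \<Rightarrow> real" where
  "cov_der_riem_up g y e a b c d = pder e (\<lambda>z. riem_up g z a b c d) y + (\<Sum>f\<in>UNIV. christ g y a e f * riem_up g y f b c d)
     - (\<Sum>f\<in>UNIV. christ g y f e b * riem_up g y a f c d + christ g y f e c * riem_up g y a b f d
                  + christ g y f e d * riem_up g y a b c f)"

text \<open>The terms of \<open>\<nabla>\<^sub>e R\<^sup>a\<^sub>b\<^sub>c\<^sub>d\<close> in coordinates, grouped by type (derivative of a Christoffel symbol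
  times a Christoffel symbol, either way round, and triple products); their cyclic sums cancel in
  the second Bianchi identity.\<close>

definition bianchi_dC_C :: "('n::finite) metric_field \<Rightarrow> real^'n \<Rightarrow> 'n \<Rightarrow> 'n \<Rightarrow> 'n \<Rightarrow> 'n \<Rightarrow> 'n \<Rightarrow> real" where
  "bianchi_dC_C g y a b x w z = (\<Sum>f\<in>UNIV. pder x (\<lambda>v. christ g v a w f) y * christ g y f z b)"

definition bianchi_C_dC :: "('n::finite) metric_field \<Rightarrow> real^'n \<Rightarrow> 'n \<Rightarrow> 'n \<Rightarrow> 'n \<Rightarrow> 'n \<Rightarrow> 'n \<Rightarrow> real" where
  "bianchi_C_dC g y a b w x z = (\<Sum>f\<in>UNIV. christ g y a w f * pder x (\<lambda>v. christ g v f z b) y)"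

definition bianchi_CCC :: "('n::finite) metric_field \<Rightarrow> real^'n \<Rightarrow> 'n \<Rightarrow> 'n \<Rightarrow> 'n \<Rightarrow> 'n \<Rightarrow> 'n \<Rightarrow> real" where
  "bianchi_CCC g y a b x w z = (\<Sum>f\<in>UNIV. \<Sum>h\<in>UNIV. christ g y a x f * (christ g y f w h * christ g y h z b))"

definition cov_der3 :: "('n::finite) metric_field \<Rightarrow> 'n tensor3_field \<Rightarrow> real^'n \<Rightarrow> 'n \<Rightarrow> 'n \<Rightarrow> 'n \<Rightarrow> 'n \<Rightarrow> real" where
  "cov_der3 g T y p j k m = pder p (\<lambda>z. T z j k m) y
     - (\<Sum>q\<in>UNIV. christ g y q p j * T y q k m + christ g y q p k * T y j q m + christ g y q p m * T y j k q)"

definition cov_der_u :: "('n::finite) metric_field \<Rightarrow> 'n vector_field \<Rightarrow> 'n tensor2_field" where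
  "cov_der_u g u y p a = pder p (\<lambda>z. u z $ a) y + (\<Sum>q\<in>UNIV. christ g y a p q * u y $ q)"

definition dir_der4 :: "('n::finite) metric_field \<Rightarrow> 'n vector_field \<Rightarrow> 'n tensor4_field \<Rightarrow> 'n tensor4_field" where
  "dir_der4 g u T y j k l m = (\<Sum>p\<in>UNIV. u y $ p * cov_der4 g T y p j k l m)"

definition dir_der2 :: "('n::finite) metric_field \<Rightarrow> 'n vector_field \<Rightarrow> 'n tensor2_field \<Rightarrow> 'n tensor2_field" where
  "dir_der2 g u Q y k l = (\<Sum>p\<in>UNIV. u y $ p * cov_der2 g Q y p k l)"

section \<open>Spacetimes with a concircular unit vector field\<close>

locale concircular_spacetime =
  fixes g :: "real^'n::finite \<Rightarrow> real^'n^'n"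
    and u :: "real^'n \<Rightarrow> real^'n"
    and \<phi> :: "real^'n \<Rightarrow> real"
    and U :: "(real^'n) set"
  assumes dim: "CARD('n) > 3"
    and U_open: "open U"
    and g_smooth: "\<forall>i j. smooth_fn U (\<lambda>x. g x $ i $ j)"
    and g_lor: "\<forall>x\<in>U. lorentzian (g x)"
    and u_smooth: "\<forall>k. smooth_fn U (\<lambda>x. u x $ k)"
    and u_unit: "\<forall>x\<in>U. bform (g x) (u x) (u x) = -1"
    and u_conc: "\<forall>x\<in>U. \<forall>i j. cov_der1 g (lower g u) x i j
                   = \<phi> x * (g x $ i $ j + lower g u x i * lower g u x j)"
begin

lemmas smooth_intros = smooth_fn_add[OF U_open] smooth_fn_mult[OF U_open] smooth_fn_diff[OF U_open]
  smooth_fn_minus[OF U_open] smooth_fn_const[OF U_open] smooth_fn_pder[OF U_open]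
  smooth_fn_divide_const[OF U_open] smooth_fn_sum[OF U_open finite]

lemma pder_sum_smooth:
  "(\<And>a. smooth_fn U (\<lambda>z. F z a)) \<Longrightarrow> y \<in> U \<Longrightarrow>
    pder i (\<lambda>z. \<Sum>a\<in>(UNIV::'b::finite set). F z a) y = (\<Sum>a\<in>UNIV. pder i (\<lambda>z. F z a) y)"
  by (rule pder_sum) (auto intro: smooth_fn_differentiable[OF U_open])

lemmas differentiable_at = smooth_fn_differentiable[OF U_open]

lemmas pder_smooth_rules = pder_add[OF differentiable_at differentiable_at]
  pder_diff[OF differentiable_at differentiable_at] pder_mult[OF differentiable_at differentiable_at]
  pder_minus[OF differentiable_at] pder_cmult[OF differentiable_at]
  pder_mult_const[OF differentiable_at] pder_divide_const[OF differentiable_at]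
  pder_sum_smooth pder_const

lemma g_sym: "y \<in> U \<Longrightarrow> g y $ i $ j = g y $ j $ i"
  using g_lor unfolding lorentzian_def by blast

lemma det_g_nonzero: "y \<in> U \<Longrightarrow> det (g y) \<noteq> 0"
  using g_lor lorentzian_det_nonzero by blast

lemma matrix_inv_g: "y \<in> U \<Longrightarrow> g y ** matrix_inv (g y) = mat 1 \<and> matrix_inv (g y) ** g y = mat 1"
proof -
  assume y: "y \<in> U"
  then have "invertible (g y)" using det_g_nonzero invertible_det_nz by blast
  then show ?thesis unfolding invertible_def matrix_inv_def by (rule someI_ex)
qed

lemma g_ginv: "y \<in> U \<Longrightarrow> (\<Sum>k\<in>UNIV. g y $ i $ k * ginv g y k j) = (if i = j then 1 else 0)"
proof -
  assume y: "y \<in> U"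
  have "(g y ** matrix_inv (g y)) $ i $ j = mat 1 $ i $ j" using matrix_inv_g[OF y] by simp
  then show ?thesis unfolding ginv_def matrix_matrix_mult_def mat_def by simp
qed
lemma ginv_g: "y \<in> U \<Longrightarrow> (\<Sum>k\<in>UNIV. ginv g y i k * g y $ k $ j) = (if i = j then 1 else 0)"
proof -
  assume y: "y \<in> U"
  have "(matrix_inv (g y) ** g y) $ i $ j = mat 1 $ i $ j" using matrix_inv_g[OF y] by simp
  then show ?thesis unfolding ginv_def matrix_matrix_mult_def mat_def by simp
qed

lemma ginv_sym: "y \<in> U \<Longrightarrow> ginv g y i j = ginv g y j i"
proof -
  assume y: "y \<in> U"
  have d: "(\<Sum>l\<in>UNIV. ginv g y l i * g y $ l $ k) = (if k = i then 1 else 0)" for k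
    using g_ginv[OF y, of k i] g_sym[OF y] by (simp add: mult.commute)
  have "ginv g y i j = (\<Sum>k\<in>UNIV. (\<Sum>l\<in>UNIV. ginv g y l i * g y $ l $ k) * ginv g y k j)"
    unfolding d by simp
  also have "\<dots> = (\<Sum>l\<in>UNIV. ginv g y l i * (\<Sum>k\<in>UNIV. g y $ l $ k * ginv g y k j))"
    by (simp add: sum_distrib_left sum_distrib_right mult_ac, subst sum.swap, simp add: mult_ac)
  also have "\<dots> = ginv g y j i" using g_ginv[OF y] by simp
  finally show ?thesis .
qed

lemma ginv_cramer: "y \<in> U \<Longrightarrow>
   ginv g y k j = det (\<chi> r c. if c = k then axis j 1 $ r else g y $ r $ c) / det (g y)"
proof -
  assume y: "y \<in> U"
  define x where "x = matrix_inv (g y) *v axis j 1"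
  have "g y *v x = axis j 1"
    unfolding x_def by (simp add: matrix_vector_mul_assoc matrix_inv_g[OF y])
  then have "x = (\<chi> k. det (\<chi> r c. if c = k then axis j 1 $ r else g y $ r $ c) / det (g y))"
    using cramer[OF det_g_nonzero[OF y]] by blast
  then have "x $ k = det (\<chi> r c. if c = k then axis j 1 $ r else g y $ r $ c) / det (g y)" by simp
  moreover have "x $ k = ginv g y k j"
    unfolding x_def ginv_def matrix_vector_mult_def axis_def
    by (simp add: if_distrib cong: if_cong)
  ultimately show ?thesis by simp
qed

lemma smooth_g: "smooth_fn U (\<lambda>y. g y $ i $ j)"
  using g_smooth by blast
lemma smooth_u: "smooth_fn U (\<lambda>y. u y $ k)"
  using u_smooth by blast

lemma smooth_ginv: "smooth_fn U (\<lambda>y. ginv g y k j)"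
proof -
  have e: "smooth_fn U (\<lambda>z. (\<chi> r c. if c = k then axis j 1 $ r else g z $ r $ c) $ a $ b)" for a b
    by (cases "b = k") (simp_all add: smooth_fn_const[OF U_open] smooth_g)
  have "smooth_fn U (\<lambda>y. det (\<chi> r c. if c = k then axis j 1 $ r else g y $ r $ c) / det (g y))"
    by (intro smooth_fn_divide U_open smooth_fn_det smooth_g e) (use det_g_nonzero in auto)
  then show ?thesis by (rule smooth_fn_cong[OF U_open]) (simp add: ginv_cramer)
qed

lemma smooth_lower: "smooth_fn U (\<lambda>y. lower g u y j)"
  unfolding lower_def by (intro smooth_intros smooth_g smooth_u)

lemma smooth_christ: "smooth_fn U (\<lambda>y. christ g y k i j)"
  unfolding christ_def by (intro smooth_intros smooth_g smooth_ginv)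

lemma pder_g_sym: "y \<in> U \<Longrightarrow> pder k (\<lambda>z. g z $ i $ j) y = pder k (\<lambda>z. g z $ j $ i) y"
  by (rule pder_cong_open[OF U_open]) (simp_all add: g_sym)

lemma christ_sym: "y \<in> U \<Longrightarrow> christ g y k i j = christ g y k j i"
  unfolding christ_def using pder_g_sym by (simp add: algebra_simps)

lemma christ_lowered: "y \<in> U \<Longrightarrow> (\<Sum>q\<in>UNIV. christ g y q i j * g y $ q $ k) =
   (1/2) * (pder i (\<lambda>z. g z $ j $ k) y + pder j (\<lambda>z. g z $ i $ k) y - pder k (\<lambda>z. g z $ i $ j) y)"
proof -
  assume y: "y \<in> U"
  define S where "S l = pder i (\<lambda>z. g z $ j $ l) y + pder j (\<lambda>z. g z $ i $ l) y - pder l (\<lambda>z. g z $ i $ j) y" for l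
  have "(\<Sum>q\<in>UNIV. christ g y q i j * g y $ q $ k) = (\<Sum>q\<in>UNIV. (1/2) * (\<Sum>l\<in>UNIV. ginv g y q l * S l) * g y $ q $ k)"
    unfolding christ_def S_def by simp
  also have "\<dots> = (1/2) * (\<Sum>l\<in>UNIV. S l * (\<Sum>q\<in>UNIV. ginv g y l q * g y $ q $ k))"
    by (simp only: sum_distrib_left sum_distrib_right, rule sum_swap_cong, simp add: ginv_sym[OF y] mult_ac)
  also have "\<dots> = (1/2) * S k" using ginv_g[OF y] by simp
  finally show ?thesis unfolding S_def .
qed

lemma pder_g_christ: "y \<in> U \<Longrightarrow> pder i (\<lambda>z. g z $ j $ k) y =
    (\<Sum>q\<in>UNIV. christ g y q i j * g y $ q $ k) + (\<Sum>q\<in>UNIV. christ g y q i k * g y $ j $ q)"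
proof -
  assume y: "y \<in> U"
  have "(\<Sum>q\<in>UNIV. christ g y q i k * g y $ j $ q) = (\<Sum>q\<in>UNIV. christ g y q i k * g y $ q $ j)"
    using g_sym[OF y] by simp
  then show ?thesis using christ_lowered[OF y, of i j k] christ_lowered[OF y, of i k j] pder_g_sym[OF y, of _ k j]
    pder_g_sym[OF y, of _ j i] by simp
qed

lemma smooth_riem_up: "smooth_fn U (\<lambda>y. riem_up g y a b c d)"
  unfolding riem_up_def by (intro smooth_intros smooth_christ)
lemma smooth_riem: "smooth_fn U (\<lambda>y. riem g y a b c d)"
  unfolding riem_def by (intro smooth_intros smooth_g smooth_riem_up)

lemma smooth_ricci: "smooth_fn U (\<lambda>z. ricci g z b d)"
  unfolding ricci_def by (intro smooth_intros smooth_riem_up)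

lemma smooth_scal: "smooth_fn U (\<lambda>z. scal g z)"
  unfolding scal_def by (intro smooth_intros smooth_ginv smooth_ricci)

lemma smooth_weyl: "smooth_fn U (\<lambda>z. weyl g z i k l m)"
  unfolding weyl_def Let_def by (intro smooth_intros smooth_riem smooth_g smooth_ricci smooth_scal)

lemma smooth_electric: "smooth_fn U (\<lambda>z. electric g u z k l)"
  unfolding electric_def by (intro smooth_intros smooth_u smooth_weyl)

lemma smooth_GammaT: "smooth_fn U (\<lambda>z. GammaT g u z i k l m)"
  unfolding GammaT_def Let_def by (intro smooth_intros smooth_weyl smooth_lower smooth_electric smooth_g)

lemma smooth_kulkarni_nomizu: "(\<And>a b. smooth_fn U (\<lambda>z. P z a b)) \<Longrightarrow> (\<And>a b. smooth_fn U (\<lambda>z. Q z a b)) \<Longrightarrow> smooth_fn U (\<lambda>z. kulkarni_nomizu (P z) (Q z) i k l m)"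
  unfolding kulkarni_nomizu_def by (intro smooth_intros) auto

lemma smooth_lower_u_sq: "smooth_fn U (\<lambda>z. lower g u z a * lower g u z b)"
  by (intro smooth_intros smooth_lower)

lemma g_pder_christ: "y \<in> U \<Longrightarrow> (\<Sum>e\<in>UNIV. g y $ a $ e * pder c (\<lambda>z. christ g z e d b) y) =
   (1/2) * (pder c (pder d (\<lambda>z. g z $ b $ a)) y + pder c (pder b (\<lambda>z. g z $ d $ a)) y
            - pder c (pder a (\<lambda>z. g z $ d $ b)) y)
   - (\<Sum>e\<in>UNIV. pder c (\<lambda>z. g z $ a $ e) y * christ g y e d b)"
proof -
  assume y: "y \<in> U"
  define L where "L z = (\<Sum>e\<in>UNIV. g z $ a $ e * christ g z e d b)" for z
  have pL: "pder c L y = (\<Sum>e\<in>UNIV. pder c (\<lambda>z. g z $ a $ e) y * christ g y e d b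
                                    + g y $ a $ e * pder c (\<lambda>z. christ g z e d b) y)"
    unfolding L_def using y by (simp add: pder_smooth_rules smooth_intros smooth_g smooth_christ)
  have Lz: "L z = (1/2) * (pder d (\<lambda>z. g z $ b $ a) z + pder b (\<lambda>z. g z $ d $ a) z
            - pder a (\<lambda>z. g z $ d $ b) z)" if z: "z \<in> U" for z
    unfolding L_def using christ_lowered[OF z, of d b a] g_sym[OF z]
    by (simp add: mult.commute)
  have "pder c L y = pder c (\<lambda>z. (1/2) * (pder d (\<lambda>z. g z $ b $ a) z + pder b (\<lambda>z. g z $ d $ a) z
            - pder a (\<lambda>z. g z $ d $ b) z)) y"
    by (rule pder_cong_open[OF U_open y]) (simp add: Lz)
  also have "\<dots> = (1/2) * (pder c (pder d (\<lambda>z. g z $ b $ a)) y + pder c (pder b (\<lambda>z. g z $ d $ a)) y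
            - pder c (pder a (\<lambda>z. g z $ d $ b)) y)"
    using y by (simp add: pder_smooth_rules smooth_intros smooth_g)
  finally show ?thesis using pL by (simp add: sum.distrib, linarith)
qed

lemma pder_g_christ_sum: "y \<in> U \<Longrightarrow> (\<Sum>e\<in>UNIV. pder c (\<lambda>z. g z $ a $ e) y * christ g y e d b) =
   (\<Sum>e\<in>UNIV. \<Sum>q\<in>UNIV. christ g y q c a * g y $ q $ e * christ g y e d b)
   + (\<Sum>e\<in>UNIV. g y $ a $ e * (\<Sum>f\<in>UNIV. christ g y e c f * christ g y f d b))"
proof -
  assume y: "y \<in> U"
  have "(\<Sum>e\<in>UNIV. pder c (\<lambda>z. g z $ a $ e) y * christ g y e d b) =
     (\<Sum>e\<in>UNIV. \<Sum>q\<in>UNIV. christ g y q c a * g y $ q $ e * christ g y e d b)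
   + (\<Sum>e\<in>UNIV. \<Sum>q\<in>UNIV. christ g y q c e * g y $ a $ q * christ g y e d b)"
    unfolding pder_g_christ[OF y] by (simp add: sum.distrib sum_distrib_right distrib_right)
  also have "(\<Sum>e\<in>UNIV. \<Sum>q\<in>UNIV. christ g y q c e * g y $ a $ q * christ g y e d b)
     = (\<Sum>e\<in>UNIV. g y $ a $ e * (\<Sum>f\<in>UNIV. christ g y e c f * christ g y f d b))"
    by (simp only: sum_distrib_left, rule sum_swap_cong, simp add: mult_ac)
  finally show ?thesis .
qed

lemma riem_split: "riem g y a b c d =
    (\<Sum>e\<in>UNIV. g y $ a $ e * pder c (\<lambda>z. christ g z e d b) y)
  - (\<Sum>e\<in>UNIV. g y $ a $ e * pder d (\<lambda>z. christ g z e c b) y)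
  + (\<Sum>e\<in>UNIV. g y $ a $ e * (\<Sum>f\<in>UNIV. christ g y e c f * christ g y f d b))
  - (\<Sum>e\<in>UNIV. g y $ a $ e * (\<Sum>f\<in>UNIV. christ g y e d f * christ g y f c b))"
  unfolding riem_def riem_up_def
  by (simp add: sum_subtractf sum.distrib right_diff_distrib distrib_left)

lemma riem_second_derivs: "y \<in> U \<Longrightarrow> riem g y a b c d =
   (1/2) * (pder c (pder b (\<lambda>z. g z $ d $ a)) y - pder c (pder a (\<lambda>z. g z $ d $ b)) y
          - pder d (pder b (\<lambda>z. g z $ c $ a)) y + pder d (pder a (\<lambda>z. g z $ c $ b)) y)
   - (\<Sum>e\<in>UNIV. \<Sum>q\<in>UNIV. christ g y q c a * g y $ q $ e * christ g y e d b)
   + (\<Sum>e\<in>UNIV. \<Sum>q\<in>UNIV. christ g y q d a * g y $ q $ e * christ g y e c b)"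
proof -
  assume y: "y \<in> U"
  have cl: "pder c (pder d (\<lambda>z. g z $ b $ a)) y = pder d (pder c (\<lambda>z. g z $ b $ a)) y"
    by (rule pder_commute[OF U_open smooth_g y])
  show ?thesis
    unfolding riem_split g_pder_christ[OF y, of a c d b] g_pder_christ[OF y, of a d c b]
      pder_g_christ_sum[OF y, of c a d b] pder_g_christ_sum[OF y, of d a c b] cl by (simp add: algebra_simps)
qed

lemma riem_antisym12: "y \<in> U \<Longrightarrow> riem g y a b c d = - riem g y b a c d"
proof -
  assume y: "y \<in> U"
  have M: "(\<Sum>e\<in>UNIV. \<Sum>q\<in>UNIV. christ g y q c a * g y $ q $ e * christ g y e d b)
     = (\<Sum>e\<in>UNIV. \<Sum>q\<in>UNIV. christ g y q d b * g y $ q $ e * christ g y e c a)" for c d a b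
    by (rule sum_swap_cong) (simp add: g_sym[OF y] mult_ac)
  show ?thesis
    unfolding riem_second_derivs[OF y, of a b] riem_second_derivs[OF y, of b a] M[of c a d b] M[of d a c b]
    by (simp add: algebra_simps)
qed

lemma riem_antisym34: "riem g y a b c d = - riem g y a b d c"
  unfolding riem_def riem_up_def by (simp add: sum_negf[symmetric] algebra_simps sum_subtractf)

lemma pder_christ_sym: "y \<in> U \<Longrightarrow> pder k (\<lambda>z. christ g z a i j) y = pder k (\<lambda>z. christ g z a j i) y"
  by (rule pder_cong_open[OF U_open]) (simp_all add: christ_sym)

lemma riem_up_first_bianchi: "y \<in> U \<Longrightarrow> riem_up g y a b c d + riem_up g y a c d b + riem_up g y a d b c = 0"
proof -
  assume y: "y \<in> U"
  have s1: "\<And>f. christ g y f b d = christ g y f d b" "\<And>f. christ g y f b c = christ g y f c b"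
     "\<And>f. christ g y f c d = christ g y f d c" using christ_sym[OF y] by blast+
  show ?thesis unfolding riem_up_def
    using pder_christ_sym[OF y, of d a b c] pder_christ_sym[OF y, of b a c d] pder_christ_sym[OF y, of c a b d]
    by (simp add: s1 sum_subtractf sum.distrib[symmetric] algebra_simps)
qed

lemma riem_first_bianchi: "y \<in> U \<Longrightarrow> riem g y a b c d + riem g y a c d b + riem g y a d b c = 0"
proof -
  assume y: "y \<in> U"
  have "riem g y a b c d + riem g y a c d b + riem g y a d b c =
    (\<Sum>e\<in>UNIV. g y $ a $ e * (riem_up g y e b c d + riem_up g y e c d b + riem_up g y e d b c))"
    unfolding riem_def by (simp add: sum.distrib distrib_left)
  also have "\<dots> = 0" by (simp add: riem_up_first_bianchi[OF y])
  finally show ?thesis .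
qed

lemma riem_pair_sym: "y \<in> U \<Longrightarrow> riem g y a b c d = riem g y c d a b"
proof -
  assume y: "y \<in> U"
  note A1 = riem_antisym12[OF y] and A2 = riem_antisym34[of y] and B = riem_first_bianchi[OF y]
  show ?thesis
    using B[of a b c d] B[of b c d a] B[of c d a b] B[of d a b c]
      A1[of b a c d] A1[of d c a b] A1[of c b d a] A1[of d a b c] A1[of c a b d] A2[of a c b d]
      A1[of d b c a] A2[of b d c a]
    by linarith
qed

lemma smooth_cov_der1: "(\<And>c. smooth_fn U (\<lambda>z. w z c)) \<Longrightarrow> smooth_fn U (\<lambda>z. cov_der1 g w z b c)"
  unfolding cov_der1_def by (intro smooth_intros smooth_christ) auto

lemma ricci_identity:
  assumes y: "y \<in> U" and w: "\<And>c. smooth_fn U (\<lambda>z. w z c)"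
  shows "cov_der2 g (cov_der1 g w) y a b c - cov_der2 g (cov_der1 g w) y b a c
       = - (\<Sum>m\<in>UNIV. riem_up g y m c a b * w y m)"
proof -
  let ?G = "christ g y"
  have e: "pder a (\<lambda>z. cov_der1 g w z b c) y = pder a (pder b (\<lambda>z. w z c)) y
      - ((\<Sum>k\<in>UNIV. pder a (\<lambda>z. christ g z k b c) y * w y k) + (\<Sum>k\<in>UNIV. ?G k b c * pder a (\<lambda>z. w z k) y))"
    for a b
    unfolding cov_der1_def using y w by (simp add: pder_smooth_rules smooth_intros smooth_christ sum.distrib)
  have cl: "pder a (pder b (\<lambda>z. w z c)) y = pder b (pder a (\<lambda>z. w z c)) y" by (rule pder_commute[OF U_open w y])
  have sy: "(\<Sum>k\<in>UNIV. ?G k a b * cov_der1 g w y k c) = (\<Sum>k\<in>UNIV. ?G k b a * cov_der1 g w y k c)"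
    using christ_sym[OF y] by simp
  have q: "(\<Sum>k\<in>UNIV. ?G k a c * cov_der1 g w y b k) = (\<Sum>k\<in>UNIV. ?G k a c * pder b (\<lambda>z. w z k) y)
       - (\<Sum>k\<in>UNIV. \<Sum>m\<in>UNIV. ?G k a c * ?G m b k * w y m)" for a b
    unfolding cov_der1_def by (simp add: right_diff_distrib sum_subtractf sum_distrib_left mult_ac)
  have r: "(\<Sum>m\<in>UNIV. riem_up g y m c a b * w y m) =
      (\<Sum>k\<in>UNIV. pder a (\<lambda>z. christ g z k b c) y * w y k) - (\<Sum>k\<in>UNIV. pder b (\<lambda>z. christ g z k a c) y * w y k)
      + (\<Sum>k\<in>UNIV. \<Sum>m\<in>UNIV. ?G k b c * ?G m a k * w y m) - (\<Sum>k\<in>UNIV. \<Sum>m\<in>UNIV. ?G k a c * ?G m b k * w y m)"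
  proof -
    have "(\<Sum>m\<in>UNIV. riem_up g y m c a b * w y m) =
      (\<Sum>k\<in>UNIV. pder a (\<lambda>z. christ g z k b c) y * w y k) - (\<Sum>k\<in>UNIV. pder b (\<lambda>z. christ g z k a c) y * w y k)
      + (\<Sum>m\<in>UNIV. \<Sum>k\<in>UNIV. ?G m a k * ?G k b c * w y m) - (\<Sum>m\<in>UNIV. \<Sum>k\<in>UNIV. ?G m b k * ?G k a c * w y m)"
      unfolding riem_up_def
      by (simp add: algebra_simps sum_subtractf sum.distrib sum_distrib_left sum_distrib_right)
    also have "(\<Sum>m\<in>UNIV. \<Sum>k\<in>UNIV. ?G m a k * ?G k b c * w y m) = (\<Sum>k\<in>UNIV. \<Sum>m\<in>UNIV. ?G k b c * ?G m a k * w y m)"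
      by (rule sum_swap_cong) (simp add: mult_ac)
    also have "(\<Sum>m\<in>UNIV. \<Sum>k\<in>UNIV. ?G m b k * ?G k a c * w y m) = (\<Sum>k\<in>UNIV. \<Sum>m\<in>UNIV. ?G k a c * ?G m b k * w y m)"
      by (rule sum_swap_cong) (simp add: mult_ac)
    finally show ?thesis .
  qed
  show ?thesis
    unfolding cov_der2_def e[of a b] e[of b a] cl sy q[of a b] q[of b a] r
    by (simp add: algebra_simps)
qed

lemma ginv_lower_u: "y \<in> U \<Longrightarrow> (\<Sum>i\<in>UNIV. ginv g y j i * lower g u y i) = u y $ j"
proof -
  assume y: "y \<in> U"
  have "(\<Sum>i\<in>UNIV. ginv g y j i * lower g u y i) = (\<Sum>k\<in>UNIV. (\<Sum>i\<in>UNIV. ginv g y j i * g y $ i $ k) * u y $ k)"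
    unfolding lower_def by (simp only: sum_distrib_left sum_distrib_right, rule sum_swap_cong, simp add: mult_ac)
  also have "\<dots> = u y $ j" using ginv_g[OF y] by simp
  finally show ?thesis .
qed

lemma u_lower_u: "y \<in> U \<Longrightarrow> (\<Sum>j\<in>UNIV. u y $ j * lower g u y j) = -1"
  using u_unit unfolding lower_def bform_def by (simp add: sum_distrib_left mult_ac)

lemma trace_g: "y \<in> U \<Longrightarrow> (\<Sum>i\<in>UNIV. \<Sum>j\<in>UNIV. ginv g y i j * g y $ i $ j) = real CARD('n)"
proof -
  assume y: "y \<in> U"
  have "(\<Sum>i\<in>UNIV. \<Sum>j\<in>UNIV. ginv g y i j * g y $ i $ j) = (\<Sum>i\<in>UNIV. \<Sum>j\<in>UNIV. ginv g y i j * g y $ j $ i)"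
    using g_sym[OF y] by simp
  also have "\<dots> = (\<Sum>i\<in>(UNIV::'n set). 1)" using ginv_g[OF y] by simp
  finally show ?thesis by simp
qed

lemma trace_lower_u_sq: "y \<in> U \<Longrightarrow> (\<Sum>i\<in>UNIV. \<Sum>j\<in>UNIV. ginv g y i j * (lower g u y i * lower g u y j)) = -1"
proof -
  assume y: "y \<in> U"
  have "(\<Sum>i\<in>UNIV. \<Sum>j\<in>UNIV. ginv g y i j * (lower g u y i * lower g u y j))
      = (\<Sum>j\<in>UNIV. (\<Sum>i\<in>UNIV. ginv g y j i * lower g u y i) * lower g u y j)"
    by (simp only: sum_distrib_left sum_distrib_right, rule sum_swap_cong, simp add: mult_ac ginv_sym[OF y])
  also have "\<dots> = -1" using ginv_lower_u[OF y] u_lower_u[OF y] by simp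
  finally show ?thesis .
qed

text \<open>The function \<open>\<phi>\<close> is not assumed smooth; it is a trace of \<open>\<nabla>v\<close>, hence smooth.\<close>

lemma phi_eq_trace: "y \<in> U \<Longrightarrow>
   \<phi> y = (\<Sum>i\<in>UNIV. \<Sum>j\<in>UNIV. ginv g y i j * cov_der1 g (lower g u) y i j) / (real CARD('n) - 1)"
proof -
  assume y: "y \<in> U"
  have "(\<Sum>i\<in>UNIV. \<Sum>j\<in>UNIV. ginv g y i j * cov_der1 g (lower g u) y i j)
    = \<phi> y * ((\<Sum>i\<in>UNIV. \<Sum>j\<in>UNIV. ginv g y i j * g y $ i $ j) +
              (\<Sum>i\<in>UNIV. \<Sum>j\<in>UNIV. ginv g y i j * (lower g u y i * lower g u y j)))"
    using u_conc y by (simp add: distrib_left sum.distrib sum_distrib_left mult_ac)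
  also have "\<dots> = \<phi> y * (real CARD('n) - 1)" using trace_g[OF y] trace_lower_u_sq[OF y] by simp
  finally show ?thesis using dim by simp
qed

lemma smooth_phi: "smooth_fn U \<phi>"
proof -
  have "smooth_fn U (\<lambda>y. (\<Sum>i\<in>UNIV. \<Sum>j\<in>UNIV. ginv g y i j * cov_der1 g (lower g u) y i j) / (real CARD('n) - 1))"
    by (intro smooth_fn_divide U_open smooth_intros smooth_ginv smooth_cov_der1 smooth_lower) (use dim in auto)
  then show ?thesis by (rule smooth_fn_cong[OF U_open]) (simp add: phi_eq_trace)
qed

lemma smooth_rest_metric: "smooth_fn U (\<lambda>z. rest_metric g u z i j)"
  unfolding rest_metric_def by (intro smooth_intros smooth_g smooth_lower)

lemma cov_der2_cong:
  assumes y: "y \<in> U" and eq: "\<And>z b c. z \<in> U \<Longrightarrow> T z b c = S z b c"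
  shows "cov_der2 g T y a b c = cov_der2 g S y a b c"
proof -
  have "pder a (\<lambda>z. T z b c) y = pder a (\<lambda>z. S z b c) y" by (rule pder_cong_open[OF U_open y]) (simp add: eq)
  then show ?thesis unfolding cov_der2_def using eq[OF y] by simp
qed

lemma cov_der2_scale: "y \<in> U \<Longrightarrow> smooth_fn U f \<Longrightarrow> smooth_fn U (\<lambda>z. T z b c) \<Longrightarrow>
   cov_der2 g (\<lambda>z b c. f z * T z b c) y a b c = pder a f y * T y b c + f y * cov_der2 g T y a b c"
  unfolding cov_der2_def by (simp add: pder_smooth_rules algebra_simps sum_distrib_left)

lemma cov_der2_add: "y \<in> U \<Longrightarrow> smooth_fn U (\<lambda>z. T z b c) \<Longrightarrow> smooth_fn U (\<lambda>z. S z b c) \<Longrightarrow>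
   cov_der2 g (\<lambda>z b c. T z b c + S z b c) y a b c = cov_der2 g T y a b c + cov_der2 g S y a b c"
  unfolding cov_der2_def by (simp add: pder_smooth_rules algebra_simps sum.distrib)

lemma cov_der2_metric: "y \<in> U \<Longrightarrow> cov_der2 g (\<lambda>z b c. g z $ b $ c) y a b c = 0"
  unfolding cov_der2_def using pder_g_christ[of y a b c] by (simp add: g_sym)

lemma cov_der2_lower_u_sq: "y \<in> U \<Longrightarrow> cov_der2 g (\<lambda>z b c. lower g u z b * lower g u z c) y a b c =
    cov_der1 g (lower g u) y a b * lower g u y c + lower g u y b * cov_der1 g (lower g u) y a c"
  unfolding cov_der2_def cov_der1_def
  by (simp add: pder_smooth_rules smooth_lower algebra_simps sum_distrib_left sum_distrib_right sum_subtractf)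

lemma cov_der2_rest_metric: "y \<in> U \<Longrightarrow> cov_der2 g (rest_metric g u) y a b c =
    \<phi> y * (rest_metric g u y a b * lower g u y c + lower g u y b * rest_metric g u y a c)"
proof -
  assume y: "y \<in> U"
  have "cov_der2 g (rest_metric g u) y a b c = cov_der2 g (\<lambda>z b c. g z $ b $ c) y a b c + cov_der2 g (\<lambda>z b c. lower g u z b * lower g u z c) y a b c"
    unfolding rest_metric_def using y by (intro cov_der2_add) (auto intro: smooth_intros smooth_g smooth_lower)
  then show ?thesis using y u_conc by (simp add: cov_der2_metric cov_der2_lower_u_sq rest_metric_def algebra_simps)
qed

lemma u_riem_slot1: "y \<in> U \<Longrightarrow> (\<Sum>k\<in>UNIV. u y $ k * riem g y k c a b) =
   rest_metric g u y a c * (pder b \<phi> y - (\<phi> y)\<^sup>2 * lower g u y b) - rest_metric g u y b c * (pder a \<phi> y - (\<phi> y)\<^sup>2 * lower g u y a)"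
proof -
  assume y: "y \<in> U"
  have cc: "cov_der2 g (cov_der1 g (lower g u)) y a b c = cov_der2 g (\<lambda>z b c. \<phi> z * rest_metric g u z b c) y a b c" for a b
    by (rule cov_der2_cong[OF y]) (use u_conc in \<open>simp add: rest_metric_def\<close>)
  have cc2: "cov_der2 g (\<lambda>z b c. \<phi> z * rest_metric g u z b c) y a b c =
      pder a \<phi> y * rest_metric g u y b c + \<phi> y * (\<phi> y * (rest_metric g u y a b * lower g u y c + lower g u y b * rest_metric g u y a c))" for a b
    using cov_der2_scale[OF y smooth_phi smooth_rest_metric] cov_der2_rest_metric[OF y] by simp
  have ri: "cov_der2 g (cov_der1 g (lower g u)) y a b c - cov_der2 g (cov_der1 g (lower g u)) y b a c
       = - (\<Sum>m\<in>UNIV. riem_up g y m c a b * lower g u y m)"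
    by (rule ricci_identity[OF y smooth_lower])
  have low: "(\<Sum>m\<in>UNIV. riem_up g y m c a b * lower g u y m) = (\<Sum>k\<in>UNIV. u y $ k * riem g y k c a b)"
    unfolding lower_def riem_def
    by (simp only: sum_distrib_left sum_distrib_right, rule sum_swap_cong, simp add: mult_ac g_sym[OF y])
  have rest_metric_sym: "rest_metric g u y b a = rest_metric g u y a b" "rest_metric g u y c a = rest_metric g u y a c" "rest_metric g u y c b = rest_metric g u y b c"
    unfolding rest_metric_def using g_sym[OF y] by (auto simp: mult.commute)
  show ?thesis using ri unfolding cc cc2 low rest_metric_sym
    by (simp add: algebra_simps power2_eq_square)
qed

lemma riem_up_eq_ginv_riem: "y \<in> U \<Longrightarrow> riem_up g y a b c d = (\<Sum>e\<in>UNIV. ginv g y a e * riem g y e b c d)"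
proof -
  assume y: "y \<in> U"
  have "(\<Sum>e\<in>UNIV. ginv g y a e * riem g y e b c d) = (\<Sum>f\<in>UNIV. (\<Sum>e\<in>UNIV. ginv g y a e * g y $ e $ f) * riem_up g y f b c d)"
    unfolding riem_def by (simp only: sum_distrib_left sum_distrib_right, rule sum_swap_cong, simp add: mult_ac)
  also have "\<dots> = riem_up g y a b c d" using ginv_g[OF y] by simp
  finally show ?thesis by simp
qed

lemma ricci_eq_trace_riem: "y \<in> U \<Longrightarrow> ricci g y b d = (\<Sum>a\<in>UNIV. \<Sum>c\<in>UNIV. ginv g y a c * riem g y a b c d)"
proof -
  assume y: "y \<in> U"
  have "ricci g y b d = (\<Sum>c\<in>UNIV. \<Sum>a\<in>UNIV. ginv g y c a * riem g y a b c d)"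
    unfolding ricci_def using riem_up_eq_ginv_riem[OF y] by simp
  also have "\<dots> = (\<Sum>a\<in>UNIV. \<Sum>c\<in>UNIV. ginv g y a c * riem g y a b c d)"
    by (rule sum_swap_cong) (simp add: ginv_sym[OF y])
  finally show ?thesis .
qed

lemma ricci_sym: "y \<in> U \<Longrightarrow> ricci g y b d = ricci g y d b"
proof -
  assume y: "y \<in> U"
  have "ricci g y b d = (\<Sum>a\<in>UNIV. \<Sum>c\<in>UNIV. ginv g y a c * riem g y c d a b)"
    unfolding ricci_eq_trace_riem[OF y] using riem_pair_sym[OF y] by simp
  also have "\<dots> = (\<Sum>c\<in>UNIV. \<Sum>a\<in>UNIV. ginv g y c a * riem g y c d a b)"
    by (rule sum_swap_cong) (simp add: ginv_sym[OF y])
  also have "\<dots> = ricci g y d b" unfolding ricci_eq_trace_riem[OF y] ..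
  finally show ?thesis .
qed

lemma gen_curv_riem: "y \<in> U \<Longrightarrow> gen_curv (riem g y)"
  unfolding gen_curv_def using riem_antisym12 riem_antisym34 riem_pair_sym riem_first_bianchi
  by (metis add.commute)

lemma weyl_eq_kulkarni_nomizu: "weyl g y = (\<lambda>i k l m. riem g y i k l m
    + (1 / (real CARD('n) - 2)) * kulkarni_nomizu (\<lambda>i j. g y $ i $ j) (ricci g y) i k l m
    + (- (scal g y / ((real CARD('n) - 1) * (real CARD('n) - 2)) / 2)) * kulkarni_nomizu (\<lambda>i j. g y $ i $ j) (\<lambda>i j. g y $ i $ j) i k l m)"
proof (intro ext)
  fix i k l m
  define c where "c = scal g y / ((real CARD('n) - 1) * (real CARD('n) - 2))"
  have 1: "c * (g y $ i $ l * g y $ k $ m - g y $ i $ m * g y $ k $ l) = (- (c / 2)) * kulkarni_nomizu (\<lambda>i j. g y $ i $ j) (\<lambda>i j. g y $ i $ j) i k l m"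
    unfolding kulkarni_nomizu_def by (simp add: algebra_simps)
  have 2: "- (1 / (real CARD('n) - 2)) * (g y $ i $ l * ricci g y k m - g y $ i $ m * ricci g y k l - g y $ k $ l * ricci g y i m + g y $ k $ m * ricci g y i l)
     = (1 / (real CARD('n) - 2)) * kulkarni_nomizu (\<lambda>i j. g y $ i $ j) (ricci g y) i k l m"
    unfolding kulkarni_nomizu_def by (simp add: algebra_simps)
  show "weyl g y i k l m = riem g y i k l m
    + (1 / (real CARD('n) - 2)) * kulkarni_nomizu (\<lambda>i j. g y $ i $ j) (ricci g y) i k l m
    + (- (scal g y / ((real CARD('n) - 1) * (real CARD('n) - 2)) / 2)) * kulkarni_nomizu (\<lambda>i j. g y $ i $ j) (\<lambda>i j. g y $ i $ j) i k l m"
    unfolding weyl_def Let_def c_def[symmetric] 1[symmetric] 2[symmetric] by simp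
qed

lemma gen_curv_weyl: "y \<in> U \<Longrightarrow> gen_curv (weyl g y)"
proof -
  assume y: "y \<in> U"
  have a: "gen_curv (kulkarni_nomizu (\<lambda>i j. g y $ i $ j) (ricci g y))"
    by (rule gen_curv_kulkarni_nomizu) (simp_all add: g_sym[OF y] ricci_sym[OF y])
  have b: "gen_curv (kulkarni_nomizu (\<lambda>i j. g y $ i $ j) (\<lambda>i j. g y $ i $ j))"
    by (rule gen_curv_kulkarni_nomizu) (simp_all add: g_sym[OF y])
  show ?thesis unfolding weyl_eq_kulkarni_nomizu by (intro gen_curv_add gen_curv_scale gen_curv_riem[OF y] a b)
qed

lemma ginv_trace_g_left: "y \<in> U \<Longrightarrow> (\<Sum>i\<in>UNIV. \<Sum>l\<in>UNIV. ginv g y i l * (g y $ i $ m * Q k l)) = Q k m"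
proof -
  assume y: "y \<in> U"
  have "(\<Sum>i\<in>UNIV. \<Sum>l\<in>UNIV. ginv g y i l * (g y $ i $ m * Q k l)) = (\<Sum>l\<in>UNIV. (\<Sum>i\<in>UNIV. ginv g y l i * g y $ i $ m) * Q k l)"
    by (simp only: sum_distrib_left sum_distrib_right, rule sum_swap_cong, simp add: mult_ac ginv_sym[OF y])
  also have "\<dots> = Q k m" using ginv_g[OF y] by simp
  finally show ?thesis .
qed

lemma ginv_trace_g_right: "y \<in> U \<Longrightarrow> (\<Sum>i\<in>UNIV. \<Sum>l\<in>UNIV. ginv g y i l * (g y $ k $ l * Q i m)) = Q k m"
proof -
  assume y: "y \<in> U"
  have "(\<Sum>i\<in>UNIV. \<Sum>l\<in>UNIV. ginv g y i l * (g y $ k $ l * Q i m)) = (\<Sum>i\<in>UNIV. (\<Sum>l\<in>UNIV. ginv g y i l * g y $ l $ k) * Q i m)"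
    by (simp add: sum_distrib_left sum_distrib_right mult_ac g_sym[OF y])
  also have "\<dots> = Q k m" using ginv_g[OF y] by simp
  finally show ?thesis .
qed

lemma kulkarni_nomizu_g_trace13: "y \<in> U \<Longrightarrow> (\<Sum>i\<in>UNIV. \<Sum>l\<in>UNIV. ginv g y i l * kulkarni_nomizu (\<lambda>i j. g y $ i $ j) Q i k l m) =
   (2 - real CARD('n)) * Q k m - g y $ k $ m * (\<Sum>i\<in>UNIV. \<Sum>l\<in>UNIV. ginv g y i l * Q i l)"
  unfolding kulkarni_nomizu_trace13 using ginv_trace_g_left[of y m Q k] ginv_trace_g_right[of y k Q m] trace_g[of y] by (simp add: algebra_simps)

lemma weyl_trace13: "y \<in> U \<Longrightarrow> (\<Sum>i\<in>UNIV. \<Sum>l\<in>UNIV. ginv g y i l * weyl g y i k l m) = 0"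
proof -
  assume y: "y \<in> U"
  define N where "N = real CARD('n)"
  have N: "N - 1 \<noteq> 0" "N - 2 \<noteq> 0" using dim by (auto simp: N_def)
  have ricci: "(1 / (N - 2)) * ((2 - N) * R - G * S) = - R - G * S / (N - 2)" for R G S :: real
    using N by (simp add: field_simps)
  have scal: "(- (S / ((N - 1) * (N - 2)) / 2)) * ((2 - N) * G - G * N) = S * G / (N - 2)" for G S :: real
  proof -
    have "(- (S / (a * b) / 2)) * (- 2 * a * G) = S * G / b" if "a \<noteq> 0" "b \<noteq> 0" for a b :: real
      using that by (simp add: field_simps)
    moreover have "(2 - N) * G - G * N = - 2 * (N - 1) * G" by (simp add: algebra_simps)
    ultimately show ?thesis using N by metis
  qed
  have "(\<Sum>i\<in>UNIV. \<Sum>l\<in>UNIV. ginv g y i l * riem g y i k l m) = ricci g y k m"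
    using ricci_eq_trace_riem[OF y] by simp
  then show ?thesis
    unfolding weyl_eq_kulkarni_nomizu sum2_lincomb3 kulkarni_nomizu_g_trace13[OF y] trace_g[OF y]
      N_def[symmetric] scal_def[symmetric] ricci scal by simp
qed

lemma totally_traceless_weyl: "y \<in> U \<Longrightarrow> totally_traceless (g y) (weyl g y)"
  by (rule totally_tracelessI[OF gen_curv_weyl]) (auto simp: ginv_def[symmetric] ginv_sym weyl_trace13)

lemma u_riem_slot4: "y \<in> U \<Longrightarrow> (\<Sum>m\<in>UNIV. u y $ m * riem g y i k l m) =
    rest_metric g u y k l * xi_form \<phi> g u y i - rest_metric g u y i l * xi_form \<phi> g u y k"
proof -
  assume y: "y \<in> U"
  have "(\<Sum>m\<in>UNIV. u y $ m * riem g y i k l m) = - (\<Sum>m\<in>UNIV. u y $ m * riem g y m l i k)"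
    using riem_pair_sym[OF y, of i k l] riem_antisym12[OF y, of l] by (simp add: sum_negf[symmetric])
  then show ?thesis using u_riem_slot1[OF y, of l i k] unfolding xi_form_def by simp
qed

lemma u_g_eq_lower: "(\<Sum>m\<in>UNIV. u y $ m * g y $ i $ m) = lower g u y i"
  unfolding lower_def by (simp add: mult.commute)

lemma u_rest_metric: "y \<in> U \<Longrightarrow> (\<Sum>i\<in>UNIV. u y $ i * rest_metric g u y i l) = 0"
proof -
  assume y: "y \<in> U"
  have "(\<Sum>i\<in>UNIV. u y $ i * rest_metric g u y i l) = (\<Sum>i\<in>UNIV. u y $ i * g y $ l $ i) + (\<Sum>i\<in>UNIV. u y $ i * lower g u y i) * lower g u y l"
    unfolding rest_metric_def by (simp add: g_sym[OF y] sum.distrib sum_distrib_right sum_distrib_left algebra_simps)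
  then show ?thesis using u_lower_u[OF y] u_g_eq_lower[of y l] by simp
qed

lemma rest_metric_sym: "y \<in> U \<Longrightarrow> rest_metric g u y a b = rest_metric g u y b a"
  unfolding rest_metric_def using g_sym by (simp add: mult.commute)

lemma ginv_rest_metric: "y \<in> U \<Longrightarrow> (\<Sum>c\<in>UNIV. ginv g y a c * rest_metric g u y k c) = (if a = k then 1 else 0) + lower g u y k * u y $ a"
proof -
  assume y: "y \<in> U"
  have "(\<Sum>c\<in>UNIV. ginv g y a c * rest_metric g u y k c) = (\<Sum>c\<in>UNIV. ginv g y a c * g y $ c $ k) + lower g u y k * (\<Sum>c\<in>UNIV. ginv g y a c * lower g u y c)"
    unfolding rest_metric_def by (simp add: g_sym[OF y] sum.distrib sum_distrib_left algebra_simps)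
  then show ?thesis using ginv_g[OF y] ginv_lower_u[OF y] by simp
qed

lemma trace_rest_metric: "y \<in> U \<Longrightarrow> (\<Sum>a\<in>UNIV. \<Sum>c\<in>UNIV. ginv g y a c * rest_metric g u y a c) = real CARD('n) - 1"
  unfolding rest_metric_def using trace_g[of y] trace_lower_u_sq[of y] by (simp add: distrib_left sum.distrib)

lemma u_ricci: "y \<in> U \<Longrightarrow> (\<Sum>m\<in>UNIV. u y $ m * ricci g y k m) =
    (2 - real CARD('n)) * xi_form \<phi> g u y k + lower g u y k * (\<Sum>a\<in>UNIV. u y $ a * xi_form \<phi> g u y a)"
proof -
  assume y: "y \<in> U"
  let ?X = "xi_form \<phi> g u y" and ?h = "rest_metric g u y"
  have "(\<Sum>m\<in>UNIV. u y $ m * ricci g y k m) = (\<Sum>m\<in>UNIV. \<Sum>a\<in>UNIV. \<Sum>c\<in>UNIV. ginv g y a c * (u y $ m * riem g y a k c m))"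
    unfolding ricci_eq_trace_riem[OF y] by (simp add: sum_distrib_left mult_ac)
  also have "\<dots> = (\<Sum>a\<in>UNIV. \<Sum>c\<in>UNIV. ginv g y a c * (\<Sum>m\<in>UNIV. u y $ m * riem g y a k c m))"
    by (subst sum_rotate3) (simp add: sum_distrib_left)
  also have "\<dots> = (\<Sum>a\<in>UNIV. \<Sum>c\<in>UNIV. ginv g y a c * (?h k c * ?X a - ?h a c * ?X k))"
    by (simp add: u_riem_slot4[OF y])
  also have "\<dots> = (\<Sum>a\<in>UNIV. (\<Sum>c\<in>UNIV. ginv g y a c * ?h k c) * ?X a) - (\<Sum>a\<in>UNIV. \<Sum>c\<in>UNIV. ginv g y a c * ?h a c) * ?X k"
    by (simp add: right_diff_distrib sum_subtractf sum_distrib_left sum_distrib_right mult_ac)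
  also have "\<dots> = ?X k + lower g u y k * (\<Sum>a\<in>UNIV. u y $ a * ?X a) - (real CARD('n) - 1) * ?X k"
  proof -
    have "(\<Sum>a\<in>UNIV. (\<Sum>c\<in>UNIV. ginv g y a c * ?h k c) * ?X a) = (\<Sum>a\<in>UNIV. ((if a = k then 1 else 0) + lower g u y k * u y $ a) * ?X a)"
      by (simp add: ginv_rest_metric[OF y])
    also have "\<dots> = ?X k + lower g u y k * (\<Sum>a\<in>UNIV. u y $ a * ?X a)"
      by (simp add: ring_distribs sum.distrib sum_distrib_left mult_ac)
    finally show ?thesis using trace_rest_metric[OF y] by simp
  qed
  finally show ?thesis by (simp add: algebra_simps)
qed

lemma u_weyl_expand: "y \<in> U \<Longrightarrow> (\<Sum>m\<in>UNIV. u y $ m * weyl g y i k l m) =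
   (rest_metric g u y k l * xi_form \<phi> g u y i - rest_metric g u y i l * xi_form \<phi> g u y k)
   + (1 / (real CARD('n) - 2)) * (lower g u y i * ricci g y k l - lower g u y k * ricci g y i l
        - g y $ i $ l * (\<Sum>m\<in>UNIV. u y $ m * ricci g y k m) + g y $ k $ l * (\<Sum>m\<in>UNIV. u y $ m * ricci g y i m))
   + (- (scal g y / ((real CARD('n) - 1) * (real CARD('n) - 2)) / 2)) *
       (lower g u y i * g y $ k $ l - lower g u y k * g y $ i $ l - g y $ i $ l * lower g u y k + g y $ k $ l * lower g u y i)"
  unfolding weyl_eq_kulkarni_nomizu sum_lincomb3 kulkarni_nomizu_contract4 u_g_eq_lower by (simp add: u_riem_slot4)

lemma electric_expand: "y \<in> U \<Longrightarrow> electric g u y k l =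
   rest_metric g u y k l * (\<Sum>a\<in>UNIV. u y $ a * xi_form \<phi> g u y a)
   + (1 / (real CARD('n) - 2)) * (- ricci g y k l - lower g u y k * (\<Sum>m\<in>UNIV. u y $ m * ricci g y l m)
        - lower g u y l * (\<Sum>m\<in>UNIV. u y $ m * ricci g y k m)
        + (1 - real CARD('n)) * (\<Sum>a\<in>UNIV. u y $ a * xi_form \<phi> g u y a) * g y $ k $ l)
   + 2 * (- (scal g y / ((real CARD('n) - 1) * (real CARD('n) - 2)) / 2)) * (- rest_metric g u y k l)"
proof -
  assume y: "y \<in> U"
  let ?X = "xi_form \<phi> g u y" and ?h = "rest_metric g u y" and ?v = "lower g u y" and ?R = "ricci g y"
  define r where "r = 1 / (real CARD('n) - 2)"
  define sc where "sc = - (scal g y / ((real CARD('n) - 1) * (real CARD('n) - 2)) / 2)"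
  let ?r = r and ?s = sc
  let ?rho = "\<lambda>k. \<Sum>m\<in>UNIV. u y $ m * ricci g y k m"
  have "electric g u y k l = (\<Sum>i\<in>UNIV. u y $ i * (\<Sum>m\<in>UNIV. u y $ m * weyl g y i k l m))"
    unfolding electric_def by (simp add: sum_distrib_left mult_ac)
  also have "\<dots> = (\<Sum>i\<in>UNIV. u y $ i * ((?h k l * ?X i - ?h i l * ?X k)
   + ?r * (?v i * ?R k l - ?v k * ?R i l - g y $ i $ l * ?rho k + g y $ k $ l * ?rho i)
   + ?s * (?v i * g y $ k $ l - ?v k * g y $ i $ l - g y $ i $ l * ?v k + g y $ k $ l * ?v i)))"
    by (simp add: u_weyl_expand[OF y, folded r_def sc_def])
  also have "\<dots> = ?h k l * (\<Sum>i\<in>UNIV. u y $ i * ?X i) - (\<Sum>i\<in>UNIV. u y $ i * ?h i l) * ?X k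
   + ?r * ((\<Sum>i\<in>UNIV. u y $ i * ?v i) * ?R k l - ?v k * (\<Sum>i\<in>UNIV. u y $ i * ?R i l)
           - (\<Sum>i\<in>UNIV. u y $ i * g y $ i $ l) * ?rho k + g y $ k $ l * (\<Sum>i\<in>UNIV. u y $ i * ?rho i))
   + ?s * ((\<Sum>i\<in>UNIV. u y $ i * ?v i) * g y $ k $ l - ?v k * (\<Sum>i\<in>UNIV. u y $ i * g y $ i $ l)
           - (\<Sum>i\<in>UNIV. u y $ i * g y $ i $ l) * ?v k + g y $ k $ l * (\<Sum>i\<in>UNIV. u y $ i * ?v i))"
    by (simp add: sum.distrib sum_subtractf sum_distrib_left sum_distrib_right algebra_simps)
  also have "(\<Sum>i\<in>UNIV. u y $ i * ?rho i) = (2 - real CARD('n)) * (\<Sum>i\<in>UNIV. u y $ i * ?X i) - (\<Sum>i\<in>UNIV. u y $ i * ?X i)"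
  proof -
    have "(\<Sum>i\<in>UNIV. u y $ i * ?rho i) = (\<Sum>i\<in>UNIV. u y $ i * ((2 - real CARD('n)) * ?X i + ?v i * (\<Sum>a\<in>UNIV. u y $ a * ?X a)))"
      by (simp add: u_ricci[OF y])
    also have "\<dots> = (2 - real CARD('n)) * (\<Sum>i\<in>UNIV. u y $ i * ?X i) + (\<Sum>i\<in>UNIV. u y $ i * ?v i) * (\<Sum>a\<in>UNIV. u y $ a * ?X a)"
      by (rule sum_affine)
    finally show ?thesis using u_lower_u[OF y] by simp
  qed
  also have "(\<Sum>i\<in>UNIV. u y $ i * ?R i l) = ?rho l" using ricci_sym[OF y] by simp
  also have "(\<Sum>i\<in>UNIV. u y $ i * g y $ i $ l) = ?v l" using u_g_eq_lower[of y l] g_sym[OF y] by simp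
  finally show ?thesis using u_lower_u[OF y] u_rest_metric[OF y, of l] unfolding r_def[symmetric] sc_def[symmetric]
    by (simp add: algebra_simps rest_metric_def)
qed

lemma u_weyl: "y \<in> U \<Longrightarrow> (\<Sum>m\<in>UNIV. u y $ m * weyl g y i k l m) =
    lower g u y k * electric g u y i l - lower g u y i * electric g u y k l"
proof -
  assume y: "y \<in> U"
  define r where "r = 1 / (real CARD('n) - 2)"
  define sc where "sc = - (scal g y / ((real CARD('n) - 1) * (real CARD('n) - 2)) / 2)"
  define m where "m = real CARD('n) - 2"
  define uX where "uX = (\<Sum>a\<in>UNIV. u y $ a * xi_form \<phi> g u y a)"
  have rm: "r * m = 1" unfolding r_def m_def using dim by simp
  have n1: "1 - real CARD('n) = - (m + 1)" and n2: "2 - real CARD('n) = - m" unfolding m_def by simp_all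
  show ?thesis
    unfolding u_weyl_expand[OF y] electric_expand[OF y] u_ricci[OF y] r_def[symmetric] sc_def[symmetric]
      uX_def[symmetric] n1 n2 rest_metric_def
    using rm by algebra
qed

lemma electric_sym: "y \<in> U \<Longrightarrow> electric g u y k l = electric g u y l k"
proof -
  assume y: "y \<in> U"
  note D = gen_curvD[OF gen_curv_weyl[OF y]]
  have e: "weyl g y j k l m = weyl g y m l k j" for j m
    using D(3)[of j k l m] D(1)[of l m j k] D(2)[of m l j k] by simp
  have "electric g u y k l = (\<Sum>j\<in>UNIV. \<Sum>m\<in>UNIV. u y $ j * u y $ m * weyl g y m l k j)"
    unfolding electric_def by (simp add: e)
  also have "\<dots> = electric g u y l k" unfolding electric_def
    by (rule sum_swap_cong) (simp add: mult_ac)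
  finally show ?thesis .
qed

lemma u_electric: "y \<in> U \<Longrightarrow> (\<Sum>l\<in>UNIV. u y $ l * electric g u y k l) = 0"
proof -
  assume y: "y \<in> U"
  have z: "(\<Sum>l\<in>UNIV. \<Sum>m\<in>UNIV. u y $ l * u y $ m * weyl g y j k l m) = 0" for j
  proof -
    have e: "u y $ a * u y $ b * weyl g y j k a b = - (u y $ b * u y $ a * weyl g y j k b a)" for a b
      using gen_curvD(2)[OF gen_curv_weyl[OF y], of j k a b] by simp
    have "(\<Sum>l\<in>UNIV. \<Sum>m\<in>UNIV. u y $ l * u y $ m * weyl g y j k l m)
       = (\<Sum>m\<in>UNIV. \<Sum>l\<in>UNIV. - (u y $ m * u y $ l * weyl g y j k m l))"
      by (rule sum_swap_cong) (rule e)
    also have "\<dots> = - (\<Sum>l\<in>UNIV. \<Sum>m\<in>UNIV. u y $ l * u y $ m * weyl g y j k l m)"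
      by (simp add: sum_negf)
    finally show ?thesis by simp
  qed
  have "(\<Sum>l\<in>UNIV. u y $ l * electric g u y k l) = (\<Sum>l\<in>UNIV. \<Sum>j\<in>UNIV. \<Sum>m\<in>UNIV. u y $ l * (u y $ j * u y $ m * weyl g y j k l m))"
    unfolding electric_def by (simp only: sum_distrib_left)
  also have "\<dots> = (\<Sum>j\<in>UNIV. \<Sum>l\<in>UNIV. \<Sum>m\<in>UNIV. u y $ l * (u y $ j * u y $ m * weyl g y j k l m))"
    by (rule sum.swap)
  also have "\<dots> = (\<Sum>j\<in>UNIV. u y $ j * (\<Sum>l\<in>UNIV. \<Sum>m\<in>UNIV. u y $ l * u y $ m * weyl g y j k l m))"
    by (simp add: sum_distrib_left mult_ac)
  also have "\<dots> = 0" by (simp add: z)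
  finally show ?thesis .
qed

lemma trace_electric: "y \<in> U \<Longrightarrow> (\<Sum>k\<in>UNIV. \<Sum>l\<in>UNIV. ginv g y k l * electric g u y k l) = 0"
proof -
  assume y: "y \<in> U"
  have tl: "totally_traceless (g y) (weyl g y)" by (rule totally_traceless_weyl[OF y])
  have z: "(\<Sum>k\<in>UNIV. \<Sum>l\<in>UNIV. ginv g y k l * weyl g y j k l m) = 0" for j m
    using tl unfolding totally_traceless_def Let_def ginv_def by blast
  have "(\<Sum>k\<in>UNIV. \<Sum>l\<in>UNIV. ginv g y k l * electric g u y k l)
    = (\<Sum>k\<in>UNIV. \<Sum>l\<in>UNIV. \<Sum>j\<in>UNIV. \<Sum>m\<in>UNIV. u y $ j * u y $ m * (ginv g y k l * weyl g y j k l m))"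
    unfolding electric_def by (simp add: sum_distrib_left mult_ac)
  also have "\<dots> = (\<Sum>j\<in>UNIV. \<Sum>m\<in>UNIV. u y $ j * u y $ m * (\<Sum>k\<in>UNIV. \<Sum>l\<in>UNIV. ginv g y k l * weyl g y j k l m))"
  proof -
    have "(\<Sum>k\<in>UNIV. \<Sum>l\<in>UNIV. \<Sum>j\<in>UNIV. \<Sum>m\<in>UNIV. F k l j m) = (\<Sum>j\<in>UNIV. \<Sum>m\<in>UNIV. \<Sum>k\<in>UNIV. \<Sum>l\<in>UNIV. (F k l j m::real))" for F
    proof -
      have "(\<Sum>k\<in>UNIV. \<Sum>l\<in>UNIV. \<Sum>j\<in>UNIV. \<Sum>m\<in>UNIV. F k l j m) = (\<Sum>k\<in>UNIV. \<Sum>j\<in>UNIV. \<Sum>m\<in>UNIV. \<Sum>l\<in>UNIV. F k l j m)"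
        by (rule sum.cong[OF refl]) (rule sum_rotate3)
      also have "\<dots> = (\<Sum>j\<in>UNIV. \<Sum>m\<in>UNIV. \<Sum>k\<in>UNIV. \<Sum>l\<in>UNIV. F k l j m)"
        by (rule sum_rotate3)
      finally show ?thesis .
    qed
    then show ?thesis by (simp add: sum_distrib_left)
  qed
  also have "\<dots> = 0" by (simp add: z)
  finally show ?thesis .
qed

lemma GammaT_eq_kulkarni_nomizu: "GammaT g u y = (\<lambda>i k l m. weyl g y i k l m
    + (- ((real CARD('n) - 2) / (real CARD('n) - 3))) * kulkarni_nomizu (\<lambda>a b. lower g u y a * lower g u y b) (electric g u y) i k l m
    + (- (1 / (real CARD('n) - 3))) * kulkarni_nomizu (\<lambda>a b. g y $ a $ b) (electric g u y) i k l m)"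
  unfolding GammaT_def kulkarni_nomizu_def Let_def by (intro ext) (simp add: algebra_simps)

lemma gen_curv_GammaT: "y \<in> U \<Longrightarrow> gen_curv (GammaT g u y)"
proof -
  assume y: "y \<in> U"
  show ?thesis unfolding GammaT_eq_kulkarni_nomizu
    by (intro gen_curv_add gen_curv_scale gen_curv_weyl[OF y] gen_curv_kulkarni_nomizu) (simp_all add: electric_sym[OF y] g_sym[OF y])
qed

lemma GammaT_trace13: "y \<in> U \<Longrightarrow> (\<Sum>i\<in>UNIV. \<Sum>l\<in>UNIV. ginv g y i l * GammaT g u y i k l m) = 0"
proof -
  assume y: "y \<in> U"
  let ?v = "lower g u y" and ?E = "electric g u y"
  have a1: "(\<Sum>i\<in>UNIV. \<Sum>l\<in>UNIV. ginv g y i l * (?v i * ?v m * ?E k l)) = 0"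
  proof -
    have "(\<Sum>i\<in>UNIV. \<Sum>l\<in>UNIV. ginv g y i l * (?v i * ?v m * ?E k l)) = ?v m * (\<Sum>l\<in>UNIV. (\<Sum>i\<in>UNIV. ginv g y l i * ?v i) * ?E k l)"
      by (simp only: sum_distrib_left sum_distrib_right, rule sum_swap_cong, simp add: ginv_sym[OF y] mult_ac)
    then show ?thesis using ginv_lower_u[OF y] u_electric[OF y] by simp
  qed
  have a2: "(\<Sum>i\<in>UNIV. \<Sum>l\<in>UNIV. ginv g y i l * (?v k * ?v l * ?E i m)) = 0"
  proof -
    have "(\<Sum>i\<in>UNIV. \<Sum>l\<in>UNIV. ginv g y i l * (?v k * ?v l * ?E i m)) = ?v k * (\<Sum>i\<in>UNIV. (\<Sum>l\<in>UNIV. ginv g y i l * ?v l) * ?E m i)"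
      by (simp add: sum_distrib_left sum_distrib_right mult_ac electric_sym[OF y])
    then show ?thesis using ginv_lower_u[OF y] u_electric[OF y] by simp
  qed
  have c1: "(\<Sum>i\<in>UNIV. \<Sum>l\<in>UNIV. ginv g y i l * kulkarni_nomizu (\<lambda>a b. ?v a * ?v b) ?E i k l m) = ?E k m"
    unfolding kulkarni_nomizu_trace13 using a1 a2 trace_electric[OF y] trace_lower_u_sq[OF y] by simp
  have c2: "(\<Sum>i\<in>UNIV. \<Sum>l\<in>UNIV. ginv g y i l * kulkarni_nomizu (\<lambda>a b. g y $ a $ b) ?E i k l m) = (2 - real CARD('n)) * ?E k m"
    unfolding kulkarni_nomizu_g_trace13[OF y] trace_electric[OF y] by simp
  have n3: "real CARD('n) - 3 \<noteq> 0" using dim by simp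
  show ?thesis unfolding GammaT_eq_kulkarni_nomizu sum2_lincomb3 weyl_trace13[OF y] c1 c2
    using n3 by (simp add: field_simps)
qed

lemma totally_traceless_GammaT: "y \<in> U \<Longrightarrow> totally_traceless (g y) (GammaT g u y)"
  by (rule totally_tracelessI[OF gen_curv_GammaT]) (auto simp: ginv_def[symmetric] ginv_sym GammaT_trace13)

lemma u_GammaT: "y \<in> U \<Longrightarrow> (\<Sum>m\<in>UNIV. u y $ m * GammaT g u y j k l m) = 0"
proof -
  assume y: "y \<in> U"
  let ?v = "lower g u y" and ?E = "electric g u y"
  have p: "(\<Sum>m\<in>UNIV. u y $ m * (?v a * ?v m)) = - ?v a" for a
    using sum_mult_pull[of "\<lambda>m. u y $ m" "?v a" ?v] u_lower_u[OF y] by simp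
  have q: "(\<Sum>m\<in>UNIV. u y $ m * ?E a m) = 0" for a using u_electric[OF y] .
  have n3: "real CARD('n) - 3 \<noteq> 0" using dim by simp
  show ?thesis unfolding GammaT_eq_kulkarni_nomizu sum_lincomb3 u_weyl[OF y] kulkarni_nomizu_contract4 p q u_g_eq_lower
    using n3 by (simp add: field_simps)
qed

lemma cov_der_riem_up_expand: "y \<in> U \<Longrightarrow> cov_der_riem_up g y e a b c d =
    pder e (pder c (\<lambda>z. christ g z a d b)) y - pder e (pder d (\<lambda>z. christ g z a c b)) y
  + (bianchi_dC_C g y a b e c d - bianchi_dC_C g y a b e d c - bianchi_dC_C g y a b c d e + bianchi_dC_C g y a b d c e)
  + (bianchi_C_dC g y a b c e d - bianchi_C_dC g y a b d e c + bianchi_C_dC g y a b e c d - bianchi_C_dC g y a b e d c)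
  + (bianchi_CCC g y a b e c d - bianchi_CCC g y a b e d c - bianchi_CCC g y a b c d e + bianchi_CCC g y a b d c e)
  - (\<Sum>f\<in>UNIV. christ g y f e c * riem_up g y a b f d + christ g y f e d * riem_up g y a b c f)"
proof -
  assume y: "y \<in> U"
  let ?G = "christ g y"
  have p: "pder e (\<lambda>z. riem_up g z a b c d) y = pder e (pder c (\<lambda>z. christ g z a d b)) y - pder e (pder d (\<lambda>z. christ g z a c b)) y
    + (bianchi_dC_C g y a b e c d + bianchi_C_dC g y a b c e d - bianchi_dC_C g y a b e d c - bianchi_C_dC g y a b d e c)"
    unfolding riem_up_def bianchi_dC_C_def bianchi_C_dC_def using y
    by (simp add: pder_smooth_rules smooth_intros smooth_christ sum.distrib sum_subtractf algebra_simps)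
  have t2: "(\<Sum>f\<in>UNIV. ?G a e f * riem_up g y f b c d) = bianchi_C_dC g y a b e c d - bianchi_C_dC g y a b e d c + bianchi_CCC g y a b e c d - bianchi_CCC g y a b e d c"
    unfolding riem_up_def bianchi_C_dC_def bianchi_CCC_def
    by (simp add: sum.distrib sum_subtractf sum_distrib_left algebra_simps)
  have swp: "(\<Sum>f\<in>UNIV. ?G f e b * (\<Sum>h\<in>UNIV. ?G a c h * ?G h d f)) = bianchi_CCC g y a b c d e" for c d
  proof -
    have "(\<Sum>f\<in>UNIV. ?G f e b * (\<Sum>h\<in>UNIV. ?G a c h * ?G h d f)) = (\<Sum>f\<in>UNIV. \<Sum>h\<in>UNIV. ?G f e b * (?G a c h * ?G h d f))"
      by (simp add: sum_distrib_left)
    also have "\<dots> = (\<Sum>h\<in>UNIV. \<Sum>f\<in>UNIV. ?G a c h * (?G h d f * ?G f e b))"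
      by (rule sum_swap_cong) (simp add: mult_ac)
    finally show ?thesis unfolding bianchi_CCC_def .
  qed
  have t3: "(\<Sum>f\<in>UNIV. ?G f e b * riem_up g y a f c d) = bianchi_dC_C g y a b c d e - bianchi_dC_C g y a b d c e + bianchi_CCC g y a b c d e - bianchi_CCC g y a b d c e"
  proof -
    have "(\<Sum>f\<in>UNIV. ?G f e b * riem_up g y a f c d) = bianchi_dC_C g y a b c d e - bianchi_dC_C g y a b d c e
       + (\<Sum>f\<in>UNIV. ?G f e b * (\<Sum>h\<in>UNIV. ?G a c h * ?G h d f)) - (\<Sum>f\<in>UNIV. ?G f e b * (\<Sum>h\<in>UNIV. ?G a d h * ?G h c f))"
      unfolding riem_up_def bianchi_dC_C_def
      by (simp add: sum.distrib sum_subtractf ring_distribs mult_ac)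
    then show ?thesis unfolding swp .
  qed
  show ?thesis unfolding cov_der_riem_up_def p t2 sum.distrib t3 by (simp add: algebra_simps)
qed

lemma riem_up_antisym34: "riem_up g y a b c d = - riem_up g y a b d c"
  unfolding riem_up_def by (simp add: sum_subtractf algebra_simps)

lemma riem_up_second_bianchi: "y \<in> U \<Longrightarrow> cov_der_riem_up g y e a b c d + cov_der_riem_up g y c a b d e + cov_der_riem_up g y d a b e c = 0"
proof -
  assume y: "y \<in> U"
  have c1: "pder e (pder c (\<lambda>z. christ g z a d b)) y = pder c (pder e (\<lambda>z. christ g z a d b)) y"
    by (rule pder_commute[OF U_open smooth_christ y])
  have c2: "pder e (pder d (\<lambda>z. christ g z a c b)) y = pder d (pder e (\<lambda>z. christ g z a c b)) y"
    by (rule pder_commute[OF U_open smooth_christ y])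
  have c3: "pder c (pder d (\<lambda>z. christ g z a e b)) y = pder d (pder c (\<lambda>z. christ g z a e b)) y"
    by (rule pder_commute[OF U_open smooth_christ y])
  have t4: "(\<Sum>f\<in>UNIV. christ g y f e c * riem_up g y a b f d + christ g y f e d * riem_up g y a b c f)
     + (\<Sum>f\<in>UNIV. christ g y f c d * riem_up g y a b f e + christ g y f c e * riem_up g y a b d f)
     + (\<Sum>f\<in>UNIV. christ g y f d e * riem_up g y a b f c + christ g y f d c * riem_up g y a b e f) = 0"
  proof -
    have "\<And>f. christ g y f c e = christ g y f e c" "\<And>f. christ g y f d e = christ g y f e d"
      "\<And>f. christ g y f d c = christ g y f c d" using christ_sym[OF y] by blast+
    moreover have "\<And>f. riem_up g y a b d f = - riem_up g y a b f d" "\<And>f. riem_up g y a b f c = - riem_up g y a b c f"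
      "\<And>f. riem_up g y a b e f = - riem_up g y a b f e" using riem_up_antisym34 by blast+
    ultimately show ?thesis by (simp add: sum.distrib[symmetric] algebra_simps)
  qed
  show ?thesis unfolding cov_der_riem_up_expand[OF y] c1 c2 c3 using t4 by (simp add: algebra_simps)
qed

lemma cov_der4_riem: "y \<in> U \<Longrightarrow> cov_der4 g (riem g) y p j k l m = (\<Sum>e\<in>UNIV. g y $ j $ e * cov_der_riem_up g y p e k l m)"
proof -
  assume y: "y \<in> U"
  let ?G = "christ g y" and ?R = "riem_up g y"
  have d: "pder p (\<lambda>z. riem g z j k l m) y = (\<Sum>e\<in>UNIV. pder p (\<lambda>z. g z $ j $ e) y * ?R e k l m)
      + (\<Sum>e\<in>UNIV. g y $ j $ e * pder p (\<lambda>z. riem_up g z e k l m) y)"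
    unfolding riem_def using y by (simp add: pder_smooth_rules smooth_intros smooth_g smooth_riem_up sum.distrib)
  have n: "(\<Sum>e\<in>UNIV. pder p (\<lambda>z. g z $ j $ e) y * ?R e k l m) =
     (\<Sum>q\<in>UNIV. ?G q p j * riem g y q k l m) + (\<Sum>e\<in>UNIV. g y $ j $ e * (\<Sum>f\<in>UNIV. ?G e p f * ?R f k l m))"
  proof -
    have "(\<Sum>e\<in>UNIV. pder p (\<lambda>z. g z $ j $ e) y * ?R e k l m) =
       (\<Sum>e\<in>UNIV. \<Sum>q\<in>UNIV. ?G q p j * g y $ q $ e * ?R e k l m) + (\<Sum>e\<in>UNIV. \<Sum>q\<in>UNIV. ?G q p e * g y $ j $ q * ?R e k l m)"
      unfolding pder_g_christ[OF y] by (simp add: sum.distrib sum_distrib_right distrib_right)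
    also have "(\<Sum>e\<in>UNIV. \<Sum>q\<in>UNIV. ?G q p j * g y $ q $ e * ?R e k l m) = (\<Sum>q\<in>UNIV. ?G q p j * riem g y q k l m)"
      unfolding riem_def by (simp only: sum_distrib_left, rule sum_swap_cong, simp add: mult_ac)
    also have "(\<Sum>e\<in>UNIV. \<Sum>q\<in>UNIV. ?G q p e * g y $ j $ q * ?R e k l m) = (\<Sum>e\<in>UNIV. g y $ j $ e * (\<Sum>f\<in>UNIV. ?G e p f * ?R f k l m))"
      by (simp only: sum_distrib_left, rule sum_swap_cong, simp add: mult_ac)
    finally show ?thesis .
  qed
  have o1: "(\<Sum>q\<in>UNIV. ?G q p k * riem g y j q l m) = (\<Sum>e\<in>UNIV. g y $ j $ e * (\<Sum>f\<in>UNIV. ?G f p k * ?R e f l m))"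
    unfolding riem_def by (simp only: sum_distrib_left, rule sum_swap_cong, simp add: mult_ac)
  have o2: "(\<Sum>q\<in>UNIV. ?G q p l * riem g y j k q m) = (\<Sum>e\<in>UNIV. g y $ j $ e * (\<Sum>f\<in>UNIV. ?G f p l * ?R e k f m))"
    unfolding riem_def by (simp only: sum_distrib_left, rule sum_swap_cong, simp add: mult_ac)
  have o3: "(\<Sum>q\<in>UNIV. ?G q p m * riem g y j k l q) = (\<Sum>e\<in>UNIV. g y $ j $ e * (\<Sum>f\<in>UNIV. ?G f p m * ?R e k l f))"
    unfolding riem_def by (simp only: sum_distrib_left, rule sum_swap_cong, simp add: mult_ac)
  have ex: "(\<Sum>e\<in>UNIV. g y $ j $ e * cov_der_riem_up g y p e k l m) = (\<Sum>e\<in>UNIV. g y $ j $ e * pder p (\<lambda>z. riem_up g z e k l m) y)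
    + (\<Sum>e\<in>UNIV. g y $ j $ e * (\<Sum>f\<in>UNIV. ?G e p f * ?R f k l m))
    - (\<Sum>e\<in>UNIV. g y $ j $ e * (\<Sum>f\<in>UNIV. ?G f p k * ?R e f l m))
    - (\<Sum>e\<in>UNIV. g y $ j $ e * (\<Sum>f\<in>UNIV. ?G f p l * ?R e k f m))
    - (\<Sum>e\<in>UNIV. g y $ j $ e * (\<Sum>f\<in>UNIV. ?G f p m * ?R e k l f))"
    unfolding cov_der_riem_up_def by (simp add: sum.distrib sum_subtractf ring_distribs christ_sym[OF y, of _ p])
  show ?thesis unfolding cov_der4_def ex d n sum.distrib o1 o2 o3
    by (simp add: algebra_simps)
qed

lemma riem_second_bianchi: "y \<in> U \<Longrightarrow> cov_der4 g (riem g) y p j k l m + cov_der4 g (riem g) y l j k m p + cov_der4 g (riem g) y m j k p l = 0"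
proof -
  assume y: "y \<in> U"
  have "cov_der4 g (riem g) y p j k l m + cov_der4 g (riem g) y l j k m p + cov_der4 g (riem g) y m j k p l
    = (\<Sum>e\<in>UNIV. g y $ j $ e * (cov_der_riem_up g y p e k l m + cov_der_riem_up g y l e k m p + cov_der_riem_up g y m e k p l))"
    unfolding cov_der4_riem[OF y] by (simp add: sum.distrib distrib_left)
  also have "\<dots> = 0" by (simp add: riem_up_second_bianchi[OF y])
  finally show ?thesis .
qed

lemma cov_der1_lower_u: "y \<in> U \<Longrightarrow> cov_der1 g (lower g u) y p q = (\<Sum>r\<in>UNIV. g y $ q $ r * cov_der_u g u y p r)"
proof -
  assume y: "y \<in> U"
  let ?G = "christ g y"
  have "cov_der1 g (lower g u) y p q = (\<Sum>k\<in>UNIV. pder p (\<lambda>z. g z $ q $ k) y * u y $ k)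
      + (\<Sum>k\<in>UNIV. g y $ q $ k * pder p (\<lambda>z. u z $ k) y) - (\<Sum>r\<in>UNIV. ?G r p q * lower g u y r)"
    unfolding cov_der1_def lower_def using y by (simp add: pder_smooth_rules smooth_intros smooth_g smooth_u sum.distrib)
  also have "(\<Sum>k\<in>UNIV. pder p (\<lambda>z. g z $ q $ k) y * u y $ k) = (\<Sum>r\<in>UNIV. ?G r p q * lower g u y r)
      + (\<Sum>r\<in>UNIV. g y $ q $ r * (\<Sum>k\<in>UNIV. ?G r p k * u y $ k))"
  proof -
    have "(\<Sum>k\<in>UNIV. pder p (\<lambda>z. g z $ q $ k) y * u y $ k) = (\<Sum>k\<in>UNIV. \<Sum>r\<in>UNIV. ?G r p q * g y $ r $ k * u y $ k)
        + (\<Sum>k\<in>UNIV. \<Sum>r\<in>UNIV. ?G r p k * g y $ q $ r * u y $ k)"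
      unfolding pder_g_christ[OF y] by (simp add: sum.distrib sum_distrib_right distrib_right)
    also have "(\<Sum>k\<in>UNIV. \<Sum>r\<in>UNIV. ?G r p q * g y $ r $ k * u y $ k) = (\<Sum>r\<in>UNIV. ?G r p q * lower g u y r)"
      unfolding lower_def by (simp only: sum_distrib_left, rule sum_swap_cong, simp add: mult_ac)
    also have "(\<Sum>k\<in>UNIV. \<Sum>r\<in>UNIV. ?G r p k * g y $ q $ r * u y $ k) = (\<Sum>r\<in>UNIV. g y $ q $ r * (\<Sum>k\<in>UNIV. ?G r p k * u y $ k))"
      by (simp only: sum_distrib_left, rule sum_swap_cong, simp add: mult_ac)
    finally show ?thesis .
  qed
  finally show ?thesis unfolding cov_der_u_def by (simp add: distrib_left sum.distrib)
qed

lemma cov_der_u_eq: "y \<in> U \<Longrightarrow> cov_der_u g u y p a = \<phi> y * (\<Sum>q\<in>UNIV. ginv g y a q * rest_metric g u y p q)"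
proof -
  assume y: "y \<in> U"
  have "(\<Sum>q\<in>UNIV. ginv g y a q * cov_der1 g (lower g u) y p q) = (\<Sum>r\<in>UNIV. (\<Sum>q\<in>UNIV. ginv g y a q * g y $ q $ r) * cov_der_u g u y p r)"
    unfolding cov_der1_lower_u[OF y] by (simp only: sum_distrib_left sum_distrib_right, rule sum_swap_cong, simp add: mult_ac)
  also have "\<dots> = cov_der_u g u y p a" using ginv_g[OF y] by simp
  finally show ?thesis using u_conc y by (simp add: rest_metric_def sum_distrib_left mult_ac)
qed

lemma u_cov_der_u: "y \<in> U \<Longrightarrow> (\<Sum>p\<in>UNIV. u y $ p * cov_der_u g u y p a) = 0"
proof -
  assume y: "y \<in> U"
  have "(\<Sum>p\<in>UNIV. u y $ p * cov_der_u g u y p a) = \<phi> y * (\<Sum>q\<in>UNIV. ginv g y a q * (\<Sum>p\<in>UNIV. u y $ p * rest_metric g u y p q))"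
    unfolding cov_der_u_eq[OF y] by (simp only: sum_distrib_left, rule sum_swap_cong, simp add: mult_ac)
  then show ?thesis by (simp add: u_rest_metric[OF y])
qed

lemma cov_der_u_contract: "y \<in> U \<Longrightarrow> (\<Sum>p\<in>UNIV. cov_der_u g u y l p * T p) = \<phi> y * (T l + lower g u y l * (\<Sum>p\<in>UNIV. u y $ p * T p))"
proof -
  assume y: "y \<in> U"
  have "(\<Sum>p\<in>UNIV. cov_der_u g u y l p * T p) = \<phi> y * (\<Sum>p\<in>UNIV. (\<Sum>q\<in>UNIV. ginv g y p q * rest_metric g u y l q) * T p)"
    unfolding cov_der_u_eq[OF y] by (simp add: sum_distrib_left mult_ac)
  also have "\<dots> = \<phi> y * (\<Sum>p\<in>UNIV. ((if p = l then 1 else 0) + lower g u y l * u y $ p) * T p)"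
    using ginv_rest_metric[OF y] by simp
  also have "\<dots> = \<phi> y * (T l + lower g u y l * (\<Sum>p\<in>UNIV. u y $ p * T p))"
    by (simp add: ring_distribs sum.distrib sum_distrib_left mult_ac)
  finally show ?thesis .
qed

lemma cov_der3_contract_u:
  assumes y: "y \<in> U" and T: "\<And>j k m p. smooth_fn U (\<lambda>z. T z j k m p)"
  shows "cov_der3 g (\<lambda>z j k m. \<Sum>p\<in>UNIV. u z $ p * T z j k m p) y l j k m =
    (\<Sum>p\<in>UNIV. cov_der_u g u y l p * T y j k m p) + (\<Sum>p\<in>UNIV. u y $ p * cov_der4 g T y l j k m p)"
proof -
  let ?G = "christ g y"
  have e1: "(\<Sum>q\<in>UNIV. ?G q l j * (\<Sum>p\<in>UNIV. u y $ p * T y q k m p)) = (\<Sum>p\<in>UNIV. u y $ p * (\<Sum>q\<in>UNIV. ?G q l j * T y q k m p))"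
    by (simp only: sum_distrib_left, rule sum_swap_cong, simp add: mult_ac)
  have e2: "(\<Sum>q\<in>UNIV. ?G q l k * (\<Sum>p\<in>UNIV. u y $ p * T y j q m p)) = (\<Sum>p\<in>UNIV. u y $ p * (\<Sum>q\<in>UNIV. ?G q l k * T y j q m p))"
    by (simp only: sum_distrib_left, rule sum_swap_cong, simp add: mult_ac)
  have e3: "(\<Sum>q\<in>UNIV. ?G q l m * (\<Sum>p\<in>UNIV. u y $ p * T y j k q p)) = (\<Sum>p\<in>UNIV. u y $ p * (\<Sum>q\<in>UNIV. ?G q l m * T y j k q p))"
    by (simp only: sum_distrib_left, rule sum_swap_cong, simp add: mult_ac)
  have e4: "(\<Sum>p\<in>UNIV. (\<Sum>q\<in>UNIV. ?G p l q * u y $ q) * T y j k m p) = (\<Sum>p\<in>UNIV. u y $ p * (\<Sum>q\<in>UNIV. ?G q l p * T y j k m q))"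
    by (simp only: sum_distrib_left sum_distrib_right, rule sum_swap_cong, simp add: mult_ac)
  have d: "pder l (\<lambda>z. \<Sum>p\<in>UNIV. u z $ p * T z j k m p) y =
      (\<Sum>p\<in>UNIV. pder l (\<lambda>z. u z $ p) y * T y j k m p) + (\<Sum>p\<in>UNIV. u y $ p * pder l (\<lambda>z. T z j k m p) y)"
    using y T by (simp add: pder_smooth_rules smooth_intros smooth_u sum.distrib)
  have L: "cov_der3 g (\<lambda>z j k m. \<Sum>p\<in>UNIV. u z $ p * T z j k m p) y l j k m =
      (\<Sum>p\<in>UNIV. pder l (\<lambda>z. u z $ p) y * T y j k m p) + (\<Sum>p\<in>UNIV. u y $ p * pder l (\<lambda>z. T z j k m p) y)
      - (\<Sum>p\<in>UNIV. u y $ p * (\<Sum>q\<in>UNIV. ?G q l j * T y q k m p))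
      - (\<Sum>p\<in>UNIV. u y $ p * (\<Sum>q\<in>UNIV. ?G q l k * T y j q m p))
      - (\<Sum>p\<in>UNIV. u y $ p * (\<Sum>q\<in>UNIV. ?G q l m * T y j k q p))"
    unfolding cov_der3_def d by (simp only: sum.distrib e1 e2 e3)
  have R: "(\<Sum>p\<in>UNIV. cov_der_u g u y l p * T y j k m p) + (\<Sum>p\<in>UNIV. u y $ p * cov_der4 g T y l j k m p) =
      (\<Sum>p\<in>UNIV. pder l (\<lambda>z. u z $ p) y * T y j k m p) + (\<Sum>p\<in>UNIV. u y $ p * (\<Sum>q\<in>UNIV. ?G q l p * T y j k m q))
      + (\<Sum>p\<in>UNIV. u y $ p * pder l (\<lambda>z. T z j k m p) y)
      - (\<Sum>p\<in>UNIV. u y $ p * (\<Sum>q\<in>UNIV. ?G q l j * T y q k m p))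
      - (\<Sum>p\<in>UNIV. u y $ p * (\<Sum>q\<in>UNIV. ?G q l k * T y j q m p))
      - (\<Sum>p\<in>UNIV. u y $ p * (\<Sum>q\<in>UNIV. ?G q l m * T y j k q p))
      - (\<Sum>p\<in>UNIV. u y $ p * (\<Sum>q\<in>UNIV. ?G q l p * T y j k m q))"
  proof -
    have "(\<Sum>p\<in>UNIV. cov_der_u g u y l p * T y j k m p) = (\<Sum>p\<in>UNIV. pder l (\<lambda>z. u z $ p) y * T y j k m p)
        + (\<Sum>p\<in>UNIV. (\<Sum>q\<in>UNIV. ?G p l q * u y $ q) * T y j k m p)"
      unfolding cov_der_u_def by (simp add: distrib_right sum.distrib)
    moreover have "(\<Sum>p\<in>UNIV. u y $ p * cov_der4 g T y l j k m p) = (\<Sum>p\<in>UNIV. u y $ p * pder l (\<lambda>z. T z j k m p) y)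
      - (\<Sum>p\<in>UNIV. u y $ p * (\<Sum>q\<in>UNIV. ?G q l j * T y q k m p))
      - (\<Sum>p\<in>UNIV. u y $ p * (\<Sum>q\<in>UNIV. ?G q l k * T y j q m p))
      - (\<Sum>p\<in>UNIV. u y $ p * (\<Sum>q\<in>UNIV. ?G q l m * T y j k q p))
      - (\<Sum>p\<in>UNIV. u y $ p * (\<Sum>q\<in>UNIV. ?G q l p * T y j k m q))"
      unfolding cov_der4_def by (simp add: sum.distrib sum_subtractf ring_distribs)
    ultimately show ?thesis unfolding e4 by (simp add: algebra_simps)
  qed
  show ?thesis unfolding L R by (simp add: algebra_simps)
qed

lemma cov_der3_cong:
  assumes y: "y \<in> U" and eq: "\<And>z j k m. z \<in> U \<Longrightarrow> T z j k m = S z j k m"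
  shows "cov_der3 g T y p j k m = cov_der3 g S y p j k m"
proof -
  have "pder p (\<lambda>z. T z j k m) y = pder p (\<lambda>z. S z j k m) y" by (rule pder_cong_open[OF U_open y]) (simp add: eq)
  then show ?thesis unfolding cov_der3_def using eq[OF y] by simp
qed

lemma cov_der3_mult1: "y \<in> U \<Longrightarrow> (\<And>k m. smooth_fn U (\<lambda>z. A z k m)) \<Longrightarrow> (\<And>j. smooth_fn U (\<lambda>z. B z j)) \<Longrightarrow>
  cov_der3 g (\<lambda>z j k m. A z k m * B z j) y l j k m = cov_der2 g A y l k m * B y j + A y k m * cov_der1 g B y l j"
  unfolding cov_der3_def cov_der2_def cov_der1_def
  by (simp add: pder_smooth_rules sum.distrib sum_subtractf sum_distrib_left sum_distrib_right algebra_simps)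

lemma cov_der3_mult2: "y \<in> U \<Longrightarrow> (\<And>k m. smooth_fn U (\<lambda>z. A z k m)) \<Longrightarrow> (\<And>j. smooth_fn U (\<lambda>z. B z j)) \<Longrightarrow>
  cov_der3 g (\<lambda>z j k m. A z j m * B z k) y l j k m = cov_der2 g A y l j m * B y k + A y j m * cov_der1 g B y l k"
  unfolding cov_der3_def cov_der2_def cov_der1_def
  by (simp add: pder_smooth_rules sum.distrib sum_subtractf sum_distrib_left sum_distrib_right algebra_simps)

lemma cov_der3_diff: "y \<in> U \<Longrightarrow> (\<And>j k m. smooth_fn U (\<lambda>z. A z j k m)) \<Longrightarrow> (\<And>j k m. smooth_fn U (\<lambda>z. B z j k m)) \<Longrightarrow>
  cov_der3 g (\<lambda>z j k m. A z j k m - B z j k m) y l j k m = cov_der3 g A y l j k m - cov_der3 g B y l j k m"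
  unfolding cov_der3_def by (simp add: pder_smooth_rules sum.distrib sum_subtractf algebra_simps)

lemma cov_der4_add: "y \<in> U \<Longrightarrow> (\<And>i k l m. smooth_fn U (\<lambda>z. A z i k l m)) \<Longrightarrow> (\<And>i k l m. smooth_fn U (\<lambda>z. B z i k l m)) \<Longrightarrow>
  cov_der4 g (\<lambda>z i k l m. A z i k l m + B z i k l m) y p i k l m = cov_der4 g A y p i k l m + cov_der4 g B y p i k l m"
  unfolding cov_der4_def by (simp add: pder_smooth_rules smooth_intros sum.distrib algebra_simps)

lemma dir_der4_add: "y \<in> U \<Longrightarrow> (\<And>i k l m. smooth_fn U (\<lambda>z. A z i k l m)) \<Longrightarrow> (\<And>i k l m. smooth_fn U (\<lambda>z. B z i k l m)) \<Longrightarrow>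
  dir_der4 g u (\<lambda>z i k l m. A z i k l m + B z i k l m) y i k l m = dir_der4 g u A y i k l m + dir_der4 g u B y i k l m"
proof -
  assume y: "y \<in> U" and A: "\<And>i k l m. smooth_fn U (\<lambda>z. A z i k l m)" and B: "\<And>i k l m. smooth_fn U (\<lambda>z. B z i k l m)"
  show ?thesis unfolding dir_der4_def cov_der4_add[OF y A B] by (simp add: sum.distrib distrib_left)
qed

lemma cov_der4_kulkarni_nomizu: "y \<in> U \<Longrightarrow> (\<And>a b. smooth_fn U (\<lambda>z. P z a b)) \<Longrightarrow> (\<And>a b. smooth_fn U (\<lambda>z. Q z a b)) \<Longrightarrow>
  cov_der4 g (\<lambda>z. kulkarni_nomizu (P z) (Q z)) y p i k l m = kulkarni_nomizu (cov_der2 g P y p) (Q y) i k l m + kulkarni_nomizu (P y) (cov_der2 g Q y p) i k l m"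
  unfolding cov_der4_def kulkarni_nomizu_def cov_der2_def
  by (simp add: pder_smooth_rules smooth_intros sum.distrib sum_subtractf sum_distrib_left sum_distrib_right algebra_simps)

lemma dir_der4_kulkarni_nomizu: "y \<in> U \<Longrightarrow> (\<And>a b. smooth_fn U (\<lambda>z. P z a b)) \<Longrightarrow> (\<And>a b. smooth_fn U (\<lambda>z. Q z a b)) \<Longrightarrow>
  dir_der4 g u (\<lambda>z. kulkarni_nomizu (P z) (Q z)) y i k l m = kulkarni_nomizu (dir_der2 g u P y) (Q y) i k l m + kulkarni_nomizu (P y) (dir_der2 g u Q y) i k l m"
  unfolding dir_der4_def dir_der2_def by (simp add: cov_der4_kulkarni_nomizu kulkarni_nomizu_def sum.distrib sum_subtractf sum_distrib_left sum_distrib_right algebra_simps)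

lemma dir_der2_metric: "y \<in> U \<Longrightarrow> dir_der2 g u (\<lambda>z a b. g z $ a $ b) y = (\<lambda>a b. 0)"
  unfolding dir_der2_def by (intro ext) (simp add: cov_der2_metric)

lemma dir_der2_lower_u_sq: "y \<in> U \<Longrightarrow> dir_der2 g u (\<lambda>z a b. lower g u z a * lower g u z b) y = (\<lambda>a b. 0)"
proof (intro ext)
  fix a b assume y: "y \<in> U"
  have "dir_der2 g u (\<lambda>z a b. lower g u z a * lower g u z b) y a b =
     \<phi> y * ((\<Sum>p\<in>UNIV. u y $ p * rest_metric g u y p a) * lower g u y b + lower g u y a * (\<Sum>p\<in>UNIV. u y $ p * rest_metric g u y p b))"
    unfolding dir_der2_def cov_der2_lower_u_sq[OF y] using u_conc y
    by (simp add: rest_metric_def[symmetric] sum.distrib sum_distrib_left sum_distrib_right algebra_simps)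
  then show "dir_der2 g u (\<lambda>z a b. lower g u z a * lower g u z b) y a b = 0" by (simp add: u_rest_metric[OF y])
qed

lemma cov_der4_antisym12:
  assumes y: "y \<in> U" and T: "\<And>z i k l m. z \<in> U \<Longrightarrow> T z i k l m = - T z k i l m"
    and gT: "\<And>i k l m. smooth_fn U (\<lambda>z. T z i k l m)"
  shows "cov_der4 g T y p i k l m = - cov_der4 g T y p k i l m"
proof -
  have "pder p (\<lambda>z. T z i k l m) y = pder p (\<lambda>z. - T z k i l m) y" by (rule pder_cong_open[OF U_open y]) (rule T)
  also have "\<dots> = - pder p (\<lambda>z. T z k i l m) y" using y gT by (simp add: pder_smooth_rules)
  finally have d: "pder p (\<lambda>z. T z i k l m) y = - pder p (\<lambda>z. T z k i l m) y" .
  have "\<And>q. T y q k l m = - T y k q l m" "\<And>q. T y i q l m = - T y q i l m"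
    "\<And>q. T y i k q m = - T y k i q m" "\<And>q. T y i k l q = - T y k i l q" using T[OF y] by blast+
  then show ?thesis unfolding cov_der4_def d by (simp add: sum.distrib sum_negf[symmetric] algebra_simps)
qed

lemma cov_der4_antisym34:
  assumes y: "y \<in> U" and T: "\<And>z i k l m. z \<in> U \<Longrightarrow> T z i k l m = - T z i k m l"
    and gT: "\<And>i k l m. smooth_fn U (\<lambda>z. T z i k l m)"
  shows "cov_der4 g T y p i k l m = - cov_der4 g T y p i k m l"
proof -
  have "pder p (\<lambda>z. T z i k l m) y = pder p (\<lambda>z. - T z i k m l) y" by (rule pder_cong_open[OF U_open y]) (rule T)
  also have "\<dots> = - pder p (\<lambda>z. T z i k m l) y" using y gT by (simp add: pder_smooth_rules)
  finally have d: "pder p (\<lambda>z. T z i k l m) y = - pder p (\<lambda>z. T z i k m l) y" .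
  have "\<And>q. T y q k l m = - T y q k m l" "\<And>q. T y i q l m = - T y i q m l"
    "\<And>q. T y i k q m = - T y i k m q" "\<And>q. T y i k l q = - T y i k q l" using T[OF y] by blast+
  then show ?thesis unfolding cov_der4_def d by (simp add: sum.distrib sum_negf[symmetric] algebra_simps)
qed

lemma cov_der4_first_bianchi:
  assumes y: "y \<in> U" and T: "\<And>z i k l m. z \<in> U \<Longrightarrow> T z i k l m + T z k l i m + T z l i k m = 0"
    and gT: "\<And>i k l m. smooth_fn U (\<lambda>z. T z i k l m)"
  shows "cov_der4 g T y p i k l m + cov_der4 g T y p k l i m + cov_der4 g T y p l i k m = 0"
proof -
  have "pder p (\<lambda>z. T z i k l m) y + pder p (\<lambda>z. T z k l i m) y + pder p (\<lambda>z. T z l i k m) y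
      = pder p (\<lambda>z. T z i k l m + T z k l i m + T z l i k m) y" using y gT by (simp add: pder_smooth_rules smooth_intros)
  also have "\<dots> = pder p (\<lambda>z. 0) y" by (rule pder_cong_open[OF U_open y]) (simp add: T)
  finally have d: "pder p (\<lambda>z. T z i k l m) y + pder p (\<lambda>z. T z k l i m) y + pder p (\<lambda>z. T z l i k m) y = 0"
    by (simp add: pder_const)
  have z: "\<And>a b c d. T y a b c d + T y b c a d + T y c a b d = 0" using T[OF y] .
  have s: "(\<Sum>q\<in>UNIV. christ g y q p i * (T y q k l m + T y k l q m + T y l q k m)
    + christ g y q p k * (T y i q l m + T y q l i m + T y l i q m)
    + christ g y q p l * (T y i k q m + T y k q i m + T y q i k m)
    + christ g y q p m * (T y i k l q + T y k l i q + T y l i k q)) = 0"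
    using z by simp
  show ?thesis using d s unfolding cov_der4_def
    by (simp add: sum.distrib sum_subtractf ring_distribs algebra_simps)
qed

lemma gen_curv_cov_der4:
  assumes y: "y \<in> U" and T: "\<And>z. z \<in> U \<Longrightarrow> gen_curv (T z)"
    and gT: "\<And>i k l m. smooth_fn U (\<lambda>z. T z i k l m)"
  shows "gen_curv (\<lambda>i k l m. cov_der4 g T y p i k l m)"
  by (rule gen_curvI) (intro cov_der4_antisym12 cov_der4_antisym34 cov_der4_first_bianchi y gT gen_curvD[OF T]; assumption)+

lemma gen_curv_dir_der4:
  assumes y: "y \<in> U" and T: "\<And>z. z \<in> U \<Longrightarrow> gen_curv (T z)"
    and gT: "\<And>i k l m. smooth_fn U (\<lambda>z. T z i k l m)"
  shows "gen_curv (dir_der4 g u T y)"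
proof (rule gen_curvI)
  fix i k l m
  note G = gen_curv_cov_der4[OF y T gT]
  have g1: "\<And>p. cov_der4 g T y p i k l m = - cov_der4 g T y p k i l m" using gen_curvD(1)[OF G] .
  have g2: "\<And>p. cov_der4 g T y p i k l m = - cov_der4 g T y p i k m l" using gen_curvD(2)[OF G] .
  have g4: "\<And>p. cov_der4 g T y p i k l m + cov_der4 g T y p k l i m + cov_der4 g T y p l i k m = 0"
    using gen_curvD(4)[OF G] .
  show "dir_der4 g u T y i k l m = - dir_der4 g u T y k i l m" unfolding dir_der4_def
    by (simp add: g1 sum_negf[symmetric])
  show "dir_der4 g u T y i k l m = - dir_der4 g u T y i k m l" unfolding dir_der4_def
    by (simp add: g2 sum_negf[symmetric])
  have "dir_der4 g u T y i k l m + dir_der4 g u T y k l i m + dir_der4 g u T y l i k m =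
     (\<Sum>p\<in>UNIV. u y $ p * (cov_der4 g T y p i k l m + cov_der4 g T y p k l i m + cov_der4 g T y p l i k m))"
    unfolding dir_der4_def by (simp add: sum.distrib distrib_left)
  then show "dir_der4 g u T y i k l m + dir_der4 g u T y k l i m + dir_der4 g u T y l i k m = 0" by (simp add: g4)
qed

lemma cov_der3_zero: "y \<in> U \<Longrightarrow> (\<And>z j k m. z \<in> U \<Longrightarrow> T z j k m = 0) \<Longrightarrow> cov_der3 g T y p j k m = 0"
proof -
  assume y: "y \<in> U" and T: "\<And>z j k m. z \<in> U \<Longrightarrow> T z j k m = 0"
  have "cov_der3 g T y p j k m = cov_der3 g (\<lambda>z j k m. 0) y p j k m" by (rule cov_der3_cong[OF y T])
  then show ?thesis unfolding cov_der3_def by (simp add: pder_const)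
qed

lemma u_dir_der4:
  assumes y: "y \<in> U" and T: "\<And>z j k l. z \<in> U \<Longrightarrow> (\<Sum>m\<in>UNIV. u z $ m * T z j k l m) = 0"
    and gT: "\<And>i k l m. smooth_fn U (\<lambda>z. T z i k l m)"
  shows "(\<Sum>m\<in>UNIV. u y $ m * dir_der4 g u T y j k l m) = 0"
proof -
  have c: "(\<Sum>m\<in>UNIV. u y $ m * cov_der4 g T y p j k l m) = - (\<Sum>m\<in>UNIV. cov_der_u g u y p m * T y j k l m)" for p
    using cov_der3_contract_u[OF y gT, where l=p and j=j and k=k and m=l] cov_der3_zero[OF y, of "\<lambda>z j k l. \<Sum>m\<in>UNIV. u z $ m * T z j k l m" p j k l] T
    by simp
  have "(\<Sum>m\<in>UNIV. u y $ m * dir_der4 g u T y j k l m) = (\<Sum>p\<in>UNIV. u y $ p * (\<Sum>m\<in>UNIV. u y $ m * cov_der4 g T y p j k l m))"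
    unfolding dir_der4_def by (simp only: sum_distrib_left, rule sum_swap_cong, simp add: mult_ac)
  also have "\<dots> = - (\<Sum>m\<in>UNIV. (\<Sum>p\<in>UNIV. u y $ p * cov_der_u g u y p m) * T y j k l m)"
    unfolding c by (simp only: sum_distrib_left sum_distrib_right sum_negf mult_minus_right, subst sum_swap_cong, auto simp: mult_ac)
  also have "\<dots> = 0" by (simp add: u_cov_der_u[OF y])
  finally show ?thesis .
qed

lemma pder_ginv_mult_g: "y \<in> U \<Longrightarrow>
    (\<Sum>b\<in>UNIV. pder p (\<lambda>z. ginv g z a b) y * g y $ b $ c) = - (\<Sum>b\<in>UNIV. ginv g y a b * pder p (\<lambda>z. g z $ b $ c) y)"
proof -
  assume y: "y \<in> U"
  have "pder p (\<lambda>z. \<Sum>b\<in>UNIV. ginv g z a b * g z $ b $ c) y = pder p (\<lambda>z. if a = c then 1 else 0) y"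
    by (rule pder_cong_open[OF U_open y]) (simp add: ginv_g)
  then have "(\<Sum>b\<in>UNIV. pder p (\<lambda>z. ginv g z a b) y * g y $ b $ c + ginv g y a b * pder p (\<lambda>z. g z $ b $ c) y) = 0"
    using y by (simp add: pder_smooth_rules smooth_intros smooth_g smooth_ginv pder_const)
  then show ?thesis by (simp add: sum.distrib eq_neg_iff_add_eq_0)
qed

lemma ginv_pder_g_ginv: "y \<in> U \<Longrightarrow>
    (\<Sum>c\<in>UNIV. (\<Sum>b\<in>UNIV. ginv g y a b * pder p (\<lambda>z. g z $ b $ c) y) * ginv g y c d)
     = (\<Sum>b\<in>UNIV. ginv g y a b * christ g y d p b) + (\<Sum>c\<in>UNIV. christ g y a p c * ginv g y c d)"
proof -
  assume y: "y \<in> U"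
  let ?G = "christ g y" and ?H = "ginv g y"
  have "(\<Sum>c\<in>UNIV. (\<Sum>b\<in>UNIV. ?H a b * pder p (\<lambda>z. g z $ b $ c) y) * ?H c d)
    = (\<Sum>c\<in>UNIV. \<Sum>b\<in>UNIV. \<Sum>q\<in>UNIV. ?H a b * ?G q p b * g y $ q $ c * ?H c d)
    + (\<Sum>c\<in>UNIV. \<Sum>b\<in>UNIV. \<Sum>q\<in>UNIV. ?H a b * ?G q p c * g y $ b $ q * ?H c d)"
    unfolding pder_g_christ[OF y] by (simp add: sum.distrib sum_distrib_left sum_distrib_right ring_distribs mult_ac)
  also have "(\<Sum>c\<in>UNIV. \<Sum>b\<in>UNIV. \<Sum>q\<in>UNIV. ?H a b * ?G q p b * g y $ q $ c * ?H c d)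
     = (\<Sum>b\<in>UNIV. \<Sum>q\<in>UNIV. ?H a b * ?G q p b * (\<Sum>c\<in>UNIV. g y $ q $ c * ?H c d))"
    by (subst sum_rotate3) (simp add: sum_distrib_left mult_ac)
  also have "\<dots> = (\<Sum>b\<in>UNIV. ?H a b * ?G d p b)" using g_ginv[OF y] by simp
  also have "(\<Sum>c\<in>UNIV. \<Sum>b\<in>UNIV. \<Sum>q\<in>UNIV. ?H a b * ?G q p c * g y $ b $ q * ?H c d)
     = (\<Sum>c\<in>UNIV. \<Sum>q\<in>UNIV. (\<Sum>b\<in>UNIV. ?H a b * g y $ b $ q) * ?G q p c * ?H c d)"
    by (subst sum_swap23) (intro sum.cong refl, simp add: sum_distrib_left sum_distrib_right mult_ac)
  also have "\<dots> = (\<Sum>c\<in>UNIV. ?G a p c * ?H c d)" using ginv_g[OF y] by (simp add: mult.assoc)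
  finally show ?thesis .
qed

lemma pder_ginv: "y \<in> U \<Longrightarrow> pder p (\<lambda>z. ginv g z a d) y =
    - (\<Sum>b\<in>UNIV. ginv g y a b * christ g y d p b) - (\<Sum>c\<in>UNIV. christ g y a p c * ginv g y c d)"
proof -
  assume y: "y \<in> U"
  have "(\<Sum>c\<in>UNIV. (\<Sum>b\<in>UNIV. pder p (\<lambda>z. ginv g z a b) y * g y $ b $ c) * ginv g y c d)
      = (\<Sum>b\<in>UNIV. pder p (\<lambda>z. ginv g z a b) y * (\<Sum>c\<in>UNIV. g y $ b $ c * ginv g y c d))"
    by (simp only: sum_distrib_left sum_distrib_right, rule sum_swap_cong, simp add: mult_ac)
  then have "pder p (\<lambda>z. ginv g z a d) y
      = (\<Sum>c\<in>UNIV. (\<Sum>b\<in>UNIV. pder p (\<lambda>z. ginv g z a b) y * g y $ b $ c) * ginv g y c d)"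
    using g_ginv[OF y] by simp
  also have "\<dots> = - (\<Sum>c\<in>UNIV. (\<Sum>b\<in>UNIV. ginv g y a b * pder p (\<lambda>z. g z $ b $ c) y) * ginv g y c d)"
    unfolding pder_ginv_mult_g[OF y] by (simp add: sum_negf)
  finally show ?thesis unfolding ginv_pder_g_ginv[OF y] by simp
qed

lemma ginv_pder_trace13:
  assumes y: "y \<in> U" and T: "\<And>z k m. z \<in> U \<Longrightarrow> (\<Sum>a\<in>UNIV. \<Sum>c\<in>UNIV. ginv g z a c * T z a k c m) = 0"
    and gT: "\<And>i k l m. smooth_fn U (\<lambda>z. T z i k l m)"
  shows "(\<Sum>a\<in>UNIV. \<Sum>c\<in>UNIV. ginv g y a c * pder p (\<lambda>z. T z a k c m) y)
    = (\<Sum>a\<in>UNIV. \<Sum>c\<in>UNIV. \<Sum>b\<in>UNIV. ginv g y a b * christ g y c p b * T y a k c m)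
    + (\<Sum>a\<in>UNIV. \<Sum>c\<in>UNIV. \<Sum>b\<in>UNIV. christ g y a p b * ginv g y b c * T y a k c m)"
proof -
  have "pder p (\<lambda>z. \<Sum>a\<in>UNIV. \<Sum>c\<in>UNIV. ginv g z a c * T z a k c m) y = pder p (\<lambda>z. 0) y"
    by (rule pder_cong_open[OF U_open y]) (rule T)
  moreover have "pder p (\<lambda>z. \<Sum>a\<in>UNIV. \<Sum>c\<in>UNIV. ginv g z a c * T z a k c m) y =
     (\<Sum>a\<in>UNIV. \<Sum>c\<in>UNIV. pder p (\<lambda>z. ginv g z a c) y * T y a k c m)
     + (\<Sum>a\<in>UNIV. \<Sum>c\<in>UNIV. ginv g y a c * pder p (\<lambda>z. T z a k c m) y)"
    using y gT by (simp add: pder_smooth_rules smooth_intros smooth_ginv sum.distrib)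
  moreover have "(\<Sum>a\<in>UNIV. \<Sum>c\<in>UNIV. pder p (\<lambda>z. ginv g z a c) y * T y a k c m)
    = - (\<Sum>a\<in>UNIV. \<Sum>c\<in>UNIV. \<Sum>b\<in>UNIV. ginv g y a b * christ g y c p b * T y a k c m)
      - (\<Sum>a\<in>UNIV. \<Sum>c\<in>UNIV. \<Sum>b\<in>UNIV. christ g y a p b * ginv g y b c * T y a k c m)"
    unfolding pder_ginv[OF y]
    by (simp add: sum.distrib sum_subtractf sum_distrib_right ring_distribs sum_negf)
  ultimately show ?thesis by (simp add: pder_const)
qed

lemma cov_der4_trace13:
  assumes y: "y \<in> U" and T: "\<And>z k m. z \<in> U \<Longrightarrow> (\<Sum>a\<in>UNIV. \<Sum>c\<in>UNIV. ginv g z a c * T z a k c m) = 0"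
    and gT: "\<And>i k l m. smooth_fn U (\<lambda>z. T z i k l m)"
  shows "(\<Sum>a\<in>UNIV. \<Sum>c\<in>UNIV. ginv g y a c * cov_der4 g T y p a k c m) = 0"
proof -
  let ?G = "christ g y" and ?H = "ginv g y"
  define Z1 where "Z1 = (\<Sum>a\<in>UNIV. \<Sum>c\<in>UNIV. \<Sum>b\<in>UNIV. ?H a b * ?G c p b * T y a k c m)"
  define Z2 where "Z2 = (\<Sum>a\<in>UNIV. \<Sum>c\<in>UNIV. \<Sum>b\<in>UNIV. ?G a p b * ?H b c * T y a k c m)"
  have dT: "(\<Sum>a\<in>UNIV. \<Sum>c\<in>UNIV. ?H a c * pder p (\<lambda>z. T z a k c m) y) = Z1 + Z2"
    unfolding Z1_def Z2_def by (rule ginv_pder_trace13[OF y T gT])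
  have X1: "(\<Sum>a\<in>UNIV. \<Sum>c\<in>UNIV. ?H a c * (\<Sum>q\<in>UNIV. ?G q p a * T y q k c m)) = Z2"
  proof -
    have "(\<Sum>a\<in>UNIV. \<Sum>c\<in>UNIV. ?H a c * (\<Sum>q\<in>UNIV. ?G q p a * T y q k c m)) =
      (\<Sum>a\<in>UNIV. \<Sum>c\<in>UNIV. \<Sum>q\<in>UNIV. ?G q p a * ?H a c * T y q k c m)"
      by (simp add: sum_distrib_left mult_ac)
    also have "\<dots> = Z2" unfolding Z2_def by (rule sum_reverse3)
    finally show ?thesis .
  qed
  have X3: "(\<Sum>a\<in>UNIV. \<Sum>c\<in>UNIV. ?H a c * (\<Sum>q\<in>UNIV. ?G q p c * T y a k q m)) = Z1"
  proof -
    have "(\<Sum>a\<in>UNIV. \<Sum>c\<in>UNIV. ?H a c * (\<Sum>q\<in>UNIV. ?G q p c * T y a k q m)) =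
      (\<Sum>a\<in>UNIV. \<Sum>c\<in>UNIV. \<Sum>q\<in>UNIV. ?H a c * ?G q p c * T y a k q m)"
      by (simp add: sum_distrib_left mult_ac)
    also have "\<dots> = Z1" unfolding Z1_def by (rule sum_swap23)
    finally show ?thesis .
  qed
  have X2: "(\<Sum>a\<in>UNIV. \<Sum>c\<in>UNIV. ?H a c * (\<Sum>q\<in>UNIV. ?G q p k * T y a q c m)) = 0"
    unfolding sum_pull_inner by (simp add: T[OF y])
  have X4: "(\<Sum>a\<in>UNIV. \<Sum>c\<in>UNIV. ?H a c * (\<Sum>q\<in>UNIV. ?G q p m * T y a k c q)) = 0"
    unfolding sum_pull_inner by (simp add: T[OF y])
  have "(\<Sum>a\<in>UNIV. \<Sum>c\<in>UNIV. ?H a c * cov_der4 g T y p a k c m) =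
     (\<Sum>a\<in>UNIV. \<Sum>c\<in>UNIV. ?H a c * pder p (\<lambda>z. T z a k c m) y)
     - (\<Sum>a\<in>UNIV. \<Sum>c\<in>UNIV. ?H a c * (\<Sum>q\<in>UNIV. ?G q p a * T y q k c m))
     - (\<Sum>a\<in>UNIV. \<Sum>c\<in>UNIV. ?H a c * (\<Sum>q\<in>UNIV. ?G q p k * T y a q c m))
     - (\<Sum>a\<in>UNIV. \<Sum>c\<in>UNIV. ?H a c * (\<Sum>q\<in>UNIV. ?G q p c * T y a k q m))
     - (\<Sum>a\<in>UNIV. \<Sum>c\<in>UNIV. ?H a c * (\<Sum>q\<in>UNIV. ?G q p m * T y a k c q))"
    unfolding cov_der4_def by (simp add: sum.distrib sum_subtractf ring_distribs)
  then show ?thesis unfolding X1 X2 X3 X4 dT by simp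
qed

lemma dir_der4_trace13:
  assumes y: "y \<in> U" and T: "\<And>z k m. z \<in> U \<Longrightarrow> (\<Sum>a\<in>UNIV. \<Sum>c\<in>UNIV. ginv g z a c * T z a k c m) = 0"
    and gT: "\<And>i k l m. smooth_fn U (\<lambda>z. T z i k l m)"
  shows "(\<Sum>a\<in>UNIV. \<Sum>c\<in>UNIV. ginv g y a c * dir_der4 g u T y a k c m) = 0"
proof -
  have "(\<Sum>a\<in>UNIV. \<Sum>c\<in>UNIV. ginv g y a c * dir_der4 g u T y a k c m) =
     (\<Sum>p\<in>UNIV. u y $ p * (\<Sum>a\<in>UNIV. \<Sum>c\<in>UNIV. ginv g y a c * cov_der4 g T y p a k c m))"
    unfolding dir_der4_def by (rule sum_pull_inner)
  then show ?thesis using cov_der4_trace13[OF y T gT] by simp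
qed

lemma smooth_xi_form: "smooth_fn U (\<lambda>z. xi_form \<phi> g u z j)"
  unfolding xi_form_def by (intro smooth_intros smooth_phi smooth_lower) (simp add: power2_eq_square; intro smooth_intros smooth_phi)

text \<open>The second Bianchi identity turns \<open>u\<^sup>p \<nabla>\<^sub>p R\<close> into derivatives of the contraction \<open>u\<^sup>p R\<^sub>j\<^sub>k\<^sub>m\<^sub>p\<close>,
  which is known explicitly.\<close>

lemma dir_der4_riem: "y \<in> U \<Longrightarrow> dir_der4 g u (riem g) y j k l m + 2 * \<phi> y * riem g y j k l m =
   cov_der3 g (\<lambda>z j k m. \<Sum>p\<in>UNIV. u z $ p * riem g z j k m p) y m j k l
 - cov_der3 g (\<lambda>z j k m. \<Sum>p\<in>UNIV. u z $ p * riem g z j k m p) y l j k m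
 + \<phi> y * (lower g u y l * (\<Sum>p\<in>UNIV. u y $ p * riem g y j k m p) - lower g u y m * (\<Sum>p\<in>UNIV. u y $ p * riem g y j k l p))"
proof -
  assume y: "y \<in> U"
  define W3 where "W3 = (\<lambda>z j k m. \<Sum>p\<in>UNIV. u z $ p * riem g z j k m p)"
  have an: "cov_der4 g (riem g) y m j k p l = - cov_der4 g (riem g) y m j k l p" for p
    by (rule cov_der4_antisym34[OF y _ smooth_riem]) (rule riem_antisym34)
  have b: "cov_der4 g (riem g) y p j k l m = - cov_der4 g (riem g) y l j k m p + cov_der4 g (riem g) y m j k l p" for p
    using riem_second_bianchi[OF y, of p j k l m] an[of p] by simp
  have c1: "cov_der3 g W3 y l j k m = \<phi> y * (riem g y j k m l + lower g u y l * W3 y j k m) + (\<Sum>p\<in>UNIV. u y $ p * cov_der4 g (riem g) y l j k m p)"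
    unfolding W3_def cov_der3_contract_u[OF y smooth_riem] cov_der_u_contract[OF y] ..
  have c2: "cov_der3 g W3 y m j k l = \<phi> y * (riem g y j k l m + lower g u y m * W3 y j k l) + (\<Sum>p\<in>UNIV. u y $ p * cov_der4 g (riem g) y m j k l p)"
    unfolding W3_def cov_der3_contract_u[OF y smooth_riem] cov_der_u_contract[OF y] ..
  have d: "dir_der4 g u (riem g) y j k l m = - (\<Sum>p\<in>UNIV. u y $ p * cov_der4 g (riem g) y l j k m p) + (\<Sum>p\<in>UNIV. u y $ p * cov_der4 g (riem g) y m j k l p)"
    unfolding dir_der4_def b by (simp add: ring_distribs sum.distrib sum_negf sum_subtractf)
  have r: "riem g y j k m l = - riem g y j k l m" by (rule riem_antisym34)
  show ?thesis using c1 c2 d r by (simp add: W3_def algebra_simps)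
qed

lemma cov_der3_u_riem: "y \<in> U \<Longrightarrow> cov_der3 g (\<lambda>z j k m. \<Sum>p\<in>UNIV. u z $ p * riem g z j k m p) y l j k m =
   \<phi> y * (rest_metric g u y l k * lower g u y m + lower g u y k * rest_metric g u y l m) * xi_form \<phi> g u y j
   + rest_metric g u y k m * cov_der1 g (xi_form \<phi> g u) y l j
   - (\<phi> y * (rest_metric g u y l j * lower g u y m + lower g u y j * rest_metric g u y l m) * xi_form \<phi> g u y k
   + rest_metric g u y j m * cov_der1 g (xi_form \<phi> g u) y l k)"
proof -
  assume y: "y \<in> U"
  have "cov_der3 g (\<lambda>z j k m. \<Sum>p\<in>UNIV. u z $ p * riem g z j k m p) y l j k m =
     cov_der3 g (\<lambda>z j k m. rest_metric g u z k m * xi_form \<phi> g u z j - rest_metric g u z j m * xi_form \<phi> g u z k) y l j k m"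
    by (rule cov_der3_cong[OF y]) (simp add: u_riem_slot4)
  also have "\<dots> = cov_der3 g (\<lambda>z j k m. rest_metric g u z k m * xi_form \<phi> g u z j) y l j k m
      - cov_der3 g (\<lambda>z j k m. rest_metric g u z j m * xi_form \<phi> g u z k) y l j k m"
    by (rule cov_der3_diff[OF y]) (intro smooth_intros smooth_rest_metric smooth_xi_form)+
  also have "\<dots> = (cov_der2 g (rest_metric g u) y l k m * xi_form \<phi> g u y j + rest_metric g u y k m * cov_der1 g (xi_form \<phi> g u) y l j)
      - (cov_der2 g (rest_metric g u) y l j m * xi_form \<phi> g u y k + rest_metric g u y j m * cov_der1 g (xi_form \<phi> g u) y l k)"
    by (simp only: cov_der3_mult1[OF y smooth_rest_metric smooth_xi_form] cov_der3_mult2[OF y smooth_rest_metric smooth_xi_form])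
  finally show ?thesis unfolding cov_der2_rest_metric[OF y] by simp
qed

text \<open>Every term of \<open>u\<^sup>p \<nabla>\<^sub>p R + 2 \<phi> R\<close> either has a factor \<open>v\<close> or is of the form \<open>g \<owedge> \<nabla>X\<close>.\<close>

lemma kn_modulo_riem_term: "y \<in> U \<Longrightarrow> kn_modulo (lower g u y) (\<lambda>a b. g y $ a $ b)
   (\<lambda>j k l m. dir_der4 g u (riem g) y j k l m + 2 * \<phi> y * riem g y j k l m)"
proof -
  assume y: "y \<in> U"
  let ?h = "rest_metric g u y" and ?X = "xi_form \<phi> g u y" and ?Y = "cov_der1 g (xi_form \<phi> g u) y" and ?v = "lower g u y"
  let ?W = "\<lambda>j k m. \<Sum>p\<in>UNIV. u y $ p * riem g y j k m p"
  show ?thesis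
  proof (rule kn_moduloI[where A="\<lambda>a b. ?Y b a"
      and Sa="\<lambda>k l m. - ?v l * ?Y m k + ?v m * ?Y l k - \<phi> y * ?h m l * ?X k + \<phi> y * ?h l m * ?X k"
      and Sb="\<lambda>j l m. ?v l * ?Y m j - ?v m * ?Y l j + \<phi> y * ?h m l * ?X j - \<phi> y * ?h l m * ?X j"
      and Sc="\<lambda>j k m. \<phi> y * (?h m k * ?X j - ?h m j * ?X k) + \<phi> y * ?W j k m"
      and Sd="\<lambda>j k l. - \<phi> y * (?h l k * ?X j - ?h l j * ?X k) - \<phi> y * ?W j k l"])
    fix j k l m
    show "dir_der4 g u (riem g) y j k l m + 2 * \<phi> y * riem g y j k l m = kulkarni_nomizu (\<lambda>a b. g y $ a $ b) (\<lambda>a b. ?Y b a) j k l m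
      + ?v j * (- ?v l * ?Y m k + ?v m * ?Y l k - \<phi> y * ?h m l * ?X k + \<phi> y * ?h l m * ?X k)
      + ?v k * (?v l * ?Y m j - ?v m * ?Y l j + \<phi> y * ?h m l * ?X j - \<phi> y * ?h l m * ?X j)
      + ?v l * (\<phi> y * (?h m k * ?X j - ?h m j * ?X k) + \<phi> y * ?W j k m)
      + ?v m * (- \<phi> y * (?h l k * ?X j - ?h l j * ?X k) - \<phi> y * ?W j k l)"
      unfolding dir_der4_riem[OF y] cov_der3_u_riem[OF y] kulkarni_nomizu_def rest_metric_def by (simp add: algebra_simps)
  qed
qed

lemma kn_modulo_dir_der4_GammaT: "y \<in> U \<Longrightarrow> kn_modulo (lower g u y) (\<lambda>a b. g y $ a $ b)
   (\<lambda>j k l m. dir_der4 g u (GammaT g u) y j k l m + 2 * \<phi> y * GammaT g u y j k l m)"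
proof -
  assume y: "y \<in> U"
  let ?G = "\<lambda>z a b. g z $ a $ b" and ?V = "\<lambda>z a b. lower g u z a * lower g u z b"
  define n where "n = real CARD('n)"
  define Q where "Q z a b = ricci g z a b / (n - 2) - scal g z / ((n - 1) * (n - 2)) / 2 * g z $ a $ b
    - electric g u z a b / (n - 3)" for z a b
  define W where "W z a b = - ((n - 2) / (n - 3)) * electric g u z a b" for z a b
  have Q: "smooth_fn U (\<lambda>z. Q z a b)" and W: "smooth_fn U (\<lambda>z. W z a b)" for a b
    unfolding Q_def W_def by (intro smooth_intros smooth_ricci smooth_scal smooth_g smooth_electric)+
  have GQ: "smooth_fn U (\<lambda>z. kulkarni_nomizu (?G z) (Q z) i k l m)"
    and VW: "smooth_fn U (\<lambda>z. kulkarni_nomizu (?V z) (W z) i k l m)" for i k l m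
    by (intro smooth_kulkarni_nomizu smooth_g smooth_lower_u_sq Q W)+
  have Gamma: "GammaT g u = (\<lambda>z i k l m. riem g z i k l m + kulkarni_nomizu (?G z) (Q z) i k l m
      + kulkarni_nomizu (?V z) (W z) i k l m)"
    by (intro ext) (simp add: GammaT_eq_kulkarni_nomizu weyl_eq_kulkarni_nomizu kulkarni_nomizu_def
        Q_def W_def n_def algebra_simps)
  have "dir_der4 g u (GammaT g u) y j k l m = dir_der4 g u (riem g) y j k l m
      + kulkarni_nomizu (?G y) (dir_der2 g u Q y) j k l m + kulkarni_nomizu (?V y) (dir_der2 g u W y) j k l m"
    for j k l m
    unfolding Gamma
    by (simp add: dir_der4_add[OF y] smooth_riem GQ VW smooth_intros dir_der4_kulkarni_nomizu[OF y]
        smooth_g smooth_lower_u_sq Q W dir_der2_metric[OF y] dir_der2_lower_u_sq[OF y] kulkarni_nomizu_zero_left)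
  then have "dir_der4 g u (GammaT g u) y j k l m + 2 * \<phi> y * GammaT g u y j k l m =
      (dir_der4 g u (riem g) y j k l m + 2 * \<phi> y * riem g y j k l m)
      + 1 * kulkarni_nomizu (?G y) (\<lambda>a b. dir_der2 g u Q y a b + (2 * \<phi> y) * Q y a b) j k l m
      + 1 * kulkarni_nomizu (?V y) (\<lambda>a b. dir_der2 g u W y a b + (2 * \<phi> y) * W y a b) j k l m" for j k l m
    unfolding kulkarni_nomizu_add_right by (simp add: Gamma algebra_simps)
  moreover have "kn_modulo (lower g u y) (?G y) (\<lambda>j k l m. (dir_der4 g u (riem g) y j k l m + 2 * \<phi> y * riem g y j k l m)
      + 1 * kulkarni_nomizu (?G y) (\<lambda>a b. dir_der2 g u Q y a b + (2 * \<phi> y) * Q y a b) j k l m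
      + 1 * kulkarni_nomizu (?V y) (\<lambda>a b. dir_der2 g u W y a b + (2 * \<phi> y) * W y a b) j k l m)"
    by (intro kn_modulo_add kn_modulo_riem_term[OF y] kn_modulo_kulkarni_nomizu kn_modulo_kulkarni_nomizu_square)
  ultimately show ?thesis by (rule kn_modulo_cong[rotated])
qed

lemma kn_modulo_vanishes_at:
  assumes y: "y \<in> U" and T: "gen_curv T" and T_u: "\<And>j k l. (\<Sum>m\<in>UNIV. u y $ m * T j k l m) = 0"
    and T_trace: "\<And>k m. (\<Sum>a\<in>UNIV. \<Sum>c\<in>UNIV. ginv g y a c * T a k c m) = 0"
    and T_kn: "kn_modulo (lower g u y) (\<lambda>a b. g y $ a $ b) T"
  shows "T j k l m = 0"
  by (rule kn_modulo_vanishes[where u="\<lambda>k. u y $ k" and H="ginv g y", OF dim _ rest_metric_sym[OF y]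
        ginv_sym[OF y] ginv_rest_metric[OF y] u_lower_u[OF y] u_rest_metric[OF y] T T_u T_trace T_kn])
     (simp add: rest_metric_def)

lemma u_cov_der4_GammaT: "y \<in> U \<Longrightarrow>
  (\<Sum>p\<in>UNIV. u y $ p * cov_der4 g (GammaT g u) y p j k l m) = - 2 * \<phi> y * GammaT g u y j k l m"
proof -
  assume y: "y \<in> U"
  let ?T = "\<lambda>j k l m. dir_der4 g u (GammaT g u) y j k l m + 2 * \<phi> y * GammaT g u y j k l m"
  have "gen_curv (dir_der4 g u (GammaT g u) y)" by (rule gen_curv_dir_der4[OF y gen_curv_GammaT smooth_GammaT])
  then have T_curv: "gen_curv ?T" by (intro gen_curv_add gen_curv_scale gen_curv_GammaT[OF y])
  have T_u: "(\<Sum>m\<in>UNIV. u y $ m * ?T j k l m) = 0" for j k l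
  proof -
    have "(\<Sum>m\<in>UNIV. u y $ m * ?T j k l m) = (\<Sum>m\<in>UNIV. u y $ m * dir_der4 g u (GammaT g u) y j k l m)
        + 2 * \<phi> y * (\<Sum>m\<in>UNIV. u y $ m * GammaT g u y j k l m)"
      by (simp add: ring_distribs sum.distrib sum_distrib_left mult_ac)
    then show ?thesis using u_dir_der4[OF y u_GammaT smooth_GammaT] u_GammaT[OF y] by simp
  qed
  have T_trace: "(\<Sum>a\<in>UNIV. \<Sum>c\<in>UNIV. ginv g y a c * ?T a k c m) = 0" for k m
  proof -
    have "(\<Sum>a\<in>UNIV. \<Sum>c\<in>UNIV. ginv g y a c * ?T a k c m) = (\<Sum>a\<in>UNIV. \<Sum>c\<in>UNIV. ginv g y a c * dir_der4 g u (GammaT g u) y a k c m)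
        + 2 * \<phi> y * (\<Sum>a\<in>UNIV. \<Sum>c\<in>UNIV. ginv g y a c * GammaT g u y a k c m)"
      by (simp add: ring_distribs sum.distrib sum_distrib_left mult_ac)
    then show ?thesis using dir_der4_trace13[OF y GammaT_trace13 smooth_GammaT] GammaT_trace13[OF y] by simp
  qed
  have "?T j k l m = 0" by (rule kn_modulo_vanishes_at[OF y T_curv T_u T_trace kn_modulo_dir_der4_GammaT[OF y]])
  then show ?thesis unfolding dir_der4_def by simp
qed

end

theorem theorem1p2:
  fixes g :: "real^'n::finite \<Rightarrow> real^'n^'n"
    and u :: "real^'n \<Rightarrow> real^'n"
    and \<phi> :: "real^'n \<Rightarrow> real"
    and U :: "(real^'n) set"
  assumes dim: "CARD('n) > 3"
    and U_open: "open U"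
    and g_smooth: "\<forall>i j. smooth_fn U (\<lambda>x. g x $ i $ j)"
    and g_lor: "\<forall>x\<in>U. lorentzian (g x)"
    and u_smooth: "\<forall>k. smooth_fn U (\<lambda>x. u x $ k)"
    and u_unit: "\<forall>x\<in>U. bform (g x) (u x) (u x) = -1"
    and u_conc: "\<forall>x\<in>U. \<forall>i j. cov_der1 g (lower g u) x i j
                   = \<phi> x * (g x $ i $ j + lower g u x i * lower g u x j)"
  shows "\<forall>x\<in>U. gen_curv (GammaT g u x)
           \<and> totally_traceless (g x) (GammaT g u x)
           \<and> (\<forall>j k l. (\<Sum>m\<in>UNIV. u x $ m * GammaT g u x j k l m) = 0)
           \<and> (\<forall>j k l m. (\<Sum>p\<in>UNIV. u x $ p * cov_der4 g (GammaT g u) x p j k l m)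
                        = - 2 * \<phi> x * GammaT g u x j k l m)"
proof -
  interpret concircular_spacetime g u \<phi> U
    by (unfold_locales) (fact assms)+
  show ?thesis using gen_curv_GammaT totally_traceless_GammaT u_GammaT u_cov_der4_GammaT by blast
qed

end
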